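(* Let $\mathcal{A}$ be a non-negative self-adjoint operator on a Hilbert space $H$ with associated closed form $a$ and form domain $X$, and equip $X$ with the inner product $\langle u,v\rangle_X=\langle(\mathcal{A}^{1/2}+I)u,(\mathcal{A}^{1/2}+I)v\rangle_H$. Assume $\lambda\in\rho(\mathcal{A})$, $\mathcal{R}$ is a bounded linear functional on $(X,\langle\cdot,\cdot\rangle_X)$, and $u\in X$ solves $a(u,v)-\lambda\langle u,v\rangle_H=\mathcal{R}(v)$ for all $v\in X$. Then for some constant $C>0$ (independent of $\mathcal{A}$, $\lambda$, $\mathcal{R}$, $u$), $$\|u\|_X\le C\max\Big\{1,\frac{|\lambda+1|}{\operatorname{dist}(\lambda,\sigma(\mathcal{A}))}\Big\}\|\mathcal{R}\|_{X^*}.$$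
   Context: $\|\cdot\|_{X^*}$ denotes the dual norm with respect to $\langle\cdot,\cdot\rangle_X$; $(X,\langle\cdot,\cdot\rangle_X)$ is a Hilbert space. *)

theory Defs
  imports "HOL-Analysis.Analysis"
begin

section \<open>Complex Hilbert spaces (inner product linear in the SECOND argument)\<close>

class chilbert = ab_group_add +
  fixes cscale :: "complex \<Rightarrow> 'a \<Rightarrow> 'a"
    and hinner :: "'a \<Rightarrow> 'a \<Rightarrow> complex"
  assumes cscale_add_right: "cscale c (x + y) = cscale c x + cscale c y"
    and cscale_add_left: "cscale (c + d) x = cscale c x + cscale d x"
    and cscale_cscale: "cscale c (cscale d x) = cscale (c * d) x"
    and cscale_one: "cscale 1 x = x"
    and hinner_cnj: "hinner x y = cnj (hinner y x)"
    and hinner_add_right: "hinner x (y + z) = hinner x y + hinner x z"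
    and hinner_scale_right: "hinner x (cscale c y) = c * hinner x y"
    and hinner_nonneg: "0 \<le> Re (hinner x x)"
    and hinner_zero: "Re (hinner x x) = 0 \<Longrightarrow> x = 0"
    and hcomplete: "(\<forall>e::real>0. \<exists>N::nat. \<forall>m\<ge>N. \<forall>n\<ge>N. Re (hinner (f m - f n) (f m - f n)) < e)
        \<Longrightarrow> (\<exists>l. \<forall>e::real>0. \<exists>N. \<forall>n\<ge>N. Re (hinner (f n - l) (f n - l)) < e)"

definition hnorm :: "'a::chilbert \<Rightarrow> real" where
  "hnorm x = sqrt (Re (hinner x x))"

definition csubspace :: "'a::chilbert set \<Rightarrow> bool" where
  "csubspace S \<longleftrightarrow> 0 \<in> S \<and> (\<forall>x\<in>S. \<forall>y\<in>S. x + y \<in> S) \<and> (\<forall>c. \<forall>x\<in>S. cscale c x \<in> S)"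

definition dense_set :: "'a::chilbert set \<Rightarrow> bool" where
  "dense_set S \<longleftrightarrow> (\<forall>x. \<forall>e>0. \<exists>y\<in>S. hnorm (x - y) < e)"

section \<open>Unbounded operators, given as a domain D and a map T (values outside D irrelevant)\<close>

definition lin_op :: "'a::chilbert set \<Rightarrow> ('a \<Rightarrow> 'a) \<Rightarrow> bool" where
  "lin_op D T \<longleftrightarrow> csubspace D \<and> (\<forall>x\<in>D. \<forall>y\<in>D. T (x + y) = T x + T y)
     \<and> (\<forall>c. \<forall>x\<in>D. T (cscale c x) = cscale c (T x))"

definition adj_dom :: "'a::chilbert set \<Rightarrow> ('a \<Rightarrow> 'a) \<Rightarrow> 'a set" where
  "adj_dom D T = {y. \<exists>z. \<forall>x\<in>D. hinner (T x) y = hinner x z}"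

definition adj :: "'a::chilbert set \<Rightarrow> ('a \<Rightarrow> 'a) \<Rightarrow> 'a \<Rightarrow> 'a" where
  "adj D T y = (THE z. \<forall>x\<in>D. hinner (T x) y = hinner x z)"

definition self_adjoint :: "'a::chilbert set \<Rightarrow> ('a \<Rightarrow> 'a) \<Rightarrow> bool" where
  "self_adjoint D T \<longleftrightarrow> dense_set D \<and> lin_op D T \<and> adj_dom D T = D \<and> (\<forall>y\<in>D. adj D T y = T y)"

definition nonneg_op :: "'a::chilbert set \<Rightarrow> ('a \<Rightarrow> 'a) \<Rightarrow> bool" where
  "nonneg_op D T \<longleftrightarrow> (\<forall>x\<in>D. Im (hinner x (T x)) = 0 \<and> 0 \<le> Re (hinner x (T x)))"

definition resolvent_set :: "'a::chilbert set \<Rightarrow> ('a \<Rightarrow> 'a) \<Rightarrow> complex set" where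
  "resolvent_set D T = {lam. bij_betw (\<lambda>x. T x - cscale lam x) D UNIV
      \<and> (\<exists>K. \<forall>x\<in>D. hnorm x \<le> K * hnorm (T x - cscale lam x))}"

definition spectrum_op :: "'a::chilbert set \<Rightarrow> ('a \<Rightarrow> 'a) \<Rightarrow> complex set" where
  "spectrum_op D T = - resolvent_set D T"

definition op_sqrt :: "'a::chilbert set \<Rightarrow> ('a \<Rightarrow> 'a) \<Rightarrow> 'a set \<times> ('a \<Rightarrow> 'a)" where
  "op_sqrt D T = (THE (D', S). self_adjoint D' S \<and> nonneg_op D' S
      \<and> D = {x \<in> D'. S x \<in> D'} \<and> (\<forall>x\<in>D. S (S x) = T x) \<and> (\<forall>x. x \<notin> D' \<longrightarrow> S x = 0))"

definition Xnorm :: "'a::chilbert set \<Rightarrow> ('a \<Rightarrow> 'a) \<Rightarrow> 'a \<Rightarrow> real" where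
  "Xnorm D T u = hnorm (snd (op_sqrt D T) u + u)"

definition closed_form :: "'a::chilbert set \<Rightarrow> ('a \<Rightarrow> 'a \<Rightarrow> complex) \<Rightarrow> bool" where
  "closed_form X a \<longleftrightarrow> csubspace X \<and> dense_set X
    \<and> (\<forall>u\<in>X. \<forall>v\<in>X. \<forall>w\<in>X. a u (v + w) = a u v + a u w)
    \<and> (\<forall>c. \<forall>u\<in>X. \<forall>v\<in>X. a u (cscale c v) = c * a u v)
    \<and> (\<forall>u\<in>X. \<forall>v\<in>X. a v u = cnj (a u v))
    \<and> (\<forall>u\<in>X. 0 \<le> Re (a u u))
    \<and> (\<forall>f::nat \<Rightarrow> 'a. (\<forall>n. f n \<in> X) \<longrightarrow>
         (\<forall>e::real>0. \<exists>N::nat. \<forall>m\<ge>N. \<forall>n\<ge>N. Re (a (f m - f n) (f m - f n)) + Re (hinner (f m - f n) (f m - f n)) < e)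
         \<longrightarrow> (\<exists>l\<in>X. \<forall>e::real>0. \<exists>N::nat. \<forall>n\<ge>N. Re (a (f n - l) (f n - l)) + Re (hinner (f n - l) (f n - l)) < e))"

definition assoc_op :: "'a::chilbert set \<Rightarrow> ('a \<Rightarrow> 'a \<Rightarrow> complex) \<Rightarrow> 'a set \<Rightarrow> ('a \<Rightarrow> 'a) \<Rightarrow> bool" where
  "assoc_op X a D T \<longleftrightarrow> D = {u \<in> X. \<exists>f. \<forall>v\<in>X. a u v = hinner f v}
     \<and> (\<forall>u\<in>D. \<forall>v\<in>X. a u v = hinner (T u) v)"

definition bdd_lin_fun :: "'a::chilbert set \<Rightarrow> ('a \<Rightarrow> real) \<Rightarrow> ('a \<Rightarrow> complex) \<Rightarrow> bool" where
  "bdd_lin_fun X N R \<longleftrightarrow> (\<forall>u\<in>X. \<forall>v\<in>X. R (u + v) = R u + R v)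
     \<and> (\<forall>c. \<forall>u\<in>X. R (cscale c u) = c * R u)
     \<and> (\<exists>K. \<forall>u\<in>X. cmod (R u) \<le> K * N u)"

definition dual_norm :: "'a::chilbert set \<Rightarrow> ('a \<Rightarrow> real) \<Rightarrow> ('a \<Rightarrow> complex) \<Rightarrow> real" where
  "dual_norm X N R = Sup {cmod (R v) | v. v \<in> X \<and> N v \<le> 1}"

end

theory Submission
  imports Defs "HOL-Computational_Algebra.Formal_Power_Series"
begin

text \<open>Let \<open>d = dist(\<lambda>, \<sigma>(T))\<close> and \<open>z = (T - \<lambda>)\<inverse> u\<close>. Testing the variational equation with \<open>z\<close>
  gives \<open>||u||\<^sup>2 = |R z| \<le> ||R|| ||z||\<^sub>X\<close>, while \<open>||z||\<^sub>X\<^sup>2 \<le> 2 (a(z,z) + ||z||\<^sup>2)\<close> is controlled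
  by \<open>||u||\<^sup>2 (1/d + (|\<lambda>| + 1)/d\<^sup>2)\<close> because \<open>d ||z|| \<le> ||(T - \<lambda>) z||\<close> for self-adjoint \<open>T\<close>.
  This bounds \<open>||u||\<close>; testing with \<open>u\<close> itself then yields a quadratic inequality for \<open>||u||\<^sub>X\<close>.

  Most of the work goes into the two facts behind this. First, \<open>Xnorm\<close> is defined through the
  unique nonnegative square root of \<open>T\<close>; it is constructed as \<open>E C\<inverse>\<close> with \<open>C = (T + 1)\<^sup>-\<^sup>1\<^sup>/\<^sup>2\<close>
  and \<open>E = (1 - (T + 1)\<inverse>)\<^sup>1\<^sup>/\<^sup>2\<close>, where square roots of positive contractions are given by the
  binomial series of \<open>(1 - z)\<^sup>1\<^sup>/\<^sup>2\<close>. Second, the distance estimate rests on \<open>\<plusminus>||Y||\<close> being an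
  approximate eigenvalue of a bounded Hermitian operator \<open>Y\<close>, applied to the resolvent at real points.\<close>

lemma cscale_zero_left[simp]: "cscale 0 x = 0"
proof -
  have "cscale (0+0) x = cscale 0 x + cscale 0 x" by (rule cscale_add_left)
  then show ?thesis by simp
qed

lemma cscale_zero_right[simp]: "cscale c 0 = 0"
proof -
  have "cscale c (0+0) = cscale c 0 + cscale c 0" by (rule cscale_add_right)
  then show ?thesis by simp
qed

lemma cscale_minus_right: "cscale c (- x) = - cscale c x"
proof -
  have "cscale c (x + - x) = cscale c x + cscale c (-x)" by (rule cscale_add_right)
  then show ?thesis by (simp add: eq_neg_iff_add_eq_0 add.commute)
qed

lemma cscale_diff_right: "cscale c (x - y) = cscale c x - cscale c y"
  using cscale_add_right[of c x "-y"] by (simp add: cscale_minus_right)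

lemma cscale_minus_left: "cscale (- c) x = - cscale c x"
proof -
  have "cscale (c + - c) x = cscale c x + cscale (-c) x" by (rule cscale_add_left)
  then show ?thesis by (simp add: eq_neg_iff_add_eq_0 add.commute)
qed

lemma cscale_diff_left: "cscale (c - d) x = cscale c x - cscale d x"
  using cscale_add_left[of c "-d" x] by (simp add: cscale_minus_left)

lemma cscale_minus_one: "cscale (-1) x = - x"
  by (simp add: cscale_minus_left cscale_one)

lemma cscale_sum: "cscale c (sum f A) = sum (\<lambda>i. cscale c (f i)) A"
  by (induction A rule: infinite_finite_induct) (auto simp: cscale_add_right)

lemma cscale_sum_left: "cscale (sum f A) x = sum (\<lambda>i. cscale (f i) x) A"
  by (induction A rule: infinite_finite_induct) (auto simp: cscale_add_left)

lemma hinner_add_left: "hinner (x + y) z = hinner x z + hinner y z"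
  by (metis hinner_cnj hinner_add_right complex_cnj_add)

lemma hinner_scale_left: "hinner (cscale c x) y = cnj c * hinner x y"
  by (metis hinner_cnj hinner_scale_right complex_cnj_mult)

lemma hinner_zero_right[simp]: "hinner x 0 = 0"
  using hinner_add_right[of x 0 0] by simp

lemma hinner_zero_left[simp]: "hinner 0 x = 0"
  using hinner_add_left[of 0 0 x] by simp

lemma hinner_minus_right: "hinner x (- y) = - hinner x y"
proof -
  have "hinner x y + hinner x (- y) = 0" using hinner_add_right[of x y "-y"] by simp
  then show ?thesis by (simp add: add_eq_0_iff)
qed

lemma hinner_minus_left: "hinner (- x) y = - hinner x y"
proof -
  have "hinner x y + hinner (- x) y = 0" using hinner_add_left[of x "-x" y] by simp
  then show ?thesis by (simp add: add_eq_0_iff)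
qed

lemma hinner_diff_right: "hinner x (y - z) = hinner x y - hinner x z"
  using hinner_add_right[of x y "-z"] by (simp add: hinner_minus_right)

lemma hinner_diff_left: "hinner (x - y) z = hinner x z - hinner y z"
  using hinner_add_left[of x "-y" z] by (simp add: hinner_minus_left)

lemma hinner_sum_right: "hinner x (sum f A) = sum (\<lambda>i. hinner x (f i)) A"
  by (induction A rule: infinite_finite_induct) (auto simp: hinner_add_right)

lemma hinner_sum_left: "hinner (sum f A) x = sum (\<lambda>i. hinner (f i) x) A"
  by (induction A rule: infinite_finite_induct) (auto simp: hinner_add_left)

lemma hinner_self_Im: "Im (hinner x x) = 0"
proof -
  have "hinner x x = cnj (hinner x x)" by (rule hinner_cnj)
  then show ?thesis by (metis cnj.simps(2) neg_equal_zero)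
qed

lemma hinner_self_eq: "hinner x x = complex_of_real (Re (hinner x x))"
  using hinner_self_Im by (simp add: complex_eq_iff)

lemma hinner_self_zero_iff: "hinner x x = 0 \<longleftrightarrow> x = 0"
  by (metis hinner_zero hinner_zero_right zero_complex.simps(1))

lemma quadratic_nonneg_imp_le:
  fixes A B P :: real
  assumes quad: "\<And>s. 0 \<le> A - 2 * s * P + s^2 * P * B" and "0 \<le> A" "0 \<le> B"
  shows "P \<le> A * B"
proof (cases "B = 0")
  case True
  have "\<not> 0 < P"
  proof
    assume "0 < P"
    then have "0 \<le> A - 2 * (A + 1)" using quad[of "(A + 1) / P"] True by simp
    then show False using \<open>0 \<le> A\<close> by simp
  qed
  then show ?thesis using True by simp
next
  case False
  then have "0 < B" using \<open>0 \<le> B\<close> by simp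
  have "0 \<le> A - 2 * (1 / B) * P + (1 / B)^2 * P * B" by (rule quad)
  also have "\<dots> = A - P / B" using \<open>0 < B\<close> by (simp add: power2_eq_square field_simps)
  finally show ?thesis using \<open>0 < B\<close> by (simp add: divide_le_eq mult.commute)
qed

locale herm_form =
  fixes X :: "'a::chilbert set" and b :: "'a \<Rightarrow> 'a \<Rightarrow> complex"
  assumes dom_subspace: "csubspace X"
    and conj_sym: "\<And>u v. u \<in> X \<Longrightarrow> v \<in> X \<Longrightarrow> b v u = cnj (b u v)"
    and add_right: "\<And>u v w. u \<in> X \<Longrightarrow> v \<in> X \<Longrightarrow> w \<in> X \<Longrightarrow> b u (v + w) = b u v + b u w"
    and scale_right: "\<And>c u v. u \<in> X \<Longrightarrow> v \<in> X \<Longrightarrow> b u (cscale c v) = c * b u v"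
    and nonneg: "\<And>u. u \<in> X \<Longrightarrow> 0 \<le> Re (b u u)"
begin

lemma dom_add: "x \<in> X \<Longrightarrow> y \<in> X \<Longrightarrow> x + y \<in> X"
  and dom_scale: "x \<in> X \<Longrightarrow> cscale c x \<in> X"
  using dom_subspace unfolding csubspace_def by auto

lemma dom_minus: "x \<in> X \<Longrightarrow> - x \<in> X"
  using dom_scale[of x "-1"] by (simp add: cscale_minus_one)

lemma dom_diff: "x \<in> X \<Longrightarrow> y \<in> X \<Longrightarrow> x - y \<in> X"
  using dom_add[of x "-y"] dom_minus[of y] by simp

lemma add_left: "u \<in> X \<Longrightarrow> v \<in> X \<Longrightarrow> w \<in> X \<Longrightarrow> b (u + v) w = b u w + b v w"
  using conj_sym add_right dom_add by (metis complex_cnj_add)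

lemma scale_left: "u \<in> X \<Longrightarrow> v \<in> X \<Longrightarrow> b (cscale c u) v = cnj c * b u v"
  using conj_sym scale_right dom_scale by (metis complex_cnj_mult)

lemma self_Im: "u \<in> X \<Longrightarrow> Im (b u u) = 0"
  using conj_sym[of u u] by (metis cnj.simps(2) neg_equal_zero)

lemma self_real: "u \<in> X \<Longrightarrow> b u u = complex_of_real (Re (b u u))"
  using self_Im by (simp add: complex_eq_iff)

lemma minus_right: "u \<in> X \<Longrightarrow> v \<in> X \<Longrightarrow> b u (- v) = - b u v"
  using scale_right[of u v "-1"] by (simp add: cscale_minus_one)

lemma expand_add_scaled:
  assumes "x \<in> X" "y \<in> X"
  shows "Re (b (x + cscale t y) (x + cscale t y)) = Re (b x x) + 2 * Re (t * b x y) + (cmod t)^2 * Re (b y y)"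
proof -
  have yt: "cscale t y \<in> X" using assms dom_scale by auto
  have "b (x + cscale t y) (x + cscale t y) = b x x + b x (cscale t y) + (b (cscale t y) x + b (cscale t y) (cscale t y))"
    using assms yt by (simp add: add_left add_right dom_add)
  also have "\<dots> = b x x + t * b x y + (cnj t * b y x + cnj t * (t * b y y))"
  proof -
    have "b (cscale t y) (cscale t y) = cnj t * b y (cscale t y)" using scale_left assms yt by blast
    also have "\<dots> = cnj t * (t * b y y)" using scale_right assms by simp
    finally show ?thesis using assms by (simp add: scale_right scale_left)
  qed
  also have "\<dots> = b x x + t * b x y + cnj (t * b x y) + (cnj t * t) * b y y"
    using assms conj_sym[of x y] by (simp add: algebra_simps)
  finally have e: "b (x + cscale t y) (x + cscale t y) = b x x + t * b x y + cnj (t * b x y) + (cnj t * t) * b y y" .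
  have "cnj t * t = complex_of_real ((cmod t)^2)"
    by (metis complex_norm_square mult.commute)
  then show ?thesis unfolding e using self_real[OF assms(2)] by simp
qed

lemma cauchy_schwarz_sq:
  assumes "x \<in> X" "y \<in> X"
  shows "(cmod (b x y))^2 \<le> Re (b x x) * Re (b y y)"
proof (rule quadratic_nonneg_imp_le)
  fix s :: real
  define t where "t = - complex_of_real s * cnj (b x y)"
  have "cnj (b x y) * b x y = complex_of_real ((cmod (b x y))^2)"
    using complex_norm_square[of "b x y"] by (simp add: mult.commute)
  then have "t * b x y = - complex_of_real (s * (cmod (b x y))^2)"
    unfolding t_def by (metis minus_mult_left mult.assoc of_real_mult)
  moreover have "cmod t = \<bar>s\<bar> * cmod (b x y)" unfolding t_def by (simp add: norm_mult)
  moreover have "0 \<le> Re (b (x + cscale t y) (x + cscale t y))" using nonneg assms dom_add dom_scale by auto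
  ultimately show "0 \<le> Re (b x x) - 2 * s * (cmod (b x y))^2 + s^2 * (cmod (b x y))^2 * Re (b y y)"
    using expand_add_scaled[OF assms, of t] by (simp add: power_mult_distrib)
qed (use nonneg assms in auto)

lemma cauchy_schwarz:
  assumes "x \<in> X" "y \<in> X"
  shows "cmod (b x y) \<le> sqrt (Re (b x x)) * sqrt (Re (b y y))"
proof -
  have "cmod (b x y) = sqrt ((cmod (b x y))^2)" by simp
  also have "\<dots> \<le> sqrt (Re (b x x) * Re (b y y))" using cauchy_schwarz_sq[OF assms] real_sqrt_le_mono by blast
  also have "\<dots> = sqrt (Re (b x x)) * sqrt (Re (b y y))" by (simp add: real_sqrt_mult)
  finally show ?thesis .
qed

definition seminorm :: "'a \<Rightarrow> real" where "seminorm x = sqrt (Re (b x x))"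

lemma seminorm_nonneg: "x \<in> X \<Longrightarrow> 0 \<le> seminorm x" unfolding seminorm_def using nonneg by simp

lemma seminorm_sq: "x \<in> X \<Longrightarrow> (seminorm x)^2 = Re (b x x)"
  unfolding seminorm_def using nonneg real_sqrt_pow2 by blast

lemma seminorm_triangle:
  assumes "x \<in> X" "y \<in> X"
  shows "seminorm (x + y) \<le> seminorm x + seminorm y"
proof -
  have "Re (b (x + y) (x + y)) = Re (b x x) + 2 * Re (b x y) + Re (b y y)"
    using expand_add_scaled[OF assms, of 1] by (simp add: cscale_one)
  also have "\<dots> \<le> (seminorm x)^2 + 2 * (seminorm x * seminorm y) + (seminorm y)^2"
  proof -
    have "Re (b x y) \<le> cmod (b x y)" by (rule complex_Re_le_cmod)
    also have "\<dots> \<le> seminorm x * seminorm y" unfolding seminorm_def by (rule cauchy_schwarz[OF assms])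
    finally show ?thesis using seminorm_sq assms by simp
  qed
  also have "\<dots> = (seminorm x + seminorm y)^2" by (simp add: power2_eq_square algebra_simps)
  finally have "(seminorm (x+y))^2 \<le> (seminorm x + seminorm y)^2" using seminorm_sq assms dom_add by simp
  then show ?thesis using seminorm_nonneg assms by (meson power2_le_imp_le add_nonneg_nonneg)
qed

lemma minus_left: "u \<in> X \<Longrightarrow> v \<in> X \<Longrightarrow> b (- u) v = - b u v"
  using scale_left[of u v "-1"] by (simp add: cscale_minus_one)

lemma seminorm_minus: "x \<in> X \<Longrightarrow> seminorm (- x) = seminorm x"
  unfolding seminorm_def using minus_left[of x "-x"] minus_right[of x x] dom_minus by simp

lemma seminorm_diff_triangle: "x \<in> X \<Longrightarrow> y \<in> X \<Longrightarrow> \<bar>seminorm x - seminorm y\<bar> \<le> seminorm (x - y)"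
proof -
  assume a: "x \<in> X" "y \<in> X"
  have "seminorm x \<le> seminorm (x - y) + seminorm y" using seminorm_triangle[of "x - y" y] a dom_diff by simp
  moreover have "seminorm y \<le> seminorm (y - x) + seminorm x" using seminorm_triangle[of "y - x" x] a dom_diff by simp
  moreover have "seminorm (y - x) = seminorm (x - y)" using seminorm_minus[of "x - y"] a dom_diff by simp
  ultimately show ?thesis by linarith
qed

end

lemma hinner_herm_form: "herm_form UNIV (hinner :: 'a::chilbert \<Rightarrow> _)"
proof
  show "csubspace (UNIV :: 'a set)" by (simp add: csubspace_def)
qed (auto simp: hinner_add_right hinner_scale_right hinner_nonneg intro: hinner_cnj)

interpretation H: herm_form UNIV hinner by (rule hinner_herm_form)

lemma H_seminorm_eq_hnorm: "H.seminorm = hnorm"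
  by (auto simp: H.seminorm_def hnorm_def fun_eq_iff)

lemma hnorm_nonneg[simp]: "0 \<le> hnorm x" unfolding hnorm_def using hinner_nonneg real_sqrt_ge_zero by blast

lemma hnorm_sq: "(hnorm x)^2 = Re (hinner x x)"
  unfolding hnorm_def using hinner_nonneg real_sqrt_pow2 by blast

lemma hinner_self_hnorm: "hinner x x = complex_of_real ((hnorm x)^2)"
  by (metis hinner_self_eq hnorm_sq)

lemma hnorm_zero_iff[simp]: "hnorm x = 0 \<longleftrightarrow> x = 0"
  by (metis hinner_self_hnorm hinner_self_zero_iff of_real_eq_0_iff zero_less_power2 less_numeral_extra(3) hinner_zero_right)

lemma hnorm_zero[simp]: "hnorm 0 = 0" by simp

lemma hnorm_pos: "x \<noteq> 0 \<Longrightarrow> 0 < hnorm x"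
  using hnorm_nonneg hnorm_zero_iff by (metis less_eq_real_def)

lemma cauchy_schwarz: "cmod (hinner x y) \<le> hnorm x * hnorm y"
  using H.cauchy_schwarz[of x y] by (simp add: hnorm_def)

lemma hnorm_triangle: "hnorm (x + y) \<le> hnorm x + hnorm y"
  using H.seminorm_triangle[of x y] by (simp add: H_seminorm_eq_hnorm)

lemma hnorm_minus: "hnorm (- x) = hnorm x"
  using H.seminorm_minus[of x] by (simp add: H_seminorm_eq_hnorm)

lemma hnorm_commute: "hnorm (x - y) = hnorm (y - x)"
  by (metis hnorm_minus minus_diff_eq)

lemma hnorm_diff_triangle: "\<bar>hnorm x - hnorm y\<bar> \<le> hnorm (x - y)"
  using H.seminorm_diff_triangle[of x y] by (simp add: H_seminorm_eq_hnorm)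

lemma hnorm_triangle_diff: "hnorm (x - z) \<le> hnorm (x - y) + hnorm (y - z)"
  using hnorm_triangle[of "x - y" "y - z"] by simp

lemma hnorm_scale: "hnorm (cscale c x) = cmod c * hnorm x"
proof -
  have "(hnorm (cscale c x))^2 = Re (c * (cnj c * hinner x x))"
    unfolding hnorm_sq by (simp only: hinner_scale_left hinner_scale_right)
  also have "c * (cnj c * hinner x x) = (c * cnj c) * hinner x x" by (rule mult.assoc[symmetric])
  also have "\<dots> = complex_of_real ((cmod c)^2) * complex_of_real ((hnorm x)^2)"
    by (simp only: complex_norm_square hinner_self_hnorm)
  also have "\<dots> = complex_of_real ((cmod c)^2 * (hnorm x)^2)" by (rule of_real_mult[symmetric])
  also have "Re (complex_of_real ((cmod c)^2 * (hnorm x)^2)) = (cmod c * hnorm x)^2" by (simp add: power_mult_distrib)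
  finally show ?thesis
    by (metis hnorm_nonneg norm_ge_zero power2_eq_imp_eq zero_le_mult_iff)
qed

lemma hnorm_sum: "hnorm (sum f A) \<le> sum (\<lambda>i. hnorm (f i)) A"
  by (induction A rule: infinite_finite_induct) (auto intro: order_trans[OF hnorm_triangle])

definition hlim :: "(nat \<Rightarrow> 'a::chilbert) \<Rightarrow> 'a \<Rightarrow> bool" where
  "hlim f l \<longleftrightarrow> (\<lambda>n. hnorm (f n - l)) \<longlonglongrightarrow> 0"

definition hcauchy :: "(nat \<Rightarrow> 'a::chilbert) \<Rightarrow> bool" where
  "hcauchy f \<longleftrightarrow> (\<forall>e>0. \<exists>N. \<forall>m\<ge>N. \<forall>n\<ge>N. hnorm (f m - f n) < e)"

lemma hlimI: "(\<And>e. e > 0 \<Longrightarrow> \<exists>N. \<forall>n\<ge>N. hnorm (f n - l) < e) \<Longrightarrow> hlim f l"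
  unfolding hlim_def by (rule LIMSEQ_I) simp

lemma hlimD: "hlim f l \<Longrightarrow> e > 0 \<Longrightarrow> \<exists>N. \<forall>n\<ge>N. hnorm (f n - l) < e"
  unfolding hlim_def using LIMSEQ_D by fastforce

lemma hlim_bound:
  assumes "\<And>n. hnorm (f n - l) \<le> g n" "g \<longlonglongrightarrow> 0"
  shows "hlim f l"
  unfolding hlim_def
  by (rule tendsto_sandwich[of "\<lambda>_. 0" _ _ g]) (use assms in auto)

lemma hlim_const: "hlim (\<lambda>n. x) x" by (simp add: hlim_def)

lemma hlim_add: "hlim f l \<Longrightarrow> hlim g m \<Longrightarrow> hlim (\<lambda>n. f n + g n) (l + m)"
proof -
  assume a: "hlim f l" "hlim g m"
  have "(\<lambda>n. hnorm (f n - l) + hnorm (g n - m)) \<longlonglongrightarrow> 0 + 0"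
    using a unfolding hlim_def by (rule tendsto_add)
  moreover have "hnorm (f n + g n - (l + m)) \<le> hnorm (f n - l) + hnorm (g n - m)" for n
    using hnorm_triangle[of "f n - l" "g n - m"] by (simp add: algebra_simps)
  ultimately show ?thesis by (intro hlim_bound) auto
qed

lemma hlim_scale: "hlim f l \<Longrightarrow> hlim (\<lambda>n. cscale c (f n)) (cscale c l)"
proof -
  assume a: "hlim f l"
  have "(\<lambda>n. cmod c * hnorm (f n - l)) \<longlonglongrightarrow> cmod c * 0"
    using a unfolding hlim_def by (intro tendsto_mult) auto
  moreover have "hnorm (cscale c (f n) - cscale c l) = cmod c * hnorm (f n - l)" for n
    by (simp add: cscale_diff_right[symmetric] hnorm_scale)
  ultimately show ?thesis unfolding hlim_def by simp
qed

lemma hlim_minus: "hlim f l \<Longrightarrow> hlim (\<lambda>n. - f n) (- l)"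
  using hlim_scale[of f l "-1"] by (simp add: cscale_minus_one)

lemma hlim_diff: "hlim f l \<Longrightarrow> hlim g m \<Longrightarrow> hlim (\<lambda>n. f n - g n) (l - m)"
  using hlim_add[of f l "\<lambda>n. - g n" "- m"] hlim_minus[of g m] by simp

lemma hlim_unique: "hlim f l \<Longrightarrow> hlim f m \<Longrightarrow> l = m"
proof -
  assume a: "hlim f l" "hlim f m"
  have "(\<lambda>n. hnorm (f n - l) + hnorm (f n - m)) \<longlonglongrightarrow> 0 + 0"
    using a unfolding hlim_def by (rule tendsto_add)
  moreover have "hnorm (l - m) \<le> hnorm (f n - l) + hnorm (f n - m)" for n
    using hnorm_triangle_diff[where x=l and y="f n" and z=m] hnorm_commute[of l "f n"] by simp
  ultimately have "hnorm (l - m) \<le> 0"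
    by (intro tendsto_lowerbound[of "\<lambda>n. hnorm (f n - l) + hnorm (f n - m)"]) auto
  then show ?thesis using hnorm_nonneg[of "l - m"] by simp
qed

lemma hlim_norm: "hlim f l \<Longrightarrow> (\<lambda>n. hnorm (f n)) \<longlonglongrightarrow> hnorm l"
proof -
  assume a: "hlim f l"
  have "(\<lambda>n. hnorm (f n) - hnorm l) \<longlonglongrightarrow> 0"
    using a unfolding hlim_def
    by (rule tendsto_0_le[where K=1]) (auto intro!: always_eventually simp: hnorm_diff_triangle)
  then show ?thesis using Lim_null by blast
qed

lemma hlim_inner_left: "hlim f l \<Longrightarrow> (\<lambda>n. hinner (f n) y) \<longlonglongrightarrow> hinner l y"
proof -
  assume a: "hlim f l"
  have "(\<lambda>n. hinner (f n) y - hinner l y) \<longlonglongrightarrow> 0"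
  proof (rule tendsto_0_le[where K="hnorm y + 1"])
    show "(\<lambda>n. hnorm (f n - l)) \<longlonglongrightarrow> 0" using a by (simp add: hlim_def)
    show "\<forall>\<^sub>F n in sequentially. norm (hinner (f n) y - hinner l y) \<le> norm (hnorm (f n - l)) * (hnorm y + 1)"
    proof (intro always_eventually allI)
      fix n
      have "norm (hinner (f n) y - hinner l y) = cmod (hinner (f n - l) y)" by (simp add: hinner_diff_left)
      also have "\<dots> \<le> hnorm (f n - l) * hnorm y" by (rule cauchy_schwarz)
      also have "\<dots> \<le> norm (hnorm (f n - l)) * (hnorm y + 1)" by (simp add: mult_left_mono)
      finally show "norm (hinner (f n) y - hinner l y) \<le> norm (hnorm (f n - l)) * (hnorm y + 1)" .
    qed
  qed
  then show ?thesis using Lim_null by blast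
qed

lemma hlim_inner_right: "hlim f l \<Longrightarrow> (\<lambda>n. hinner y (f n)) \<longlonglongrightarrow> hinner y l"
proof -
  assume "hlim f l"
  then have "(\<lambda>n. cnj (hinner (f n) y)) \<longlonglongrightarrow> cnj (hinner l y)" by (intro tendsto_cnj hlim_inner_left)
  then show ?thesis by (metis (no_types, lifting) ext hinner_cnj)
qed

lemma hcauchy_conv: "hcauchy f \<Longrightarrow> \<exists>l. hlim f l"
proof -
  assume c: "hcauchy f"
  have "\<forall>e::real>0. \<exists>N::nat. \<forall>m\<ge>N. \<forall>n\<ge>N. Re (hinner (f m - f n) (f m - f n)) < e"
  proof (intro allI impI)
    fix e :: real assume e: "e > 0"
    then obtain N where N: "\<forall>m\<ge>N. \<forall>n\<ge>N. hnorm (f m - f n) < sqrt e" using c e unfolding hcauchy_def by (meson real_sqrt_gt_zero)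
    show "\<exists>N::nat. \<forall>m\<ge>N. \<forall>n\<ge>N. Re (hinner (f m - f n) (f m - f n)) < e"
    proof (intro exI allI impI)
      fix m n assume "m \<ge> N" "n \<ge> N"
      then have "hnorm (f m - f n) < sqrt e" using N by auto
      then have "(hnorm (f m - f n))^2 < (sqrt e)^2" by (intro power_strict_mono) auto
      then show "Re (hinner (f m - f n) (f m - f n)) < e" using e by (simp add: hnorm_sq)
    qed
  qed
  then obtain l where l: "\<forall>e::real>0. \<exists>N. \<forall>n\<ge>N. Re (hinner (f n - l) (f n - l)) < e"
    using hcomplete by blast
  have "hlim f l"
  proof (rule hlimI)
    fix e :: real assume e: "e > 0"
    then obtain N where N: "\<forall>n\<ge>N. Re (hinner (f n - l) (f n - l)) < e^2" using l by (meson zero_less_power)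
    show "\<exists>N. \<forall>n\<ge>N. hnorm (f n - l) < e"
    proof (intro exI allI impI)
      fix n assume "n \<ge> N"
      then have "(hnorm (f n - l))^2 < e^2" using N by (simp add: hnorm_sq)
      then show "hnorm (f n - l) < e" using e by (meson abs_le_square_iff abs_of_pos hnorm_nonneg less_le_not_le power2_less_imp_less)
    qed
  qed
  then show ?thesis by blast
qed

lemma hlim_cauchy: "hlim f l \<Longrightarrow> hcauchy f"
  unfolding hcauchy_def
proof (intro allI impI)
  fix e :: real assume a: "hlim f l" "e > 0"
  then obtain N where N: "\<forall>n\<ge>N. hnorm (f n - l) < e/2" using hlimD[of f l "e/2"] by auto
  show "\<exists>N. \<forall>m\<ge>N. \<forall>n\<ge>N. hnorm (f m - f n) < e"
  proof (intro exI allI impI)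
    fix m n assume "m \<ge> N" "n \<ge> N"
    then have "hnorm (f m - l) < e/2" "hnorm (f n - l) < e/2" using N by auto
    moreover have "hnorm (f m - f n) \<le> hnorm (f m - l) + hnorm (l - f n)" by (rule hnorm_triangle_diff)
    moreover have "hnorm (l - f n) = hnorm (f n - l)" by (rule hnorm_commute)
    ultimately show "hnorm (f m - f n) < e" by linarith
  qed
qed

lemma hcauchyI_sq_bound:
  assumes bound: "\<And>m n. (hnorm (g m - g n))^2 \<le> h m + h n" and h: "h \<longlonglongrightarrow> 0"
  shows "hcauchy g"
  unfolding hcauchy_def
proof (intro allI impI)
  fix e :: real assume e: "e > 0"
  then obtain N where N: "\<And>n. n \<ge> N \<Longrightarrow> \<bar>h n\<bar> < e^2 / 2"
    using LIMSEQ_D[OF h, of "e^2 / 2"] by auto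
  have "hnorm (g m - g n) < e" if "m \<ge> N" "n \<ge> N" for m n
  proof -
    have "(hnorm (g m - g n))^2 < e^2" using bound[of m n] N[OF that(1)] N[OF that(2)] by linarith
    then show ?thesis by (rule power2_less_imp_less) (use e in linarith)
  qed
  then show "\<exists>N. \<forall>m\<ge>N. \<forall>n\<ge>N. hnorm (g m - g n) < e" by blast
qed

lemma dense_orthogonal_zero:
  assumes "dense_set D" "\<forall>x\<in>D. hinner x z = 0"
  shows "z = 0"
proof (rule ccontr)
  assume z: "z \<noteq> 0"
  then have p: "hnorm z > 0" by (rule hnorm_pos)
  obtain x where x: "x \<in> D" "hnorm (z - x) < hnorm z" using assms(1) p unfolding dense_set_def by blast
  have "(hnorm z)^2 = cmod (hinner z z)" unfolding hinner_self_hnorm norm_of_real by simp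
  also have "hinner z z = hinner (z - x) z" using assms(2) x(1) by (simp add: hinner_diff_left)
  also have "cmod (hinner (z - x) z) \<le> hnorm (z - x) * hnorm z" by (rule cauchy_schwarz)
  also have "\<dots> < hnorm z * hnorm z" using x(2) p by simp
  finally show False by (simp add: power2_eq_square)
qed

lemma dense_hinner_eq:
  assumes "dense_set D" "\<forall>x\<in>D. hinner x z1 = hinner x z2"
  shows "z1 = z2"
  using dense_orthogonal_zero[OF assms(1), of "z1 - z2"] assms(2) by (simp add: hinner_diff_right)

lemma dense_hlim_seq:
  assumes "dense_set D"
  shows "\<exists>f. (\<forall>n. f n \<in> D) \<and> hlim f y"
proof -
  have "\<forall>n. \<exists>x\<in>D. hnorm (y - x) < 1 / (Suc n)" using assms unfolding dense_set_def by auto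
  then obtain f where f: "\<And>n. f n \<in> D" "\<And>n. hnorm (y - f n) < 1 / Suc n" by metis
  have "hlim f y"
  proof (rule hlim_bound[where g="\<lambda>n. 1 / Suc n"])
    show "hnorm (f n - y) \<le> 1 / Suc n" for n using f(2)[of n] hnorm_commute[of y "f n"] by simp
    show "(\<lambda>n. 1 / real (Suc n)) \<longlonglongrightarrow> 0" using LIMSEQ_inverse_real_of_nat by (simp add: inverse_eq_divide)
  qed
  then show ?thesis using f(1) by blast
qed

lemma dense_UNIV: "dense_set UNIV"
  unfolding dense_set_def by (metis UNIV_I diff_self hnorm_zero)

definition bounded_lin :: "('a::chilbert \<Rightarrow> 'a) \<Rightarrow> bool" where
  "bounded_lin Y \<longleftrightarrow> (\<forall>x y. Y (x + y) = Y x + Y y) \<and> (\<forall>c x. Y (cscale c x) = cscale c (Y x))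
     \<and> (\<exists>K. \<forall>x. hnorm (Y x) \<le> K * hnorm x)"

definition hermitian :: "('a::chilbert \<Rightarrow> 'a) \<Rightarrow> bool" where
  "hermitian Y \<longleftrightarrow> (\<forall>x y. hinner (Y x) y = hinner x (Y y))"

definition pos_semidef :: "('a::chilbert \<Rightarrow> 'a) \<Rightarrow> bool" where
  "pos_semidef Y \<longleftrightarrow> (\<forall>x. Im (hinner x (Y x)) = 0 \<and> 0 \<le> Re (hinner x (Y x)))"

lemma bounded_lin_add: "bounded_lin Y \<Longrightarrow> Y (x + y) = Y x + Y y" by (simp add: bounded_lin_def)
lemma bounded_lin_scale: "bounded_lin Y \<Longrightarrow> Y (cscale c x) = cscale c (Y x)" by (simp add: bounded_lin_def)
lemma bounded_lin_zero: "bounded_lin Y \<Longrightarrow> Y 0 = 0" using bounded_lin_scale[of Y 0 0] by simp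
lemma bounded_lin_minus: "bounded_lin Y \<Longrightarrow> Y (- x) = - Y x" using bounded_lin_scale[of Y "-1" x] by (simp add: cscale_minus_one)
lemma bounded_lin_diff: "bounded_lin Y \<Longrightarrow> Y (x - y) = Y x - Y y" using bounded_lin_add[of Y x "-y"] bounded_lin_minus by simp
lemma bounded_lin_sum: "bounded_lin Y \<Longrightarrow> Y (sum f A) = sum (\<lambda>i. Y (f i)) A"
  by (induction A rule: infinite_finite_induct) (auto simp: bounded_lin_zero bounded_lin_add)

lemma bounded_lin_bound: "bounded_lin Y \<Longrightarrow> \<exists>K>0. \<forall>x. hnorm (Y x) \<le> K * hnorm x"
proof -
  assume "bounded_lin Y"
  then obtain K where K: "\<forall>x. hnorm (Y x) \<le> K * hnorm x" by (auto simp: bounded_lin_def)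
  show ?thesis
  proof (intro exI[of _ "\<bar>K\<bar> + 1"] conjI allI)
    fix x show "hnorm (Y x) \<le> (\<bar>K\<bar> + 1) * hnorm x"
    proof -
      have "K * hnorm x \<le> (\<bar>K\<bar> + 1) * hnorm x" by (intro mult_right_mono) auto
      then show ?thesis using K[rule_format, of x] by linarith
    qed
  qed simp
qed

lemma bounded_lin_hlim: "bounded_lin Y \<Longrightarrow> hlim f l \<Longrightarrow> hlim (\<lambda>n. Y (f n)) (Y l)"
proof -
  assume b: "bounded_lin Y" and f: "hlim f l"
  obtain K where K: "K > 0" "\<forall>x. hnorm (Y x) \<le> K * hnorm x" using bounded_lin_bound[OF b] by auto
  show ?thesis
  proof (rule hlim_bound[where g="\<lambda>n. K * hnorm (f n - l)"])
    show "hnorm (Y (f n) - Y l) \<le> K * hnorm (f n - l)" for n using K(2) bounded_lin_diff[OF b] by metis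
    show "(\<lambda>n. K * hnorm (f n - l)) \<longlonglongrightarrow> 0" using f unfolding hlim_def by (metis mult_zero_right tendsto_mult_left)
  qed
qed

lemma bounded_lin_id: "bounded_lin (\<lambda>x. x)" unfolding bounded_lin_def by (auto intro!: exI[of _ 1])

lemma bounded_lin_comp: "bounded_lin Y \<Longrightarrow> bounded_lin Z \<Longrightarrow> bounded_lin (\<lambda>x. Y (Z x))"
proof -
  assume a: "bounded_lin Y" "bounded_lin Z"
  obtain K where K: "K > 0" "\<forall>x. hnorm (Y x) \<le> K * hnorm x" using bounded_lin_bound[OF a(1)] by auto
  obtain L where L: "L > 0" "\<forall>x. hnorm (Z x) \<le> L * hnorm x" using bounded_lin_bound[OF a(2)] by auto
  have "hnorm (Y (Z x)) \<le> (K * L) * hnorm x" for x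
  proof -
    have "K * hnorm (Z x) \<le> K * (L * hnorm x)" using L(2) K(1) by (intro mult_left_mono) auto
    then show ?thesis using K(2)[rule_format, of "Z x"] by (simp add: mult.assoc)
  qed
  then show ?thesis using a unfolding bounded_lin_def by auto
qed

lemma bounded_lin_add_op: "bounded_lin Y \<Longrightarrow> bounded_lin Z \<Longrightarrow> bounded_lin (\<lambda>x. Y x + Z x)"
proof -
  assume a: "bounded_lin Y" "bounded_lin Z"
  obtain K where K: "K > 0" "\<forall>x. hnorm (Y x) \<le> K * hnorm x" using bounded_lin_bound[OF a(1)] by auto
  obtain L where L: "L > 0" "\<forall>x. hnorm (Z x) \<le> L * hnorm x" using bounded_lin_bound[OF a(2)] by auto
  have "hnorm (Y x + Z x) \<le> (K + L) * hnorm x" for x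
    using K(2)[rule_format, of x] L(2)[rule_format, of x] hnorm_triangle[of "Y x" "Z x"] by (simp add: distrib_right)
  then have "\<exists>K. \<forall>x. hnorm (Y x + Z x) \<le> K * hnorm x" by blast
  moreover have "\<forall>x y. Y (x + y) + Z (x + y) = (Y x + Z x) + (Y y + Z y)"
    using a by (simp add: bounded_lin_add algebra_simps)
  moreover have "\<forall>d x. Y (cscale d x) + Z (cscale d x) = cscale d (Y x + Z x)"
    using a by (simp add: bounded_lin_scale cscale_add_right)
  ultimately show ?thesis unfolding bounded_lin_def by blast
qed

lemma bounded_lin_scale_op: "bounded_lin Y \<Longrightarrow> bounded_lin (\<lambda>x. cscale c (Y x))"
proof -
  assume a: "bounded_lin Y"
  obtain K where K: "K > 0" "\<forall>x. hnorm (Y x) \<le> K * hnorm x" using bounded_lin_bound[OF a(1)] by auto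
  have "hnorm (cscale c (Y x)) \<le> (cmod c * K) * hnorm x" for x
    using K(2)[rule_format, of x] by (simp add: hnorm_scale mult.assoc mult_left_mono)
  then have "\<exists>K. \<forall>x. hnorm (cscale c (Y x)) \<le> K * hnorm x" by blast
  moreover have "\<forall>x y. cscale c (Y (x + y)) = cscale c (Y x) + cscale c (Y y)"
    using a by (simp add: bounded_lin_add cscale_add_right)
  moreover have "\<forall>d x. cscale c (Y (cscale d x)) = cscale d (cscale c (Y x))"
    using a by (simp add: bounded_lin_scale cscale_cscale mult.commute)
  ultimately show ?thesis unfolding bounded_lin_def by blast
qed

lemma bounded_lin_uminus_op: "bounded_lin Y \<Longrightarrow> bounded_lin (\<lambda>x. - Y x)"
  using bounded_lin_scale_op[of Y "-1"] by (simp add: cscale_minus_one)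

lemma bounded_lin_diff_op: "bounded_lin Y \<Longrightarrow> bounded_lin Z \<Longrightarrow> bounded_lin (\<lambda>x. Y x - Z x)"
  using bounded_lin_add_op[of Y "\<lambda>x. - Z x"] bounded_lin_uminus_op[of Z] by simp

lemma bounded_lin_funpow: "bounded_lin Y \<Longrightarrow> bounded_lin (Y ^^ n)"
proof (induction n)
  case 0
  show ?case unfolding funpow.simps(1) id_def by (rule bounded_lin_id)
next
  case (Suc n)
  have "(Y ^^ Suc n) = (\<lambda>x. Y ((Y ^^ n) x))" by (simp add: comp_def)
  then show ?case using bounded_lin_comp[OF Suc.prems Suc.IH[OF Suc.prems]] by simp
qed

lemma hermitian_funpow: "hermitian Y \<Longrightarrow> hermitian (Y ^^ n)"
proof (induction n)
  case 0 then show ?case by (simp add: hermitian_def)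
next
  case (Suc n)
  show ?case unfolding hermitian_def
  proof (intro allI)
    fix x y
    have "hinner ((Y ^^ Suc n) x) y = hinner ((Y ^^ n) (Y x)) y" by (simp add: funpow_swap1)
    also have "\<dots> = hinner (Y x) ((Y ^^ n) y)" using Suc by (simp add: hermitian_def)
    also have "\<dots> = hinner x (Y ((Y ^^ n) y))" using Suc.prems by (simp add: hermitian_def)
    finally show "hinner ((Y ^^ Suc n) x) y = hinner x ((Y ^^ Suc n) y)" by simp
  qed
qed

lemma hermitian_Im_hinner: "hermitian Y \<Longrightarrow> Im (hinner x (Y x)) = 0"
  by (metis hinner_cnj hermitian_def cnj.simps(2) neg_equal_zero)

lemma hnorm_add_sq: "(hnorm (x + y))^2 = (hnorm x)^2 + 2 * Re (hinner x y) + (hnorm y)^2"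
  using H.expand_add_scaled[of x y 1] by (simp add: cscale_one hnorm_sq)

lemma hnorm_diff_sq: "(hnorm (x - y))^2 = (hnorm x)^2 - 2 * Re (hinner x y) + (hnorm y)^2"
  using H.expand_add_scaled[of x y "-1"] by (simp add: cscale_minus_one hnorm_sq)

lemma parallelogram: "(hnorm (x + y))^2 + (hnorm (x - y))^2 = 2 * (hnorm x)^2 + 2 * (hnorm y)^2"
  using hnorm_add_sq[of x y] hnorm_diff_sq[of x y] by simp

lemma cscale_two: "cscale 2 x = x + x"
  using cscale_add_left[of 1 1 x] by (simp add: cscale_one)

lemma csubspace_zero: "csubspace M \<Longrightarrow> 0 \<in> M" by (simp add: csubspace_def)
lemma csubspace_add: "csubspace M \<Longrightarrow> x \<in> M \<Longrightarrow> y \<in> M \<Longrightarrow> x + y \<in> M" by (simp add: csubspace_def)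
lemma csubspace_scale: "csubspace M \<Longrightarrow> x \<in> M \<Longrightarrow> cscale c x \<in> M" by (simp add: csubspace_def)
lemma csubspace_minus: "csubspace M \<Longrightarrow> x \<in> M \<Longrightarrow> - x \<in> M"
  using csubspace_scale[of M x "-1"] by (simp add: cscale_minus_one)
lemma csubspace_diff: "csubspace M \<Longrightarrow> x \<in> M \<Longrightarrow> y \<in> M \<Longrightarrow> x - y \<in> M"
proof -
  assume a: "csubspace M" "x \<in> M" "y \<in> M"
  then have "- y \<in> M" by (intro csubspace_minus)
  then show ?thesis using csubspace_add[OF a(1) a(2)] by (metis diff_conv_add_uminus)
qed

lemma orthogonal_if_nearest:
  assumes M: "csubspace M" and l: "l \<in> M" and min: "\<And>m. m \<in> M \<Longrightarrow> hnorm (y - l) \<le> hnorm (y - m)"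
    and m: "m \<in> M"
  shows "hinner m (y - l) = 0"
proof -
  define w where "w = y - l"
  have "(cmod (hinner w m))^2 \<le> 0 * (hnorm m)^2"
  proof (rule quadratic_nonneg_imp_le)
    fix s :: real
    define t where "t = - complex_of_real s * cnj (hinner w m)"
    have "l - cscale t m \<in> M" using M l m csubspace_diff csubspace_scale by blast
    then have "hnorm w \<le> hnorm (y - (l - cscale t m))" using min unfolding w_def by blast
    also have "y - (l - cscale t m) = w + cscale t m" unfolding w_def by simp
    finally have "(hnorm w)^2 \<le> (hnorm (w + cscale t m))^2" by (simp add: power_mono)
    moreover have "cnj (hinner w m) * hinner w m = complex_of_real ((cmod (hinner w m))^2)"
      using complex_norm_square[of "hinner w m"] by (simp add: mult.commute)
    then have "t * hinner w m = - complex_of_real (s * (cmod (hinner w m))^2)"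
      unfolding t_def by (metis minus_mult_left mult.assoc of_real_mult)
    moreover have "cmod t = \<bar>s\<bar> * cmod (hinner w m)" unfolding t_def by (simp add: norm_mult)
    ultimately show "0 \<le> 0 - 2 * s * (cmod (hinner w m))^2 + s^2 * (cmod (hinner w m))^2 * (hnorm m)^2"
      using H.expand_add_scaled[of w m t] by (simp add: hnorm_sq power_mult_distrib)
  qed auto
  then have "hinner w m = 0" by simp
  then show ?thesis unfolding w_def by (metis hinner_cnj complex_cnj_zero)
qed

lemma nearest_diff_sq_le:
  assumes M: "csubspace M" and d: "\<And>m. m \<in> M \<Longrightarrow> d \<le> hnorm (y - m)" "0 \<le> d"
    and p: "p \<in> M" and q: "q \<in> M"
  shows "(hnorm (p - q))^2 \<le> 2 * (hnorm (y - p))^2 + 2 * (hnorm (y - q))^2 - 4 * d^2"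
proof -
  have "cscale (1/2) (p + q) \<in> M" using M p q csubspace_add csubspace_scale by blast
  moreover have "(y - p) + (y - q) = cscale 2 (y - cscale (1/2) (p + q))"
    by (simp add: cscale_diff_right cscale_cscale cscale_one cscale_two)
  ultimately have "2 * d \<le> hnorm ((y - p) + (y - q))" using d(1) by (simp add: hnorm_scale)
  then have "(2 * d)^2 \<le> (hnorm ((y - p) + (y - q)))^2" using d(2) by (intro power_mono) auto
  moreover have "(y - p) - (y - q) = - (p - q)" by simp
  ultimately show ?thesis using parallelogram[of "y - p" "y - q"] hnorm_commute[of p q] by (simp add: hnorm_minus power_mult_distrib)
qed

lemma orthogonal_projection_exists:
  assumes M: "csubspace M"
    and complete: "\<And>f. (\<forall>n. f n \<in> M) \<Longrightarrow> hcauchy f \<Longrightarrow> \<exists>l\<in>M. hlim f l"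
  shows "\<exists>l\<in>M. \<forall>m\<in>M. hinner m (y - l) = 0"
proof -
  define d where "d = (INF m\<in>M. hnorm (y - m))"
  have ne: "M \<noteq> {}" using csubspace_zero[OF M] by auto
  have d_le: "d \<le> hnorm (y - m)" if "m \<in> M" for m
    unfolding d_def using that by (intro cINF_lower bdd_belowI2[of _ 0]) auto
  have d0: "0 \<le> d" unfolding d_def using ne by (intro cINF_greatest) auto
  have "\<exists>m\<in>M. (hnorm (y - m))^2 < d^2 + 1 / Suc n" for n
  proof -
    have bdd: "bdd_below ((\<lambda>m. hnorm (y - m)) ` M)" by (rule bdd_belowI2[of _ 0]) auto
    have "d < sqrt (d^2 + 1 / Suc n)" using d0 by (intro real_less_rsqrt) simp
    then obtain m where m: "m \<in> M" "hnorm (y - m) < sqrt (d^2 + 1 / Suc n)"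
      unfolding d_def cINF_less_iff[OF ne bdd] by blast
    then have "(hnorm (y - m))^2 < (sqrt (d^2 + 1 / Suc n))^2" by (intro power_strict_mono) auto
    then show ?thesis using m(1) by (auto simp: add_nonneg_nonneg)
  qed
  then obtain g where g: "\<And>n. g n \<in> M" "\<And>n. (hnorm (y - g n))^2 < d^2 + 1 / Suc n" by metis
  have "hcauchy g"
  proof (rule hcauchyI_sq_bound)
    show "(hnorm (g m - g n))^2 \<le> 2 / Suc m + 2 / Suc n" for m n
      using nearest_diff_sq_le[OF M d_le d0 g(1) g(1), of m n] g(2)[of m] g(2)[of n] by simp
    have "(\<lambda>n. 2 * (1 / real (Suc n))) \<longlonglongrightarrow> 2 * 0"
      using LIMSEQ_inverse_real_of_nat by (intro tendsto_mult tendsto_const) (simp add: inverse_eq_divide)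
    then show "(\<lambda>n. 2 / real (Suc n)) \<longlonglongrightarrow> 0" by simp
  qed
  then obtain l where l: "l \<in> M" "hlim g l" using complete g(1) by blast
  have "(\<lambda>n. (hnorm (y - g n))^2) \<longlonglongrightarrow> (hnorm (y - l))^2"
    using hlim_norm[OF hlim_diff[OF hlim_const l(2)]] by (intro tendsto_power)
  moreover have "(\<lambda>n. d^2 + 1 / real (Suc n)) \<longlonglongrightarrow> d^2"
    using tendsto_add[OF tendsto_const[of "d^2"] LIMSEQ_inverse_real_of_nat] by (simp add: inverse_eq_divide)
  moreover have "\<exists>N. \<forall>n\<ge>N. (hnorm (y - g n))^2 \<le> d^2 + 1 / real (Suc n)" using g(2) less_imp_le by blast
  ultimately have "(hnorm (y - l))^2 \<le> d^2" by (rule LIMSEQ_le)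
  then have "hnorm (y - l) \<le> d" using d0 by (rule power2_le_imp_le)
  then have "\<And>m. m \<in> M \<Longrightarrow> hnorm (y - l) \<le> hnorm (y - m)" using d_le by (meson order.trans)
  then show ?thesis using orthogonal_if_nearest[OF M l(1)] l(1) by blast
qed

lemma self_adjoint_dense: "self_adjoint D T \<Longrightarrow> dense_set D" by (simp add: self_adjoint_def)
lemma self_adjoint_subspace: "self_adjoint D T \<Longrightarrow> csubspace D" by (simp add: self_adjoint_def lin_op_def)
lemma self_adjoint_add: "self_adjoint D T \<Longrightarrow> x \<in> D \<Longrightarrow> y \<in> D \<Longrightarrow> T (x + y) = T x + T y"
  by (simp add: self_adjoint_def lin_op_def)
lemma self_adjoint_scale: "self_adjoint D T \<Longrightarrow> x \<in> D \<Longrightarrow> T (cscale c x) = cscale c (T x)"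
  by (simp add: self_adjoint_def lin_op_def)
lemma self_adjoint_zero: "self_adjoint D T \<Longrightarrow> T 0 = 0"
proof -
  assume sa: "self_adjoint D T"
  have "T (cscale 0 0) = cscale 0 (T 0)" using self_adjoint_scale[OF sa csubspace_zero[OF self_adjoint_subspace[OF sa]]] .
  then show ?thesis by simp
qed
lemma self_adjoint_minus: "self_adjoint D T \<Longrightarrow> x \<in> D \<Longrightarrow> T (- x) = - T x"
  using self_adjoint_scale[of D T x "-1"] by (simp add: cscale_minus_one)
lemma self_adjoint_diff: "self_adjoint D T \<Longrightarrow> x \<in> D \<Longrightarrow> y \<in> D \<Longrightarrow> T (x - y) = T x - T y"
proof -
  assume a: "self_adjoint D T" "x \<in> D" "y \<in> D"
  have my: "- y \<in> D" using csubspace_minus[OF self_adjoint_subspace[OF a(1)] a(3)] .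
  have "T (x + - y) = T x + T (- y)" using self_adjoint_add[OF a(1) a(2) my] .
  then show ?thesis using self_adjoint_minus[OF a(1) a(3)] by simp
qed

lemma adj_unique:
  assumes "dense_set D" "\<forall>x\<in>D. hinner (T x) y = hinner x z"
  shows "adj D T y = z"
  unfolding adj_def
proof (rule the_equality)
  show "\<forall>x\<in>D. hinner (T x) y = hinner x z" by fact
  show "\<And>z'. \<forall>x\<in>D. hinner (T x) y = hinner x z' \<Longrightarrow> z' = z"
  proof -
    fix z' assume "\<forall>x\<in>D. hinner (T x) y = hinner x z'"
    then have "\<forall>x\<in>D. hinner x z' = hinner x z" using assms(2) by simp
    then show "z' = z" using dense_hinner_eq[OF assms(1)] by blast
  qed
qed

lemma self_adjoint_adjI:
  assumes sa: "self_adjoint D T" and h: "\<forall>x\<in>D. hinner (T x) y = hinner x z"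
  shows "y \<in> D \<and> T y = z"
proof -
  have "y \<in> adj_dom D T" unfolding adj_dom_def using h by blast
  then have yD: "y \<in> D" using sa by (simp add: self_adjoint_def)
  have "adj D T y = z" using adj_unique[OF self_adjoint_dense[OF sa] h] .
  then show ?thesis using yD sa by (simp add: self_adjoint_def)
qed

lemma self_adjoint_sym:
  assumes sa: "self_adjoint D T" and x: "x \<in> D" and y: "y \<in> D"
  shows "hinner (T x) y = hinner x (T y)"
proof -
  have "y \<in> adj_dom D T" using sa y by (simp add: self_adjoint_def)
  then obtain z where z: "\<forall>x\<in>D. hinner (T x) y = hinner x z" unfolding adj_dom_def by blast
  have "adj D T y = z" using adj_unique[OF self_adjoint_dense[OF sa] z] .
  then have "T y = z" using sa y by (simp add: self_adjoint_def)
  then show ?thesis using z x by simp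
qed

lemma self_adjoint_closed:
  assumes sa: "self_adjoint D T" and f: "\<forall>n. f n \<in> D" "hlim f x" and Tf: "hlim (\<lambda>n. T (f n)) l"
  shows "x \<in> D \<and> T x = l"
proof (rule self_adjoint_adjI[OF sa], intro ballI)
  fix v assume v: "v \<in> D"
  have a: "(\<lambda>n. hinner (T v) (f n)) \<longlonglongrightarrow> hinner (T v) x" using hlim_inner_right[OF f(2)] .
  have b: "(\<lambda>n. hinner (T v) (f n)) = (\<lambda>n. hinner v (T (f n)))" using self_adjoint_sym[OF sa v] f(1) by auto
  have c: "(\<lambda>n. hinner v (T (f n))) \<longlonglongrightarrow> hinner v l" using hlim_inner_right[OF Tf] .
  have "(\<lambda>n. hinner v (T (f n))) \<longlonglongrightarrow> hinner (T v) x" using a unfolding b .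
  then show "hinner (T v) x = hinner v l" using c by (rule LIMSEQ_unique)
qed

lemma self_adjoint_shift_add:
  "self_adjoint D T \<Longrightarrow> x \<in> D \<Longrightarrow> y \<in> D \<Longrightarrow>
    T (x + y) - cscale lam (x + y) = (T x - cscale lam x) + (T y - cscale lam y)"
  using self_adjoint_add by (simp add: cscale_add_right algebra_simps)

lemma self_adjoint_shift_scale:
  "self_adjoint D T \<Longrightarrow> x \<in> D \<Longrightarrow> T (cscale c x) - cscale lam (cscale c x) = cscale c (T x - cscale lam x)"
  using self_adjoint_scale by (simp add: cscale_diff_right cscale_cscale mult.commute)

lemma self_adjoint_shift_diff:
  "self_adjoint D T \<Longrightarrow> x \<in> D \<Longrightarrow> y \<in> D \<Longrightarrow>
    T (x - y) - cscale lam (x - y) = (T x - cscale lam x) - (T y - cscale lam y)"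
  using self_adjoint_diff by (simp add: cscale_diff_right algebra_simps)

lemma csubspace_image:
  assumes D: "csubspace D" and add: "\<And>x y. x \<in> D \<Longrightarrow> y \<in> D \<Longrightarrow> f (x + y) = f x + f y"
    and scale: "\<And>c x. x \<in> D \<Longrightarrow> f (cscale c x) = cscale c (f x)"
  shows "csubspace (f ` D)"
  unfolding csubspace_def
proof (intro conjI ballI allI)
  have "f 0 = 0" using scale[of 0 0] csubspace_zero[OF D] by simp
  then show "0 \<in> f ` D" using csubspace_zero[OF D] by (metis image_eqI)
next
  fix a b assume "a \<in> f ` D" "b \<in> f ` D"
  then obtain x y where "x \<in> D" "y \<in> D" "a = f x" "b = f y" by blast
  then have "a + b = f (x + y)" "x + y \<in> D" using add csubspace_add[OF D] by simp_all
  then show "a + b \<in> f ` D" by (rule image_eqI)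
next
  fix c a assume "a \<in> f ` D"
  then obtain x where "x \<in> D" "a = f x" by blast
  then have "cscale c a = f (cscale c x)" "cscale c x \<in> D" using scale csubspace_scale[OF D] by simp_all
  then show "cscale c a \<in> f ` D" by (rule image_eqI)
qed

lemma self_adjoint_shift_range_complete:
  assumes sa: "self_adjoint D T" and c: "c > 0"
    and below: "\<And>z. z \<in> D \<Longrightarrow> c * hnorm z \<le> hnorm (T z - cscale lam z)"
    and f: "\<forall>n. f n \<in> (\<lambda>z. T z - cscale lam z) ` D" "hcauchy f"
  shows "\<exists>l\<in>(\<lambda>z. T z - cscale lam z) ` D. hlim f l"
proof -
  have "\<forall>n. \<exists>z\<in>D. f n = T z - cscale lam z" using f(1) by blast
  then obtain z where z: "\<And>n. z n \<in> D" "\<And>n. f n = T (z n) - cscale lam (z n)" by metis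
  have "hcauchy z" unfolding hcauchy_def
  proof (intro allI impI)
    fix e :: real assume "e > 0"
    then have "c * e > 0" using c by simp
    then obtain N where N: "\<forall>m\<ge>N. \<forall>n\<ge>N. hnorm (f m - f n) < c * e" using f(2) unfolding hcauchy_def by blast
    have "hnorm (z m - z n) < e" if "m \<ge> N" "n \<ge> N" for m n
    proof -
      have "c * hnorm (z m - z n) \<le> hnorm (f m - f n)"
        using below[OF csubspace_diff[OF self_adjoint_subspace[OF sa] z(1) z(1)]]
        unfolding self_adjoint_shift_diff[OF sa z(1) z(1)] z(2) .
      also have "\<dots> < c * e" using N that by blast
      finally show ?thesis using c by simp
    qed
    then show "\<exists>N. \<forall>m\<ge>N. \<forall>n\<ge>N. hnorm (z m - z n) < e" by blast
  qed
  then obtain x where x: "hlim z x" using hcauchy_conv by blast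
  obtain l where l: "hlim f l" using hcauchy_conv[OF f(2)] by blast
  have "hlim (\<lambda>n. f n + cscale lam (z n)) (l + cscale lam x)" by (intro hlim_add hlim_scale l x)
  then have "hlim (\<lambda>n. T (z n)) (l + cscale lam x)" using z(2) by simp
  then have "x \<in> D \<and> T x = l + cscale lam x" using self_adjoint_closed[OF sa] z(1) x by blast
  then show ?thesis using l by force
qed

lemma self_adjoint_surj:
  assumes sa: "self_adjoint D T" and c: "c > 0"
    and below: "\<And>z. z \<in> D \<Longrightarrow> c * hnorm z \<le> hnorm (T z - cscale lam z)"
    and inj: "\<And>z. z \<in> D \<Longrightarrow> T z - cscale (cnj lam) z = 0 \<Longrightarrow> z = 0"
  shows "\<exists>z\<in>D. T z - cscale lam z = y"
proof -
  define M where "M = (\<lambda>z. T z - cscale lam z) ` D"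
  have M: "csubspace M" unfolding M_def
    using self_adjoint_subspace[OF sa] self_adjoint_shift_add[OF sa] self_adjoint_shift_scale[OF sa]
    by (rule csubspace_image)
  have complete: "\<exists>l\<in>M. hlim f l" if "\<forall>n. f n \<in> M" "hcauchy f" for f
    using self_adjoint_shift_range_complete[OF sa c below] that unfolding M_def by blast
  obtain l where l: "l \<in> M" "\<forall>m\<in>M. hinner m (y - l) = 0"
    using orthogonal_projection_exists[OF M complete] by blast
  have "\<forall>x\<in>D. hinner (T x) (y - l) = hinner x (cscale (cnj lam) (y - l))"
  proof
    fix x assume "x \<in> D"
    then have "hinner (T x - cscale lam x) (y - l) = 0" using l(2) unfolding M_def by blast
    then show "hinner (T x) (y - l) = hinner x (cscale (cnj lam) (y - l))"
      by (simp add: hinner_diff_left hinner_scale_left hinner_scale_right)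
  qed
  then have "y - l \<in> D \<and> T (y - l) = cscale (cnj lam) (y - l)" by (rule self_adjoint_adjI[OF sa])
  then have "y - l \<in> D" "T (y - l) - cscale (cnj lam) (y - l) = 0" by simp_all
  then have "y - l = 0" by (rule inj)
  then show ?thesis using l(1) unfolding M_def by auto
qed

definition contraction :: "('a::chilbert \<Rightarrow> 'a) \<Rightarrow> bool" where
  "contraction Z \<longleftrightarrow> bounded_lin Z \<and> (\<forall>x. hnorm (Z x) \<le> hnorm x)"

definition op_psum :: "(nat \<Rightarrow> real) \<Rightarrow> ('a::chilbert \<Rightarrow> 'a) \<Rightarrow> nat \<Rightarrow> 'a \<Rightarrow> 'a" where
  "op_psum a Z N x = (\<Sum>k<N. cscale (complex_of_real (a k)) ((Z ^^ k) x))"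

definition op_series :: "(nat \<Rightarrow> real) \<Rightarrow> ('a::chilbert \<Rightarrow> 'a) \<Rightarrow> 'a \<Rightarrow> 'a" where
  "op_series a Z x = (SOME l. hlim (\<lambda>N. op_psum a Z N x) l)"

lemma contraction_funpow: "contraction Z \<Longrightarrow> hnorm ((Z ^^ k) x) \<le> hnorm x"
proof (induction k)
  case 0 then show ?case by simp
next
  case (Suc k)
  have "hnorm ((Z ^^ Suc k) x) = hnorm (Z ((Z ^^ k) x))" by simp
  also have "\<dots> \<le> hnorm ((Z ^^ k) x)" using Suc.prems by (simp add: contraction_def)
  also have "\<dots> \<le> hnorm x" using Suc by simp
  finally show ?case .
qed

lemma op_psum_diff:
  assumes "M \<le> N"
  shows "op_psum a Z N x - op_psum a Z M x = (\<Sum>k\<in>{M..<N}. cscale (complex_of_real (a k)) ((Z ^^ k) x))"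
proof -
  have "{..<N} = {..<M} \<union> {M..<N}" using assms by auto
  moreover have "{..<M} \<inter> {M..<N} = {}" by auto
  ultimately have "op_psum a Z N x = op_psum a Z M x + (\<Sum>k\<in>{M..<N}. cscale (complex_of_real (a k)) ((Z ^^ k) x))"
    unfolding op_psum_def by (simp add: sum.union_disjoint)
  then show ?thesis by simp
qed

lemma norm_op_terms_sum_le:
  assumes "contraction Z"
  shows "hnorm (\<Sum>k\<in>A. cscale (complex_of_real (a k)) ((Z ^^ k) x)) \<le> (\<Sum>k\<in>A. \<bar>a k\<bar>) * hnorm x"
proof -
  have "hnorm (\<Sum>k\<in>A. cscale (complex_of_real (a k)) ((Z ^^ k) x)) \<le> (\<Sum>k\<in>A. hnorm (cscale (complex_of_real (a k)) ((Z ^^ k) x)))"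
    by (rule hnorm_sum)
  also have "\<dots> \<le> (\<Sum>k\<in>A. \<bar>a k\<bar> * hnorm x)"
  proof (rule sum_mono)
    fix k
    have "hnorm (cscale (complex_of_real (a k)) ((Z ^^ k) x)) = \<bar>a k\<bar> * hnorm ((Z ^^ k) x)" by (simp add: hnorm_scale)
    also have "\<dots> \<le> \<bar>a k\<bar> * hnorm x" using contraction_funpow[OF assms] by (simp add: mult_left_mono)
    finally show "hnorm (cscale (complex_of_real (a k)) ((Z ^^ k) x)) \<le> \<bar>a k\<bar> * hnorm x" .
  qed
  also have "\<dots> = (\<Sum>k\<in>A. \<bar>a k\<bar>) * hnorm x" by (simp add: sum_distrib_right)
  finally show ?thesis .
qed

lemma hcauchy_op_psum:
  assumes s: "summable (\<lambda>k. \<bar>a k\<bar>)" and Z: "contraction Z"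
  shows "hcauchy (\<lambda>N. op_psum a Z N x)"
  unfolding hcauchy_def
proof (intro allI impI)
  fix e :: real assume e: "e > 0"
  define e' where "e' = e / (hnorm x + 1)"
  have e': "e' > 0" unfolding e'_def using e by (simp add: add_nonneg_pos)
  obtain N where N: "\<forall>m\<ge>N. \<forall>n. norm (\<Sum>k\<in>{m..<n}. \<bar>a k\<bar>) < e'"
    using s e' unfolding summable_Cauchy by blast
  have b: "hnorm (op_psum a Z n x - op_psum a Z m x) < e" if "N \<le> m" "m \<le> n" for m n
  proof -
    have "hnorm (op_psum a Z n x - op_psum a Z m x) \<le> (\<Sum>k\<in>{m..<n}. \<bar>a k\<bar>) * hnorm x"
      unfolding op_psum_diff[OF that(2)] by (rule norm_op_terms_sum_le[OF Z])
    also have "\<dots> \<le> e' * hnorm x"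
      using N that(1) by (intro mult_right_mono) (auto intro: less_imp_le)
    also have "\<dots> < e"
    proof -
      have "e' * hnorm x < e' * (hnorm x + 1)" using e' by simp
      also have "\<dots> = e" unfolding e'_def
      proof -
        have "hnorm x + 1 \<noteq> 0" using hnorm_nonneg[of x] by linarith
        then show "e / (hnorm x + 1) * (hnorm x + 1) = e" by simp
      qed
      finally show ?thesis .
    qed
    finally show ?thesis .
  qed
  show "\<exists>N. \<forall>m\<ge>N. \<forall>n\<ge>N. hnorm (op_psum a Z m x - op_psum a Z n x) < e"
  proof (intro exI[of _ N] allI impI)
    fix m n assume "m \<ge> N" "n \<ge> N"
    show "hnorm (op_psum a Z m x - op_psum a Z n x) < e"
    proof (cases "n \<le> m")
      case True then show ?thesis using b \<open>n \<ge> N\<close> by blast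
    next
      case False
      then have "hnorm (op_psum a Z n x - op_psum a Z m x) < e" using b[of m n] \<open>m \<ge> N\<close> by simp
      then show ?thesis by (simp add: hnorm_commute)
    qed
  qed
qed

lemma op_series_hlim:
  assumes "summable (\<lambda>k. \<bar>a k\<bar>)" "contraction Z"
  shows "hlim (\<lambda>N. op_psum a Z N x) (op_series a Z x)"
proof -
  obtain l where "hlim (\<lambda>N. op_psum a Z N x) l" using hcauchy_conv[OF hcauchy_op_psum[OF assms]] by blast
  then show ?thesis unfolding op_series_def by (rule someI)
qed

lemma op_series_eqI:
  assumes "summable (\<lambda>k. \<bar>a k\<bar>)" "contraction Z" "hlim (\<lambda>N. op_psum a Z N x) l"
  shows "op_series a Z x = l"
  using hlim_unique[OF op_series_hlim[OF assms(1,2)] assms(3)] .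

lemma op_psum_add: "bounded_lin Z \<Longrightarrow> op_psum a Z N (x + y) = op_psum a Z N x + op_psum a Z N y"
  unfolding op_psum_def by (simp add: bounded_lin_add[OF bounded_lin_funpow] cscale_add_right sum.distrib)

lemma op_psum_scale: "bounded_lin Z \<Longrightarrow> op_psum a Z N (cscale c x) = cscale c (op_psum a Z N x)"
  unfolding op_psum_def by (simp add: bounded_lin_scale[OF bounded_lin_funpow] cscale_cscale cscale_sum mult.commute)

lemma op_psum_comm:
  assumes K: "bounded_lin K" and Z: "bounded_lin Z" and c: "\<And>x. K (Z x) = Z (K x)"
  shows "K (op_psum a Z N x) = op_psum a Z N (K x)"
proof -
  have p: "K ((Z ^^ k) x) = (Z ^^ k) (K x)" for k x
    by (induction k) (simp_all add: c)
  show ?thesis unfolding op_psum_def by (simp add: bounded_lin_sum[OF K] bounded_lin_scale[OF K] p)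
qed

lemma bounded_lin_op_series:
  assumes s: "summable (\<lambda>k. \<bar>a k\<bar>)" and Z: "contraction Z"
  shows "bounded_lin (op_series a Z)"
proof -
  have bZ: "bounded_lin Z" using Z by (simp add: contraction_def)
  have add: "op_series a Z (x + y) = op_series a Z x + op_series a Z y" for x y
  proof (rule op_series_eqI[OF s Z])
    show "hlim (\<lambda>N. op_psum a Z N (x + y)) (op_series a Z x + op_series a Z y)"
      unfolding op_psum_add[OF bZ] by (intro hlim_add op_series_hlim[OF s Z])
  qed
  have scale: "op_series a Z (cscale c x) = cscale c (op_series a Z x)" for c x
  proof (rule op_series_eqI[OF s Z])
    show "hlim (\<lambda>N. op_psum a Z N (cscale c x)) (cscale c (op_series a Z x))"
      unfolding op_psum_scale[OF bZ] by (intro hlim_scale op_series_hlim[OF s Z])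
  qed
  have bd: "hnorm (op_series a Z x) \<le> suminf (\<lambda>k. \<bar>a k\<bar>) * hnorm x" for x
  proof -
    have "(\<lambda>N. hnorm (op_psum a Z N x)) \<longlonglongrightarrow> hnorm (op_series a Z x)" using hlim_norm[OF op_series_hlim[OF s Z]] .
    moreover have "hnorm (op_psum a Z N x) \<le> suminf (\<lambda>k. \<bar>a k\<bar>) * hnorm x" for N
    proof -
      have "hnorm (op_psum a Z N x) \<le> (\<Sum>k<N. \<bar>a k\<bar>) * hnorm x" unfolding op_psum_def by (rule norm_op_terms_sum_le[OF Z])
      also have "\<dots> \<le> suminf (\<lambda>k. \<bar>a k\<bar>) * hnorm x"
        using sum_le_suminf[OF s, of "{..<N}"] by (intro mult_right_mono) auto
      finally show ?thesis .
    qed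
    ultimately show ?thesis by (intro LIMSEQ_le_const2) auto
  qed
  show ?thesis unfolding bounded_lin_def using add scale bd by blast
qed

lemma op_series_comm:
  assumes s: "summable (\<lambda>k. \<bar>a k\<bar>)" and Z: "contraction Z" and K: "bounded_lin K" and c: "\<And>x. K (Z x) = Z (K x)"
  shows "K (op_series a Z x) = op_series a Z (K x)"
proof -
  have bZ: "bounded_lin Z" using Z by (simp add: contraction_def)
  have "hlim (\<lambda>N. K (op_psum a Z N x)) (K (op_series a Z x))" by (rule bounded_lin_hlim[OF K op_series_hlim[OF s Z]])
  then have "hlim (\<lambda>N. op_psum a Z N (K x)) (K (op_series a Z x))" unfolding op_psum_comm[OF K bZ c] .
  then show ?thesis using op_series_eqI[OF s Z] by metis
qed

lemma op_psum_hermitian: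
  assumes Z: "hermitian Z"
  shows "hinner (op_psum a Z N x) y = hinner x (op_psum a Z N y)"
proof -
  have "hinner (op_psum a Z N x) y = (\<Sum>k<N. complex_of_real (a k) * hinner ((Z ^^ k) x) y)"
    unfolding op_psum_def by (simp add: hinner_sum_left hinner_scale_left)
  also have "\<dots> = (\<Sum>k<N. complex_of_real (a k) * hinner x ((Z ^^ k) y))"
    using hermitian_funpow[OF Z] by (simp add: hermitian_def)
  also have "\<dots> = hinner x (op_psum a Z N y)"
    unfolding op_psum_def by (simp add: hinner_sum_right hinner_scale_right)
  finally show ?thesis .
qed

lemma hermitian_op_series:
  assumes s: "summable (\<lambda>k. \<bar>a k\<bar>)" and Z: "contraction Z" "hermitian Z"
  shows "hermitian (op_series a Z)"
  unfolding hermitian_def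
proof (intro allI)
  fix x y
  have "(\<lambda>N. hinner (op_psum a Z N x) y) \<longlonglongrightarrow> hinner (op_series a Z x) y" by (rule hlim_inner_left[OF op_series_hlim[OF s Z(1)]])
  moreover have "(\<lambda>N. hinner x (op_psum a Z N y)) \<longlonglongrightarrow> hinner x (op_series a Z y)" by (rule hlim_inner_right[OF op_series_hlim[OF s Z(1)]])
  ultimately show "hinner (op_series a Z x) y = hinner x (op_series a Z y)"
    unfolding op_psum_hermitian[OF Z(2)] using LIMSEQ_unique by blast
qed

text \<open>Taylor coefficients of \<open>(1 - z)\<^sup>1\<^sup>/\<^sup>2\<close> at \<open>0\<close>.\<close>

definition sqrt_coeff :: "nat \<Rightarrow> real" where "sqrt_coeff n = (-1)^n * ((1/2::real) gchoose n)"

lemma sqrt_coeff_pochhammer: "sqrt_coeff n = pochhammer (-1/2) n / fact n"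
  unfolding sqrt_coeff_def gbinomial_pochhammer by (simp add: mult.assoc[symmetric] power_mult_distrib[symmetric])

lemma sqrt_coeff_0: "sqrt_coeff 0 = 1" by (simp add: sqrt_coeff_def)

lemma sqrt_coeff_nonpos: "n \<ge> 1 \<Longrightarrow> sqrt_coeff n \<le> 0"
proof -
  assume "n \<ge> 1"
  then obtain m where m: "n = Suc m" by (cases n) auto
  have "pochhammer (-1/2::real) (Suc m) = (-1/2) * pochhammer (1/2) m"
    by (simp add: pochhammer_rec)
  moreover have "pochhammer (1/2::real) m > 0" by (rule pochhammer_pos) simp
  ultimately have "pochhammer (-1/2::real) n \<le> 0" using m by simp
  then show ?thesis unfolding sqrt_coeff_pochhammer by (simp add: divide_nonpos_pos)
qed

lemma sqrt_coeff_partial_sum_nonneg: "0 \<le> (\<Sum>k<N. sqrt_coeff k)"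
proof (cases N)
  case 0 then show ?thesis by simp
next
  case (Suc n)
  have "(\<Sum>k<Suc n. sqrt_coeff k) = (\<Sum>k\<le>n. ((1/2::real) gchoose k) * (- 1) ^ k)"
    unfolding sqrt_coeff_def lessThan_Suc_atMost by (simp add: mult.commute)
  also have "\<dots> = (- 1) ^ n * ((1/2 - 1) gchoose n)" by (rule gbinomial_sum_lower_neg)
  also have "\<dots> = pochhammer (1/2) n / fact n"
    unfolding gbinomial_pochhammer by (simp add: mult.assoc[symmetric] power_mult_distrib[symmetric])
  also have "\<dots> \<ge> 0" by (intro divide_nonneg_pos pochhammer_nonneg) auto
  finally show ?thesis using Suc by simp
qed

lemma sqrt_coeff_abs_sum_le: "(\<Sum>k<N. \<bar>sqrt_coeff k\<bar>) \<le> 2"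
proof (cases N)
  case 0 then show ?thesis by simp
next
  case (Suc n)
  have "(\<Sum>k<Suc n. \<bar>sqrt_coeff k\<bar>) = \<bar>sqrt_coeff 0\<bar> + (\<Sum>k<n. \<bar>sqrt_coeff (Suc k)\<bar>)" by (rule sum.lessThan_Suc_shift)
  also have "(\<Sum>k<n. \<bar>sqrt_coeff (Suc k)\<bar>) = - (\<Sum>k<n. sqrt_coeff (Suc k))"
    using sqrt_coeff_nonpos by (simp add: sum_negf[symmetric])
  also have "(\<Sum>k<n. sqrt_coeff (Suc k)) = (\<Sum>k<Suc n. sqrt_coeff k) - sqrt_coeff 0" using sum.lessThan_Suc_shift[of sqrt_coeff n] by simp
  finally have "(\<Sum>k<Suc n. \<bar>sqrt_coeff k\<bar>) = 2 - (\<Sum>k<Suc n. sqrt_coeff k)" by (simp add: sqrt_coeff_0)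
  then show ?thesis using sqrt_coeff_partial_sum_nonneg[of "Suc n"] Suc by simp
qed

lemma summable_abs_sqrt_coeff: "summable (\<lambda>k. \<bar>sqrt_coeff k\<bar>)"
  by (rule summableI_nonneg_bounded[where x=2]) (auto simp: sqrt_coeff_abs_sum_le)

lemma sqrt_coeff_convolution: "(\<Sum>i\<le>k. sqrt_coeff i * sqrt_coeff (k - i)) = (if k = 0 then 1 else if k = 1 then -1 else 0)"
proof -
  have "(\<Sum>i\<le>k. sqrt_coeff i * sqrt_coeff (k - i)) = (\<Sum>i\<le>k. (-1)^k * (((1/2::real) gchoose i) * ((1/2) gchoose (k - i))))"
  proof (rule sum.cong[OF refl])
    fix i assume "i \<in> {..k}"
    then have "(-1::real)^i * (-1)^(k - i) = (-1)^k" by (simp add: power_add[symmetric])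
    then show "sqrt_coeff i * sqrt_coeff (k - i) = (-1)^k * (((1/2::real) gchoose i) * ((1/2) gchoose (k - i)))"
      unfolding sqrt_coeff_def by (metis (no_types, lifting) mult.assoc mult.left_commute)
  qed
  also have "\<dots> = (-1)^k * (\<Sum>i=0..k. ((1/2::real) gchoose i) * ((1/2) gchoose (k - i)))"
    by (simp add: sum_distrib_left atLeast0AtMost)
  also have "(\<Sum>i=0..k. ((1/2::real) gchoose i) * ((1/2) gchoose (k - i))) = (1/2 + 1/2) gchoose k"
    by (rule gbinomial_Vandermonde)
  also have "((1/2 + 1/2 :: real) gchoose k) = of_nat (1 choose k)"
    using binomial_gbinomial[of 1 k, where 'a=real] by simp
  finally show ?thesis
    by (cases k; cases "k - 1") (auto simp: binomial_eq_0)
qed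

lemma pos_semidef_herm_form:
  assumes "bounded_lin Z" "hermitian Z" "pos_semidef Z"
  shows "herm_form UNIV (\<lambda>u v. hinner u (Z v))"
proof
  show "csubspace (UNIV :: 'a set)" by (simp add: csubspace_def)
  fix u v w :: 'a and c
  show "hinner v (Z u) = cnj (hinner u (Z v))" using assms(2) by (metis hinner_cnj hermitian_def)
  show "hinner u (Z (v + w)) = hinner u (Z v) + hinner u (Z w)" using assms(1) by (simp add: bounded_lin_add hinner_add_right)
  show "hinner u (Z (cscale c v)) = c * hinner u (Z v)" using assms(1) by (simp add: bounded_lin_scale hinner_scale_right)
  show "0 \<le> Re (hinner u (Z u))" using assms(3) unfolding pos_semidef_def by blast
qed

lemma pos_semidef_cauchy_schwarz:
  assumes "bounded_lin Z" "hermitian Z" "pos_semidef Z"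
  shows "(cmod (hinner u (Z v)))^2 \<le> Re (hinner u (Z u)) * Re (hinner v (Z v))"
  using herm_form.cauchy_schwarz_sq[OF pos_semidef_herm_form[OF assms]] by simp

lemma pos_semidef_zero:
  assumes "bounded_lin Z" "hermitian Z" "pos_semidef Z" "Re (hinner u (Z u)) = 0"
  shows "Z u = 0"
proof -
  have "(cmod (hinner u (Z (Z u))))^2 \<le> 0" using pos_semidef_cauchy_schwarz[OF assms(1-3), of u "Z u"] assms(4) by simp
  then have "hinner u (Z (Z u)) = 0" by simp
  then have "hinner (Z u) (Z u) = 0" using assms(2) by (simp add: hermitian_def)
  then show ?thesis by (simp add: hinner_self_zero_iff)
qed

lemma contractionI:
  assumes "bounded_lin Z" "hermitian Z" "pos_semidef Z" "\<And>x. Re (hinner x (Z x)) \<le> (hnorm x)^2"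
  shows "contraction Z"
  unfolding contraction_def
proof (intro conjI allI)
  show "bounded_lin Z" by fact
  fix x
  have "hinner x (Z (Z x)) = hinner (Z x) (Z x)" using assms(2) by (simp add: hermitian_def)
  then have e1: "hinner x (Z (Z x)) = complex_of_real ((hnorm (Z x))^2)"
    by (simp only: hinner_self_hnorm)
  have cm: "cmod (hinner x (Z (Z x))) = (hnorm (Z x))^2" unfolding e1 norm_of_real by simp
  have "((hnorm (Z x))^2)^2 \<le> Re (hinner x (Z x)) * Re (hinner (Z x) (Z (Z x)))"
    using pos_semidef_cauchy_schwarz[OF assms(1-3), of x "Z x"] unfolding cm .
  also have "\<dots> \<le> (hnorm x)^2 * (hnorm (Z x))^2"
  proof (rule mult_mono)
    show "Re (hinner x (Z x)) \<le> (hnorm x)^2" by fact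
    show "Re (hinner (Z x) (Z (Z x))) \<le> (hnorm (Z x))^2" by fact
    show "0 \<le> (hnorm x)^2" by simp
    show "0 \<le> Re (hinner (Z x) (Z (Z x)))" using assms(3) unfolding pos_semidef_def by blast
  qed
  finally have h: "(hnorm (Z x))^2 * (hnorm (Z x))^2 \<le> (hnorm x)^2 * (hnorm (Z x))^2"
    by (simp add: power2_eq_square)
  show "hnorm (Z x) \<le> hnorm x"
  proof (cases "hnorm (Z x) = 0")
    case True then show ?thesis by simp
  next
    case False
    then have p: "(hnorm (Z x))^2 > 0" by simp
    have "(hnorm (Z x))^2 \<le> (hnorm x)^2" using mult_right_le_imp_le[OF h p] .
    then show ?thesis using power2_le_imp_le hnorm_nonneg by blast
  qed
qed

definition cauchy_term :: "('a::chilbert \<Rightarrow> 'a) \<Rightarrow> 'a \<Rightarrow> nat \<Rightarrow> nat \<Rightarrow> 'a" where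
  "cauchy_term Z x i j = cscale (complex_of_real (sqrt_coeff i * sqrt_coeff j)) ((Z ^^ (i + j)) x)"

lemma funpow_add_apply: "(Z ^^ i) ((Z ^^ j) x) = (Z ^^ (i + j)) x"
  by (simp add: funpow_add)

lemma op_psum_op_psum:
  assumes Z: "bounded_lin Z"
  shows "op_psum sqrt_coeff Z N (op_psum sqrt_coeff Z M x) = (\<Sum>i<N. \<Sum>j<M. cauchy_term Z x i j)"
proof -
  have "op_psum sqrt_coeff Z N (op_psum sqrt_coeff Z M x) = (\<Sum>i<N. cscale (complex_of_real (sqrt_coeff i)) ((Z ^^ i) (\<Sum>j<M. cscale (complex_of_real (sqrt_coeff j)) ((Z ^^ j) x))))"
    unfolding op_psum_def by simp
  also have "\<dots> = (\<Sum>i<N. \<Sum>j<M. cauchy_term Z x i j)"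
  proof (rule sum.cong[OF refl])
    fix i
    have "(Z ^^ i) (\<Sum>j<M. cscale (complex_of_real (sqrt_coeff j)) ((Z ^^ j) x)) = (\<Sum>j<M. cscale (complex_of_real (sqrt_coeff j)) ((Z ^^ (i + j)) x))"
      by (simp add: bounded_lin_sum[OF bounded_lin_funpow[OF Z]] bounded_lin_scale[OF bounded_lin_funpow[OF Z]] funpow_add_apply)
    then show "cscale (complex_of_real (sqrt_coeff i)) ((Z ^^ i) (\<Sum>j<M. cscale (complex_of_real (sqrt_coeff j)) ((Z ^^ j) x))) = (\<Sum>j<M. cauchy_term Z x i j)"
      unfolding cauchy_term_def by (simp add: cscale_sum cscale_cscale)
  qed
  finally show ?thesis .
qed

lemma cauchy_terms_below_diag:
  assumes N: "N \<ge> 2"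
  shows "(\<Sum>i<N. \<Sum>j<N. if i + j < N then cauchy_term Z x i j else 0) = x - Z x"
proof -
  have "(\<Sum>i<N. \<Sum>j<N. if i + j < N then cauchy_term Z x i j else 0) = (\<Sum>i<N. \<Sum>j<N - i. cauchy_term Z x i j)"
  proof (rule sum.cong[OF refl])
    fix i assume "i \<in> {..<N}"
    have "(\<Sum>j\<in>{j \<in> {..<N}. i + j < N}. cauchy_term Z x i j) = (\<Sum>j<N. if i + j < N then cauchy_term Z x i j else 0)"
      by (rule sum.inter_filter) simp
    then have "(\<Sum>j<N. if i + j < N then cauchy_term Z x i j else 0) = (\<Sum>j\<in>{j \<in> {..<N}. i + j < N}. cauchy_term Z x i j)" by simp
    also have "{j \<in> {..<N}. i + j < N} = {..<N - i}" by auto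
    finally show "(\<Sum>j<N. if i + j < N then cauchy_term Z x i j else 0) = (\<Sum>j<N - i. cauchy_term Z x i j)" .
  qed
  also have "\<dots> = (\<Sum>(i,j)\<in>Sigma {..<N} (\<lambda>i. {..<N - i}). cauchy_term Z x i j)"
    by (rule sum.Sigma) auto
  also have "Sigma {..<N} (\<lambda>i. {..<N - i}) = {(i,j). i + j < N}" by auto
  also have "(\<Sum>(i,j)\<in>{(i,j). i + j < N}. cauchy_term Z x i j) = (\<Sum>k<N. \<Sum>i\<le>k. cauchy_term Z x i (k - i))"
    by (rule sum.triangle_reindex)
  also have "\<dots> = (\<Sum>k<N. cscale (complex_of_real (if k = 0 then 1 else if k = 1 then -1 else 0)) ((Z ^^ k) x))"
  proof (rule sum.cong[OF refl])
    fix k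
    have "(\<Sum>i\<le>k. cauchy_term Z x i (k - i)) = (\<Sum>i\<le>k. cscale (complex_of_real (sqrt_coeff i * sqrt_coeff (k - i))) ((Z ^^ k) x))"
      unfolding cauchy_term_def by (rule sum.cong) auto
    also have "\<dots> = cscale (\<Sum>i\<le>k. complex_of_real (sqrt_coeff i * sqrt_coeff (k - i))) ((Z ^^ k) x)"
      by (rule cscale_sum_left[symmetric])
    also have "(\<Sum>i\<le>k. complex_of_real (sqrt_coeff i * sqrt_coeff (k - i))) = complex_of_real (\<Sum>i\<le>k. sqrt_coeff i * sqrt_coeff (k - i))"
      by simp
    finally show "(\<Sum>i\<le>k. cauchy_term Z x i (k - i)) = cscale (complex_of_real (if k = 0 then 1 else if k = 1 then -1 else 0)) ((Z ^^ k) x)"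
      unfolding sqrt_coeff_convolution .
  qed
  also have "\<dots> = (\<Sum>k<2. cscale (complex_of_real (if k = 0 then 1 else if k = 1 then -1 else 0)) ((Z ^^ k) x))"
    using N by (intro sum.mono_neutral_right) auto
  also have "\<dots> = x - Z x" by (simp add: numeral_2_eq_2 cscale_one cscale_minus_one)
  finally show ?thesis .
qed

lemma cauchy_terms_above_diag_bound:
  assumes Z: "contraction Z"
  shows "hnorm (\<Sum>i<N. \<Sum>j<N. if N \<le> i + j then cauchy_term Z x i j else 0) \<le> 4 * (\<Sum>i\<in>{N div 2..<N}. \<bar>sqrt_coeff i\<bar>) * hnorm x"
proof -
  define h where "h = N div 2"
  define a where "a i = (if h \<le> i then \<bar>sqrt_coeff i\<bar> else 0)" for i
  have pt: "hnorm (if N \<le> i + j then cauchy_term Z x i j else 0) \<le> (a i * \<bar>sqrt_coeff j\<bar> + \<bar>sqrt_coeff i\<bar> * a j) * hnorm x" for i j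
  proof (cases "N \<le> i + j")
    case True
    have "hnorm (cauchy_term Z x i j) = \<bar>sqrt_coeff i * sqrt_coeff j\<bar> * hnorm ((Z ^^ (i + j)) x)" by (simp only: cauchy_term_def hnorm_scale norm_of_real)
    also have "\<dots> \<le> \<bar>sqrt_coeff i * sqrt_coeff j\<bar> * hnorm x" using contraction_funpow[OF Z] by (simp add: mult_left_mono)
    also have "\<bar>sqrt_coeff i * sqrt_coeff j\<bar> \<le> a i * \<bar>sqrt_coeff j\<bar> + \<bar>sqrt_coeff i\<bar> * a j"
    proof -
      have "h \<le> i \<or> h \<le> j" using True unfolding h_def by auto
      then show ?thesis unfolding a_def by (auto simp: abs_mult)
    qed
    then have "\<bar>sqrt_coeff i * sqrt_coeff j\<bar> * hnorm x \<le> (a i * \<bar>sqrt_coeff j\<bar> + \<bar>sqrt_coeff i\<bar> * a j) * hnorm x" by (simp add: mult_right_mono)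
    finally show ?thesis using True by simp
  next
    case False
    have "0 \<le> a i" "0 \<le> a j" unfolding a_def by auto
    then show ?thesis using False by simp
  qed
  have "hnorm (\<Sum>i<N. \<Sum>j<N. if N \<le> i + j then cauchy_term Z x i j else 0) \<le> (\<Sum>i<N. \<Sum>j<N. hnorm (if N \<le> i + j then cauchy_term Z x i j else 0))"
    by (rule order_trans[OF hnorm_sum sum_mono[OF hnorm_sum]])
  also have "\<dots> \<le> (\<Sum>i<N. \<Sum>j<N. (a i * \<bar>sqrt_coeff j\<bar> + \<bar>sqrt_coeff i\<bar> * a j) * hnorm x)"
    by (intro sum_mono pt)
  also have "\<dots> = (2 * ((\<Sum>i<N. a i) * (\<Sum>j<N. \<bar>sqrt_coeff j\<bar>))) * hnorm x"
  proof -
    have e1: "(\<Sum>i<N. \<Sum>j<N. (a i * \<bar>sqrt_coeff j\<bar> + \<bar>sqrt_coeff i\<bar> * a j) * hnorm x) = ((\<Sum>i<N. \<Sum>j<N. a i * \<bar>sqrt_coeff j\<bar>) + (\<Sum>i<N. \<Sum>j<N. \<bar>sqrt_coeff i\<bar> * a j)) * hnorm x"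
      by (simp add: sum.distrib distrib_right sum_distrib_right)
    have e2: "(\<Sum>i<N. \<Sum>j<N. a i * \<bar>sqrt_coeff j\<bar>) = (\<Sum>i<N. a i) * (\<Sum>j<N. \<bar>sqrt_coeff j\<bar>)" by (rule sum_product[symmetric])
    have e3: "(\<Sum>i<N. \<Sum>j<N. \<bar>sqrt_coeff i\<bar> * a j) = (\<Sum>i<N. \<bar>sqrt_coeff i\<bar>) * (\<Sum>j<N. a j)" by (rule sum_product[symmetric])
    show ?thesis unfolding e1 e2 e3 by simp
  qed
  also have "\<dots> \<le> (4 * (\<Sum>i<N. a i)) * hnorm x"
  proof -
    have "0 \<le> (\<Sum>i<N. a i)" unfolding a_def by (intro sum_nonneg) auto
    then have "(\<Sum>i<N. a i) * (\<Sum>j<N. \<bar>sqrt_coeff j\<bar>) \<le> (\<Sum>i<N. a i) * 2" using sqrt_coeff_abs_sum_le by (intro mult_left_mono) auto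
    then show ?thesis by (intro mult_right_mono) auto
  qed
  also have "(\<Sum>i<N. a i) = (\<Sum>i\<in>{h..<N}. \<bar>sqrt_coeff i\<bar>)"
    unfolding a_def by (rule sum.mono_neutral_cong_right) auto
  finally show ?thesis unfolding h_def by simp
qed

lemma hlim_op_psum_square:
  assumes Z: "contraction Z"
  shows "hlim (\<lambda>N. op_psum sqrt_coeff Z N (op_psum sqrt_coeff Z N x)) (x - Z x)"
proof (rule hlimI)
  fix e :: real assume e: "e > 0"
  have bZ: "bounded_lin Z" using Z by (simp add: contraction_def)
  define K where "K = 4 * (hnorm x + 1)"
  have "0 < hnorm x + 1" using hnorm_nonneg[of x] by linarith
  then have K: "K > 0" unfolding K_def by simp
  define e' where "e' = e / K"
  have e': "e' > 0" unfolding e'_def using e K by simp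
  obtain M where M: "\<forall>m\<ge>M. \<forall>n. norm (\<Sum>k\<in>{m..<n}. \<bar>sqrt_coeff k\<bar>) < e'"
    using summable_abs_sqrt_coeff e' unfolding summable_Cauchy by blast
  show "\<exists>N. \<forall>n\<ge>N. hnorm (op_psum sqrt_coeff Z n (op_psum sqrt_coeff Z n x) - (x - Z x)) < e"
  proof (intro exI[of _ "2 * M + 2"] allI impI)
    fix n assume n: "n \<ge> 2 * M + 2"
    have split: "(\<Sum>i<n. \<Sum>j<n. cauchy_term Z x i j) = (\<Sum>i<n. \<Sum>j<n. if i + j < n then cauchy_term Z x i j else 0) + (\<Sum>i<n. \<Sum>j<n. if n \<le> i + j then cauchy_term Z x i j else 0)"
      unfolding sum.distrib[symmetric] by (intro sum.cong refl) auto
    have "op_psum sqrt_coeff Z n (op_psum sqrt_coeff Z n x) - (x - Z x) = (\<Sum>i<n. \<Sum>j<n. if n \<le> i + j then cauchy_term Z x i j else 0)"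
      unfolding op_psum_op_psum[OF bZ] split cauchy_terms_below_diag[of n Z x] using n cauchy_terms_below_diag[of n Z x] by simp
    then have "hnorm (op_psum sqrt_coeff Z n (op_psum sqrt_coeff Z n x) - (x - Z x)) \<le> 4 * (\<Sum>i\<in>{n div 2..<n}. \<bar>sqrt_coeff i\<bar>) * hnorm x"
      using cauchy_terms_above_diag_bound[OF Z] by simp
    also have "\<dots> \<le> 4 * e' * hnorm x"
    proof -
      have "n div 2 \<ge> M" using n by auto
      then have "norm (\<Sum>k\<in>{n div 2..<n}. \<bar>sqrt_coeff k\<bar>) < e'" using M by blast
      then have "(\<Sum>k\<in>{n div 2..<n}. \<bar>sqrt_coeff k\<bar>) \<le> e'" by simp
      then show ?thesis by (intro mult_right_mono) auto
    qed
    also have "\<dots> < e"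
    proof -
      have "4 * e' * hnorm x < 4 * e' * (hnorm x + 1)" using e' by simp
      also have "\<dots> = e' * K" unfolding K_def by (simp add: algebra_simps)
      also have "\<dots> = e" unfolding e'_def using K by simp
      finally show ?thesis .
    qed
    finally show "hnorm (op_psum sqrt_coeff Z n (op_psum sqrt_coeff Z n x) - (x - Z x)) < e" .
  qed
qed

section \<open>Square roots of positive contractions\<close>

definition pos_contraction :: "('a::chilbert \<Rightarrow> 'a) \<Rightarrow> bool" where
  "pos_contraction Y \<longleftrightarrow> bounded_lin Y \<and> hermitian Y \<and> pos_semidef Y \<and> (\<forall>x. Re (hinner x (Y x)) \<le> (hnorm x)^2)"

definition bsqrt :: "('a::chilbert \<Rightarrow> 'a) \<Rightarrow> 'a \<Rightarrow> 'a" where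
  "bsqrt Y = op_series sqrt_coeff (\<lambda>x. x - Y x)"

lemma Re_hinner_le_norms: "Re (hinner x y) \<le> hnorm x * hnorm y"
  using complex_Re_le_cmod[of "hinner x y"] cauchy_schwarz[of x y] by linarith

lemma pos_contraction_complement:
  assumes "pos_contraction Y"
  shows "contraction (\<lambda>x. x - Y x)" "hermitian (\<lambda>x. x - Y x)"
proof -
  have bY: "bounded_lin Y" and sY: "hermitian Y" and pY: "pos_semidef Y" and lY: "\<And>x. Re (hinner x (Y x)) \<le> (hnorm x)^2"
    using assms by (auto simp: pos_contraction_def)
  have bZ: "bounded_lin (\<lambda>x. x - Y x)" by (rule bounded_lin_diff_op[OF bounded_lin_id bY])
  show sZ: "hermitian (\<lambda>x. x - Y x)" unfolding hermitian_def
    using sY by (simp add: hinner_diff_left hinner_diff_right hermitian_def)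
  have pZ: "pos_semidef (\<lambda>x. x - Y x)" unfolding pos_semidef_def
  proof
    fix x
    have "Im (hinner x (x - Y x)) = Im (hinner x x) - Im (hinner x (Y x))" by (simp add: hinner_diff_right)
    also have "\<dots> = 0" using hinner_self_Im[of x] pY by (simp add: pos_semidef_def)
    finally have "Im (hinner x (x - Y x)) = 0" .
    moreover have "Re (hinner x (x - Y x)) = (hnorm x)^2 - Re (hinner x (Y x))" by (simp add: hinner_diff_right hnorm_sq)
    ultimately show "Im (hinner x (x - Y x)) = 0 \<and> 0 \<le> Re (hinner x (x - Y x))" using lY[of x] by simp
  qed
  have "Re (hinner x (x - Y x)) \<le> (hnorm x)^2" for x
  proof -
    have "Re (hinner x (x - Y x)) = (hnorm x)^2 - Re (hinner x (Y x))" by (simp add: hinner_diff_right hnorm_sq)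
    moreover have "0 \<le> Re (hinner x (Y x))" using pY by (simp add: pos_semidef_def)
    ultimately show ?thesis by simp
  qed
  then show "contraction (\<lambda>x. x - Y x)" by (rule contractionI[OF bZ sZ pZ])
qed

lemma bounded_lin_bsqrt: "pos_contraction Y \<Longrightarrow> bounded_lin (bsqrt Y)"
  unfolding bsqrt_def by (rule bounded_lin_op_series[OF summable_abs_sqrt_coeff pos_contraction_complement(1)])

lemma hermitian_bsqrt: "pos_contraction Y \<Longrightarrow> hermitian (bsqrt Y)"
  unfolding bsqrt_def by (rule hermitian_op_series[OF summable_abs_sqrt_coeff pos_contraction_complement(1) pos_contraction_complement(2)])

lemma pos_semidef_bsqrt:
  assumes Y: "pos_contraction Y"
  shows "pos_semidef (bsqrt Y)"
  unfolding pos_semidef_def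
proof
  fix x
  define Z where "Z = (\<lambda>x. x - Y x)"
  have Zc: "contraction Z" "hermitian Z" using pos_contraction_complement[OF Y] unfolding Z_def by auto
  define s where "s N = hinner x (op_psum sqrt_coeff Z N x)" for N
  have lim: "s \<longlonglongrightarrow> hinner x (bsqrt Y x)"
    unfolding s_def bsqrt_def Z_def[symmetric] by (rule hlim_inner_right[OF op_series_hlim[OF summable_abs_sqrt_coeff Zc(1)]])
  have s_eq: "s N = (\<Sum>k<N. complex_of_real (sqrt_coeff k) * hinner x ((Z ^^ k) x))" for N
    unfolding s_def op_psum_def by (simp add: hinner_sum_right hinner_scale_right)
  have ImZ: "Im (hinner x ((Z ^^ k) x)) = 0" for k using hermitian_Im_hinner[OF hermitian_funpow[OF Zc(2)]] .
  have Im0: "Im (s N) = 0" for N unfolding s_eq Im_sum using ImZ by simp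
  have Re0: "0 \<le> Re (s N)" for N
  proof -
    have "Re (s N) = (\<Sum>k<N. sqrt_coeff k * Re (hinner x ((Z ^^ k) x)))" unfolding s_eq Re_sum using ImZ by simp
    also have "\<dots> \<ge> (\<Sum>k<N. sqrt_coeff k * (hnorm x)^2)"
    proof (rule sum_mono)
      fix k
      show "sqrt_coeff k * (hnorm x)^2 \<le> sqrt_coeff k * Re (hinner x ((Z ^^ k) x))"
      proof (cases k)
        case 0 then show ?thesis by (simp add: hnorm_sq)
      next
        case (Suc m)
        have "Re (hinner x ((Z ^^ k) x)) \<le> hnorm x * hnorm ((Z ^^ k) x)" by (rule Re_hinner_le_norms)
        also have "\<dots> \<le> hnorm x * hnorm x" using contraction_funpow[OF Zc(1)] by (simp add: mult_left_mono)
        finally have "Re (hinner x ((Z ^^ k) x)) \<le> (hnorm x)^2" by (simp add: power2_eq_square)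
        moreover have "sqrt_coeff k \<le> 0" using sqrt_coeff_nonpos Suc by simp
        ultimately show ?thesis by (simp add: mult_left_mono_neg)
      qed
    qed
    finally have "(\<Sum>k<N. sqrt_coeff k) * (hnorm x)^2 \<le> Re (s N)" by (simp add: sum_distrib_right)
    moreover have "0 \<le> (\<Sum>k<N. sqrt_coeff k) * (hnorm x)^2" using sqrt_coeff_partial_sum_nonneg by simp
    ultimately show ?thesis by linarith
  qed
  have "(\<lambda>N. Im (s N)) \<longlonglongrightarrow> Im (hinner x (bsqrt Y x))" by (rule tendsto_Im[OF lim])
  then have "Im (hinner x (bsqrt Y x)) = 0" using Im0 by (simp add: LIMSEQ_const_iff)
  moreover have "0 \<le> Re (hinner x (bsqrt Y x))"
    using tendsto_Re[OF lim] Re0 by (intro LIMSEQ_le_const) auto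
  ultimately show "Im (hinner x (bsqrt Y x)) = 0 \<and> 0 \<le> Re (hinner x (bsqrt Y x))" by simp
qed

lemma bsqrt_square:
  assumes Y: "pos_contraction Y"
  shows "bsqrt Y (bsqrt Y x) = Y x"
proof -
  define Z where "Z = (\<lambda>x. x - Y x)"
  have Zc: "contraction Z" using pos_contraction_complement[OF Y] unfolding Z_def by auto
  have bZ: "bounded_lin Z" using Zc by (simp add: contraction_def)
  define Q where "Q = bsqrt Y"
  have Qd: "Q = op_series sqrt_coeff Z" unfolding Q_def bsqrt_def Z_def ..
  have h1: "hlim (\<lambda>N. op_psum sqrt_coeff Z N (op_psum sqrt_coeff Z N x)) (x - Z x)" by (rule hlim_op_psum_square[OF Zc])
  have h2: "hlim (\<lambda>N. op_psum sqrt_coeff Z N (Q x)) (Q (Q x))" unfolding Qd by (rule op_series_hlim[OF summable_abs_sqrt_coeff Zc])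
  have h0: "hlim (\<lambda>N. op_psum sqrt_coeff Z N x) (Q x)" unfolding Qd by (rule op_series_hlim[OF summable_abs_sqrt_coeff Zc])
  have pd: "op_psum sqrt_coeff Z N u - op_psum sqrt_coeff Z N v = op_psum sqrt_coeff Z N (u - v)" for N u v
    using op_psum_add[OF bZ, of sqrt_coeff N v "u - v"] by simp
  have pb: "hnorm (op_psum sqrt_coeff Z N u) \<le> 2 * hnorm u" for N u
  proof -
    have "hnorm (op_psum sqrt_coeff Z N u) \<le> (\<Sum>k<N. \<bar>sqrt_coeff k\<bar>) * hnorm u" unfolding op_psum_def by (rule norm_op_terms_sum_le[OF Zc])
    also have "\<dots> \<le> 2 * hnorm u" using sqrt_coeff_abs_sum_le by (intro mult_right_mono) auto
    finally show ?thesis .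
  qed
  have h3: "hlim (\<lambda>N. op_psum sqrt_coeff Z N (op_psum sqrt_coeff Z N x)) (Q (Q x))"
  proof (rule hlim_bound)
    show "hnorm (op_psum sqrt_coeff Z N (op_psum sqrt_coeff Z N x) - Q (Q x)) \<le> 2 * hnorm (op_psum sqrt_coeff Z N x - Q x) + hnorm (op_psum sqrt_coeff Z N (Q x) - Q (Q x))" for N
    proof -
      have "hnorm (op_psum sqrt_coeff Z N (op_psum sqrt_coeff Z N x) - Q (Q x)) \<le> hnorm (op_psum sqrt_coeff Z N (op_psum sqrt_coeff Z N x) - op_psum sqrt_coeff Z N (Q x)) + hnorm (op_psum sqrt_coeff Z N (Q x) - Q (Q x))"
        by (rule hnorm_triangle_diff)
      moreover have "hnorm (op_psum sqrt_coeff Z N (op_psum sqrt_coeff Z N x) - op_psum sqrt_coeff Z N (Q x)) \<le> 2 * hnorm (op_psum sqrt_coeff Z N x - Q x)"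
        unfolding pd by (rule pb)
      ultimately show ?thesis by linarith
    qed
    have "(\<lambda>N. 2 * hnorm (op_psum sqrt_coeff Z N x - Q x) + hnorm (op_psum sqrt_coeff Z N (Q x) - Q (Q x))) \<longlonglongrightarrow> 2 * 0 + 0"
      using h0 h2 unfolding hlim_def by (intro tendsto_add tendsto_mult tendsto_const)
    then show "(\<lambda>N. 2 * hnorm (op_psum sqrt_coeff Z N x - Q x) + hnorm (op_psum sqrt_coeff Z N (Q x) - Q (Q x))) \<longlonglongrightarrow> 0" by simp
  qed
  have "Q (Q x) = x - Z x" using hlim_unique[OF h3 h1] .
  then show ?thesis unfolding Q_def Z_def by simp
qed

lemma bsqrt_comm:
  assumes Y: "pos_contraction Y" and K: "bounded_lin K" and c: "\<And>x. K (Y x) = Y (K x)"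
  shows "K (bsqrt Y x) = bsqrt Y (K x)"
  unfolding bsqrt_def
proof (rule op_series_comm[OF summable_abs_sqrt_coeff pos_contraction_complement(1)[OF Y] K])
  fix x show "K (x - Y x) = K x - Y (K x)" using c bounded_lin_diff[OF K] by simp
qed

lemma bsqrt_unique:
  assumes Y: "pos_contraction Y" and S: "bounded_lin S" "hermitian S" "pos_semidef S" and SS: "\<And>x. S (S x) = Y x"
  shows "S x = bsqrt Y x"
proof -
  define R where "R = bsqrt Y"
  have bR: "bounded_lin R" "hermitian R" "pos_semidef R" unfolding R_def using bounded_lin_bsqrt[OF Y] hermitian_bsqrt[OF Y] pos_semidef_bsqrt[OF Y] by auto
  have RR: "R (R u) = Y u" for u unfolding R_def by (rule bsqrt_square[OF Y])
  have SY: "S (Y u) = Y (S u)" for u using SS by metis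
  have SR: "S (R u) = R (S u)" for u unfolding R_def by (rule bsqrt_comm[OF Y S(1) SY])
  define y where "y = S x - R x"
  have "S y + R y = 0"
    unfolding y_def bounded_lin_diff[OF S(1)] bounded_lin_diff[OF bR(1)] SS RR SR by simp
  then have "hinner y (S y) + hinner y (R y) = 0" by (metis hinner_add_right hinner_zero_right)
  then have "Re (hinner y (S y)) + Re (hinner y (R y)) = 0" by (metis plus_complex.simps(1) zero_complex.simps(1))
  moreover have "0 \<le> Re (hinner y (S y))" "0 \<le> Re (hinner y (R y))" using S(3) bR(3) by (auto simp: pos_semidef_def)
  ultimately have "Re (hinner y (S y)) = 0" "Re (hinner y (R y)) = 0" by linarith+
  then have "S y = 0" "R y = 0" using pos_semidef_zero[OF S] pos_semidef_zero[OF bR] by auto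
  then have "hinner x (S y) - hinner x (R y) = 0" by simp
  then have "hinner (S x) y - hinner (R x) y = 0" using S(2) bR(2) by (simp add: hermitian_def)
  then have "hinner y y = 0" unfolding y_def by (simp add: hinner_diff_left)
  then have "y = 0" by (simp add: hinner_self_zero_iff)
  then show ?thesis unfolding y_def R_def by simp
qed

lemma pos_contraction_bsqrt:
  assumes Y: "pos_contraction Y"
  shows "pos_contraction (bsqrt Y)"
proof -
  have b: "bounded_lin (bsqrt Y)" "hermitian (bsqrt Y)" "pos_semidef (bsqrt Y)" using bounded_lin_bsqrt[OF Y] hermitian_bsqrt[OF Y] pos_semidef_bsqrt[OF Y] by auto
  have "Re (hinner x (bsqrt Y x)) \<le> (hnorm x)^2" for x
  proof -
    have "(hnorm (bsqrt Y x))^2 = Re (hinner (bsqrt Y x) (bsqrt Y x))" by (rule hnorm_sq)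
    also have "\<dots> = Re (hinner x (Y x))" using b(2) bsqrt_square[OF Y] by (simp add: hermitian_def)
    also have "\<dots> \<le> (hnorm x)^2" using Y by (simp add: pos_contraction_def)
    finally have "hnorm (bsqrt Y x) \<le> hnorm x" using power2_le_imp_le hnorm_nonneg by blast
    then have "hnorm x * hnorm (bsqrt Y x) \<le> hnorm x * hnorm x" by (simp add: mult_left_mono)
    then show ?thesis using Re_hinner_le_norms[of x "bsqrt Y x"] by (simp add: power2_eq_square)
  qed
  then show ?thesis using b by (simp add: pos_contraction_def)
qed

lemma pos_contraction_norm_le: "pos_contraction Y \<Longrightarrow> hnorm (Y x) \<le> hnorm x"
  using contractionI[of Y] unfolding pos_contraction_def contraction_def by blast

section \<open>Approximate eigenvalues of Hermitian operators\<close>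

lemma pos_semidef_norm_sq_le:
  assumes Q: "bounded_lin Q" "hermitian Q" "pos_semidef Q" and L: "0 \<le> L"
    and bound: "Re (hinner (Q x) (Q (Q x))) \<le> L * (hnorm (Q x))^2"
  shows "(hnorm (Q x))^2 \<le> L * Re (hinner x (Q x))"
proof (cases "Q x = 0")
  case True
  then show ?thesis by simp
next
  case False
  have "hinner x (Q (Q x)) = hinner (Q x) (Q x)" using Q(2) by (simp add: hermitian_def)
  also have "\<dots> = complex_of_real ((hnorm (Q x))^2)" by (rule hinner_self_hnorm)
  finally have "cmod (hinner x (Q (Q x))) = (hnorm (Q x))^2" by (simp only: norm_of_real) simp
  then have "((hnorm (Q x))^2)^2 \<le> Re (hinner x (Q x)) * Re (hinner (Q x) (Q (Q x)))"
    using pos_semidef_cauchy_schwarz[OF Q, of x "Q x"] by simp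
  also have "\<dots> \<le> Re (hinner x (Q x)) * (L * (hnorm (Q x))^2)"
    using bound Q(3) by (intro mult_left_mono) (auto simp: pos_semidef_def)
  finally have "(hnorm (Q x))^2 * (hnorm (Q x))^2 \<le> (L * Re (hinner x (Q x))) * (hnorm (Q x))^2"
    by (simp add: power2_eq_square algebra_simps)
  moreover have "0 < (hnorm (Q x))^2" using False by simp
  ultimately show ?thesis by (rule mult_right_le_imp_le)
qed

lemma bounded_lin_norm_sq_le_Sup:
  assumes Y: "bounded_lin Y"
  defines "S \<equiv> {(hnorm (Y v))^2 | v. hnorm v \<le> 1}"
  shows "bdd_above S" and "(hnorm (Y x))^2 \<le> Sup S * (hnorm x)^2"
proof -
  obtain K where K: "K > 0" "\<And>x. hnorm (Y x) \<le> K * hnorm x" using bounded_lin_bound[OF Y] by blast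
  show S_bdd: "bdd_above S"
  proof (rule bdd_aboveI[of _ "K^2"])
    fix s assume "s \<in> S"
    then obtain v where v: "s = (hnorm (Y v))^2" "hnorm v \<le> 1" unfolding S_def by auto
    have "K * hnorm v \<le> K" using v(2) K(1) by (simp add: mult_left_le)
    then have "hnorm (Y v) \<le> K" using K(2)[of v] by linarith
    then show "s \<le> K^2" using v(1) by (simp add: power_mono)
  qed
  show "(hnorm (Y x))^2 \<le> Sup S * (hnorm x)^2"
  proof (cases "x = 0")
    case True then show ?thesis using bounded_lin_zero[OF Y] by simp
  next
    case False
    then have nx: "hnorm x > 0" by (rule hnorm_pos)
    define x' where "x' = cscale (complex_of_real (1 / hnorm x)) x"
    have "hnorm x' = 1" unfolding x'_def hnorm_scale norm_of_real using nx False by simp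
    then have "(hnorm (Y x'))^2 \<in> S" unfolding S_def by auto
    then have "(hnorm (Y x'))^2 \<le> Sup S" using S_bdd by (rule cSup_upper)
    moreover have "hnorm (Y x') = hnorm (Y x) / hnorm x"
      unfolding x'_def bounded_lin_scale[OF Y] hnorm_scale norm_of_real using nx by simp
    ultimately have "(hnorm (Y x))^2 / (hnorm x)^2 \<le> Sup S" by (simp add: power_divide)
    then show ?thesis using nx False by (simp add: divide_le_eq)
  qed
qed

lemma bounded_lin_norm_approx:
  assumes Y: "bounded_lin Y" and nz: "Y x0 \<noteq> 0"
  obtains m where "m > 0" "\<And>y. hnorm (Y y) \<le> m * hnorm y"
    "\<And>e. e > 0 \<Longrightarrow> \<exists>x. hnorm x \<le> 1 \<and> m^2 - e < (hnorm (Y x))^2"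
proof -
  define S where "S = {(hnorm (Y v))^2 | v. hnorm v \<le> 1}"
  have S_ne: "S \<noteq> {}" unfolding S_def by (auto intro: exI[of _ 0])
  have sup: "(hnorm (Y x))^2 \<le> Sup S * (hnorm x)^2" for x
    unfolding S_def by (rule bounded_lin_norm_sq_le_Sup(2)[OF Y])
  have "0 < (hnorm (Y x0))^2" using nz by (simp add: hnorm_pos)
  also have "\<dots> \<le> Sup S * (hnorm x0)^2" by (rule sup)
  finally have S_pos: "Sup S > 0" by (simp add: zero_less_mult_iff)
  show ?thesis
  proof
    show "sqrt (Sup S) > 0" using S_pos by simp
    show "hnorm (Y y) \<le> sqrt (Sup S) * hnorm y" for y
    proof (rule power2_le_imp_le)
      show "(hnorm (Y y))^2 \<le> (sqrt (Sup S) * hnorm y)^2" using sup[of y] S_pos by (simp add: power_mult_distrib)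
    qed (use S_pos in simp)
    show "\<exists>x. hnorm x \<le> 1 \<and> (sqrt (Sup S))^2 - e < (hnorm (Y x))^2" if e: "e > 0" for e
    proof -
      obtain s where "s \<in> S" "Sup S - e < s" using less_cSupD[OF S_ne, of "Sup S - e"] e by auto
      then obtain x where "hnorm x \<le> 1" "Sup S - e < (hnorm (Y x))^2" unfolding S_def by blast
      then show ?thesis using S_pos by auto
    qed
  qed
qed

lemma hermitian_square_shift_norm_sq_le:
  assumes Y: "bounded_lin Y" "hermitian Y" and m: "m > 0" "\<And>y. hnorm (Y y) \<le> m * hnorm y"
  shows "(hnorm (cscale (complex_of_real (m^2)) x - Y (Y x)))^2
    \<le> (2 * m^2) * (m^2 * (hnorm x)^2 - (hnorm (Y x))^2)"
proof -
  define Q where "Q x = cscale (complex_of_real (m^2)) x - Y (Y x)" for x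
  have Q_lin: "bounded_lin Q" unfolding Q_def
    by (rule bounded_lin_diff_op[OF bounded_lin_scale_op[OF bounded_lin_id] bounded_lin_comp[OF Y(1) Y(1)]])
  have Q_herm: "hermitian Q" unfolding Q_def hermitian_def using Y(2)
    by (simp add: hermitian_def hinner_diff_left hinner_diff_right hinner_scale_left hinner_scale_right)
  have Q_form: "Re (hinner x (Q x)) = m^2 * (hnorm x)^2 - (hnorm (Y x))^2" for x
  proof -
    have "hinner x (Y (Y x)) = hinner (Y x) (Y x)" using Y(2) by (simp add: hermitian_def)
    then show ?thesis unfolding Q_def by (simp add: hinner_diff_right hinner_scale_right hinner_self_hnorm)
  qed
  have "(hnorm (Y x))^2 \<le> m^2 * (hnorm x)^2" for x
    using m(2)[of x] by (metis hnorm_nonneg power_mono power_mult_distrib)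
  then have Q_pos: "pos_semidef Q" unfolding pos_semidef_def
    using hermitian_Im_hinner[OF Q_herm] by (simp add: Q_form)
  have Q_bound: "hnorm (Q y) \<le> (2 * m^2) * hnorm y" for y
  proof -
    have "hnorm (Y (Y y)) \<le> m * (m * hnorm y)"
      using m(2)[of "Y y"] mult_left_mono[OF m(2)[of y], of m] m(1) by linarith
    then have "hnorm (Y (Y y)) \<le> m^2 * hnorm y" by (simp add: power2_eq_square mult.assoc)
    moreover have "hnorm (Q y) \<le> hnorm (cscale (complex_of_real (m^2)) y) + hnorm (Y (Y y))"
      unfolding Q_def using hnorm_triangle[of "cscale (complex_of_real (m^2)) y" "- Y (Y y)"]
      by (metis diff_conv_add_uminus hnorm_minus)
    moreover have "hnorm (cscale (complex_of_real (m^2)) y) = m^2 * hnorm y"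
      unfolding hnorm_scale norm_of_real by simp
    ultimately show ?thesis by linarith
  qed
  have "(hnorm (Q x))^2 \<le> (2 * m^2) * Re (hinner x (Q x))"
  proof (rule pos_semidef_norm_sq_le[OF Q_lin Q_herm Q_pos])
    have "Re (hinner (Q x) (Q (Q x))) \<le> hnorm (Q x) * hnorm (Q (Q x))" by (rule Re_hinner_le_norms)
    also have "\<dots> \<le> hnorm (Q x) * ((2 * m^2) * hnorm (Q x))" by (intro mult_left_mono Q_bound) simp
    finally show "Re (hinner (Q x) (Q (Q x))) \<le> (2 * m^2) * (hnorm (Q x))^2"
      by (simp add: power2_eq_square mult_ac)
  qed simp
  then show ?thesis unfolding Q_form unfolding Q_def .
qed

text \<open>If both \<open>m - Y\<close> and \<open>m + Y\<close> were bounded below, so would be \<open>m\<^sup>2 - Y\<^sup>2\<close>;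
  but \<open>m\<^sup>2 - Y\<^sup>2\<close> is small on the almost norming vectors of \<open>Y\<close>.\<close>

lemma hermitian_shifts_not_both_bounded_below:
  assumes Y: "bounded_lin Y" "hermitian Y" and m: "m > 0" "\<And>y. hnorm (Y y) \<le> m * hnorm y"
    and approx: "\<And>e. e > 0 \<Longrightarrow> \<exists>x. hnorm x \<le> 1 \<and> m^2 - e < (hnorm (Y x))^2"
  shows "\<not> ((\<exists>c>0. \<forall>y. c * hnorm y \<le> hnorm (cscale (complex_of_real m) y - Y y))
    \<and> (\<exists>c>0. \<forall>y. c * hnorm y \<le> hnorm (cscale (complex_of_real m) y + Y y)))"
proof
  define Q where "Q x = cscale (complex_of_real (m^2)) x - Y (Y x)" for x
  assume "(\<exists>c>0. \<forall>y. c * hnorm y \<le> hnorm (cscale (complex_of_real m) y - Y y))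
    \<and> (\<exists>c>0. \<forall>y. c * hnorm y \<le> hnorm (cscale (complex_of_real m) y + Y y))"
  then obtain c1 c2 where c: "c1 > 0" "c2 > 0"
    "\<And>y. c1 * hnorm y \<le> hnorm (cscale (complex_of_real m) y - Y y)"
    "\<And>y. c2 * hnorm y \<le> hnorm (cscale (complex_of_real m) y + Y y)" by blast
  define c where "c = c1 * c2"
  have "c > 0" unfolding c_def using c(1,2) by simp
  have c_Q: "c * hnorm x \<le> hnorm (Q x)" for x
  proof -
    let ?p = "cscale (complex_of_real m) x + Y x"
    have "Q x = cscale (complex_of_real m) ?p - Y ?p" unfolding Q_def
      by (simp add: cscale_add_right cscale_cscale bounded_lin_add[OF Y(1)] bounded_lin_scale[OF Y(1)] power2_eq_square)
    moreover have "c1 * (c2 * hnorm x) \<le> c1 * hnorm ?p" using c(1) c(4)[of x] by (intro mult_left_mono) auto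
    ultimately show ?thesis using c(3)[of ?p] unfolding c_def by (simp add: mult.assoc)
  qed
  define e where "e = min (m^2 / 2) (c^2 / (8 * m^2))"
  have e: "e > 0" unfolding e_def using m(1) \<open>c > 0\<close> by simp
  obtain x where x: "hnorm x \<le> 1" "m^2 - e < (hnorm (Y x))^2" using approx[OF e] by blast
  have "e \<le> m^2 / 2" "e \<le> c^2 / (8 * m^2)" unfolding e_def by simp_all
  have "(hnorm (Y x))^2 \<le> m^2 * (hnorm x)^2" using m(2)[of x] by (metis hnorm_nonneg power_mono power_mult_distrib)
  then have "m^2 * (1/2) < m^2 * (hnorm x)^2" using x(2) \<open>e \<le> m^2 / 2\<close> by linarith
  then have x_big: "1/2 < (hnorm x)^2" using m(1) by (simp add: mult_less_cancel_left_pos)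
  have "m^2 * (hnorm x)^2 \<le> m^2" using x(1) by (simp add: mult_left_le power_le_one)
  then have "m^2 * (hnorm x)^2 - (hnorm (Y x))^2 < e" using x(2) by linarith
  then have "(2 * m^2) * (m^2 * (hnorm x)^2 - (hnorm (Y x))^2) < (2 * m^2) * e"
    using m(1) by (intro mult_strict_left_mono) auto
  also have "\<dots> \<le> (2 * m^2) * (c^2 / (8 * m^2))" using \<open>e \<le> c^2 / (8 * m^2)\<close> by (intro mult_left_mono) auto
  also have "\<dots> = c^2 * (1/4)" using m(1) by (simp add: field_simps)
  finally have "(hnorm (Q x))^2 < c^2 * (1/4)"
    using hermitian_square_shift_norm_sq_le[OF Y m, of x] unfolding Q_def by linarith
  moreover have "(c * hnorm x)^2 \<le> (hnorm (Q x))^2" using c_Q \<open>c > 0\<close> by (intro power_mono) auto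
  moreover have "c^2 * (1/2) < c^2 * (hnorm x)^2" using x_big \<open>c > 0\<close> by (intro mult_strict_left_mono) auto
  ultimately show False using zero_le_power2[of "hnorm (Q x)"] unfolding power_mult_distrib by linarith
qed

lemma hermitian_approx_eigenvalue:
  assumes Y: "bounded_lin Y" "hermitian Y" and nz: "Y x0 \<noteq> 0"
  obtains t where "t \<noteq> 0" "\<And>y. hnorm (Y y) \<le> \<bar>t\<bar> * hnorm y"
    "\<And>c. c > 0 \<Longrightarrow> \<exists>y. hnorm (cscale (complex_of_real t) y - Y y) < c * hnorm y"
proof -
  obtain m where m: "m > 0" "\<And>y. hnorm (Y y) \<le> m * hnorm y"
    "\<And>e. e > 0 \<Longrightarrow> \<exists>x. hnorm x \<le> 1 \<and> m^2 - e < (hnorm (Y x))^2"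
    using bounded_lin_norm_approx[OF Y(1) nz] by blast
  note not_both = hermitian_shifts_not_both_bounded_below[OF Y m]
  show ?thesis
  proof (cases "\<exists>c>0. \<forall>y. c * hnorm y \<le> hnorm (cscale (complex_of_real m) y - Y y)")
    case False
    show ?thesis
    proof (rule that[of m])
      show "hnorm (Y y) \<le> \<bar>m\<bar> * hnorm y" for y using m(1,2) by simp
      show "\<exists>y. hnorm (cscale (complex_of_real m) y - Y y) < c * hnorm y" if "c > 0" for c
        using False that by (auto simp: not_le)
    qed (use m(1) in simp)
  next
    case True
    have neg: "hnorm (cscale (complex_of_real (- m)) y - Y y) = hnorm (cscale (complex_of_real m) y + Y y)" for y
    proof -
      have "cscale (complex_of_real (- m)) y - Y y = - (cscale (complex_of_real m) y + Y y)"
        by (simp add: cscale_minus_left)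
      then show ?thesis by (metis hnorm_minus)
    qed
    show ?thesis
    proof (rule that[of "- m"])
      show "hnorm (Y y) \<le> \<bar>- m\<bar> * hnorm y" for y using m(1,2) by simp
      show "\<exists>y. hnorm (cscale (complex_of_real (- m)) y - Y y) < c * hnorm y" if "c > 0" for c
        using not_both True that unfolding neg by (auto simp: not_le)
    qed (use m(1) in simp)
  qed
qed

section \<open>Resolvent and spectrum of a nonnegative self-adjoint operator\<close>

lemma infdist_geI:
  assumes "A \<noteq> {}" "\<And>a. a \<in> A \<Longrightarrow> e \<le> dist x a"
  shows "e \<le> infdist x A"
  unfolding infdist_notempty[OF assms(1)] using assms by (intro cINF_greatest) auto

locale nonneg_sa =
  fixes D :: "'a::chilbert set" and T :: "'a \<Rightarrow> 'a"
  assumes sa: "self_adjoint D T" and nn: "nonneg_op D T"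
begin

lemma D_subspace: "csubspace D" using self_adjoint_subspace[OF sa] .

lemma nonneg_Im: "x \<in> D \<Longrightarrow> Im (hinner x (T x)) = 0" using nn by (simp add: nonneg_op_def)
lemma nonneg_Re: "x \<in> D \<Longrightarrow> 0 \<le> Re (hinner x (T x))" using nn by (simp add: nonneg_op_def)

lemma norm_le_norm_T_plus: "z \<in> D \<Longrightarrow> hnorm z \<le> hnorm (T z + z)"
proof -
  assume z: "z \<in> D"
  have "(hnorm z)^2 \<le> Re (hinner z (T z)) + (hnorm z)^2" using nonneg_Re[OF z] by simp
  also have "\<dots> = Re (hinner z (T z + z))" by (simp add: hinner_add_right hnorm_sq)
  also have "\<dots> \<le> hnorm z * hnorm (T z + z)" by (rule Re_hinner_le_norms)
  finally have "hnorm z * hnorm z \<le> hnorm z * hnorm (T z + z)" by (simp add: power2_eq_square)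
  then show ?thesis
    by (cases "hnorm z = 0") (auto simp: mult_le_cancel_left_pos less_le)
qed

lemma cscale_Re_Im: "cscale lam z = cscale (complex_of_real (Re lam)) z + cscale (\<i> * complex_of_real (Im lam)) z"
proof -
  have "lam = complex_of_real (Re lam) + \<i> * complex_of_real (Im lam)" by (simp add: complex_eq_iff)
  then show ?thesis by (metis cscale_add_left)
qed

lemma norm_T_minus_sq:
  assumes z: "z \<in> D"
  shows "(hnorm (T z - cscale lam z))^2 = (hnorm (T z - cscale (complex_of_real (Re lam)) z))^2 + (Im lam)^2 * (hnorm z)^2"
proof -
  define u where "u = T z - cscale (complex_of_real (Re lam)) z"
  define w where "w = cscale (\<i> * complex_of_real (Im lam)) z"
  have e: "T z - cscale lam z = u - w" unfolding u_def w_def by (subst cscale_Re_Im) (simp add: algebra_simps)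
  have Iu: "Im (hinner u z) = 0"
  proof -
    have "hinner u z = cnj (hinner z (T z)) - complex_of_real (Re lam) * hinner z z"
      unfolding u_def by (simp add: hinner_diff_left hinner_scale_left hinner_cnj[of "T z" z])
    then show ?thesis using nonneg_Im[OF z] hinner_self_Im[of z] by simp
  qed
  have "Re (hinner u w) = 0"
  proof -
    have "hinner u w = (\<i> * complex_of_real (Im lam)) * hinner u z" unfolding w_def by (rule hinner_scale_right)
    then show ?thesis using Iu by simp
  qed
  moreover have "(hnorm w)^2 = (Im lam)^2 * (hnorm z)^2" unfolding w_def by (simp add: hnorm_scale power_mult_distrib norm_mult)
  ultimately show ?thesis unfolding e hnorm_diff_sq u_def by simp
qed

lemma norm_T_minus_cnj: "z \<in> D \<Longrightarrow> hnorm (T z - cscale (cnj lam) z) = hnorm (T z - cscale lam z)"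
proof -
  assume z: "z \<in> D"
  have "(hnorm (T z - cscale (cnj lam) z))^2 = (hnorm (T z - cscale lam z))^2"
    using norm_T_minus_sq[OF z, of lam] norm_T_minus_sq[OF z, of "cnj lam"] by simp
  then show ?thesis using power2_eq_imp_eq hnorm_nonneg by blast
qed

lemma resolvent_setI:
  assumes c: "c > 0" and bb: "\<And>z. z \<in> D \<Longrightarrow> c * hnorm z \<le> hnorm (T z - cscale lam z)"
  shows "lam \<in> resolvent_set D T"
proof -
  have inj: "inj_on (\<lambda>x. T x - cscale lam x) D"
  proof (rule inj_onI)
    fix z1 z2 assume z: "z1 \<in> D" "z2 \<in> D" "T z1 - cscale lam z1 = T z2 - cscale lam z2"
    have "c * hnorm (z1 - z2) \<le> 0" using bb[OF csubspace_diff[OF D_subspace z(1,2)]] self_adjoint_shift_diff[OF sa z(1,2)] z(3) by simp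
    then have "hnorm (z1 - z2) \<le> 0" using c by (simp add: mult_le_0_iff)
    then show "z1 = z2" using hnorm_nonneg[of "z1 - z2"] hnorm_zero_iff[of "z1 - z2"] by simp
  qed
  have surj: "(\<lambda>x. T x - cscale lam x) ` D = UNIV"
  proof -
    have "\<exists>z\<in>D. T z - cscale lam z = y" for y
    proof (rule self_adjoint_surj[OF sa c bb])
      fix z assume z: "z \<in> D" "T z - cscale (cnj lam) z = 0"
      have "hnorm (T z - cscale lam z) = hnorm (T z - cscale (cnj lam) z)" using norm_T_minus_cnj[OF z(1), of lam] by simp
      then have "hnorm (T z - cscale lam z) = 0" using z(2) by simp
      then have "c * hnorm z \<le> 0" using bb[OF z(1)] by simp
      then have "hnorm z \<le> 0" using c by (simp add: mult_le_0_iff)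
      then show "z = 0" using hnorm_nonneg[of z] hnorm_zero_iff[of z] by simp
    qed
    then show ?thesis by (metis (mono_tags, lifting) UNIV_eq_I image_eqI)
  qed
  have K: "\<forall>x\<in>D. hnorm x \<le> (1/c) * hnorm (T x - cscale lam x)"
  proof
    fix x assume "x \<in> D"
    then have "c * hnorm x \<le> hnorm (T x - cscale lam x)" by (rule bb)
    then show "hnorm x \<le> (1/c) * hnorm (T x - cscale lam x)" using c by (simp add: field_simps)
  qed
  show ?thesis unfolding resolvent_set_def bij_betw_def using inj surj K by blast
qed

lemma resolvent_set_bound:
  assumes "lam \<in> resolvent_set D T"
  shows "\<exists>K>0. \<forall>z\<in>D. hnorm z \<le> K * hnorm (T z - cscale lam z)"
proof -
  obtain K where K: "\<forall>x\<in>D. hnorm x \<le> K * hnorm (T x - cscale lam x)" using assms unfolding resolvent_set_def by blast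
  have "\<forall>z\<in>D. hnorm z \<le> (\<bar>K\<bar> + 1) * hnorm (T z - cscale lam z)"
  proof
    fix z assume "z \<in> D"
    then have "hnorm z \<le> K * hnorm (T z - cscale lam z)" using K by blast
    also have "\<dots> \<le> (\<bar>K\<bar> + 1) * hnorm (T z - cscale lam z)" by (intro mult_right_mono) auto
    finally show "hnorm z \<le> (\<bar>K\<bar> + 1) * hnorm (T z - cscale lam z)" .
  qed
  then show ?thesis by (intro exI[of _ "\<bar>K\<bar> + 1"]) auto
qed

lemma resolvent_set_ball:
  assumes K: "K > 0" "\<And>z. z \<in> D \<Longrightarrow> hnorm z \<le> K * hnorm (T z - cscale lam z)"
    and mu: "cmod (mu - lam) < 1 / K"
  shows "mu \<in> resolvent_set D T"
proof (rule resolvent_setI)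
  show "0 < 1 / K - cmod (mu - lam)" using mu by simp
  fix z assume z: "z \<in> D"
  have e: "T z - cscale lam z = (T z - cscale mu z) + cscale (mu - lam) z" by (simp add: cscale_diff_left algebra_simps)
  have "hnorm (T z - cscale lam z) \<le> hnorm (T z - cscale mu z) + cmod (mu - lam) * hnorm z"
    unfolding e using hnorm_triangle[of "T z - cscale mu z" "cscale (mu - lam) z"] by (simp add: hnorm_scale)
  moreover have "(1 / K) * hnorm z \<le> hnorm (T z - cscale lam z)" using K(2)[OF z] K(1) by (simp add: field_simps)
  ultimately show "(1 / K - cmod (mu - lam)) * hnorm z \<le> hnorm (T z - cscale mu z)" by (simp add: algebra_simps)
qed

lemma resolvent_set_ball_m1:
  assumes mu: "cmod (mu + 1) < 1"
  shows "mu \<in> resolvent_set D T"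
proof (rule resolvent_setI)
  show "0 < 1 - cmod (mu + 1)" using mu by simp
  fix z assume z: "z \<in> D"
  have e: "T z + z = (T z - cscale mu z) + cscale (mu + 1) z" by (simp add: cscale_add_left cscale_one algebra_simps)
  have "hnorm (T z + z) \<le> hnorm (T z - cscale mu z) + cmod (mu + 1) * hnorm z"
    unfolding e using hnorm_triangle[of "T z - cscale mu z" "cscale (mu + 1) z"] by (simp add: hnorm_scale)
  then show "(1 - cmod (mu + 1)) * hnorm z \<le> hnorm (T z - cscale mu z)" using norm_le_norm_T_plus[OF z] by (simp add: algebra_simps)
qed

lemma spectrum_far_from_m1: "s \<in> spectrum_op D T \<Longrightarrow> 1 \<le> cmod (s + 1)"
  using resolvent_set_ball_m1[of s] unfolding spectrum_op_def by force

definition res :: "complex \<Rightarrow> 'a \<Rightarrow> 'a" where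
  "res lam y = (THE z. z \<in> D \<and> T z - cscale lam z = y)"

lemma ex1_shift_preimage:
  assumes "lam \<in> resolvent_set D T"
  shows "\<exists>!z. z \<in> D \<and> T z - cscale lam z = y"
proof -
  define f where "f x = T x - cscale lam x" for x
  have "bij_betw f D UNIV" using assms unfolding resolvent_set_def f_def by blast
  then have inj: "inj_on f D" and "f ` D = UNIV" by (simp_all add: bij_betw_def)
  then obtain z where z: "z \<in> D" "f z = y" by (metis UNIV_I imageE)
  moreover have "z' = z" if "z' \<in> D" "f z' = y" for z' using inj_onD[OF inj, of z' z] that z by simp
  ultimately show ?thesis unfolding f_def by blast
qed

lemma res_in_D: "lam \<in> resolvent_set D T \<Longrightarrow> res lam y \<in> D"
  and T_res: "lam \<in> resolvent_set D T \<Longrightarrow> T (res lam y) - cscale lam (res lam y) = y"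
  using theI'[OF ex1_shift_preimage[of lam y]] unfolding res_def by auto

lemma res_T: "lam \<in> resolvent_set D T \<Longrightarrow> z \<in> D \<Longrightarrow> res lam (T z - cscale lam z) = z"
  unfolding res_def by (rule the1_equality[OF ex1_shift_preimage]) auto

lemma res_eq_0: "lam \<in> resolvent_set D T \<Longrightarrow> res lam y = 0 \<Longrightarrow> y = 0"
  using T_res[of lam y] self_adjoint_zero[OF sa] by simp

lemma bounded_lin_res:
  assumes lam: "lam \<in> resolvent_set D T"
  shows "bounded_lin (res lam)"
proof -
  obtain K where K: "K > 0" "\<And>z. z \<in> D \<Longrightarrow> hnorm z \<le> K * hnorm (T z - cscale lam z)"
    using resolvent_set_bound[OF lam] by blast
  note in_D = res_in_D[OF lam]
  have "res lam (x + y) = res lam x + res lam y" for x y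
    using res_T[OF lam csubspace_add[OF D_subspace in_D in_D]] self_adjoint_shift_add[OF sa in_D in_D] T_res[OF lam]
    by simp
  moreover have "res lam (cscale c x) = cscale c (res lam x)" for c x
    using res_T[OF lam csubspace_scale[OF D_subspace in_D]] self_adjoint_shift_scale[OF sa in_D] T_res[OF lam]
    by simp
  moreover have "hnorm (res lam y) \<le> K * hnorm y" for y using K(2)[OF in_D] T_res[OF lam] by simp
  ultimately show ?thesis unfolding bounded_lin_def by blast
qed

lemma hermitian_res:
  assumes r: "complex_of_real r \<in> resolvent_set D T"
  shows "hermitian (res (complex_of_real r))"
  unfolding hermitian_def
proof (intro allI)
  fix x y
  let ?R = "res (complex_of_real r)"
  have "hinner (?R x) y = hinner (?R x) (T (?R y) - cscale (complex_of_real r) (?R y))" using T_res[OF r] by simp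
  also have "\<dots> = hinner (T (?R x)) (?R y) - complex_of_real r * hinner (?R x) (?R y)"
    using self_adjoint_sym[OF sa res_in_D[OF r] res_in_D[OF r]] by (simp add: hinner_diff_right hinner_scale_right)
  also have "\<dots> = hinner (T (?R x) - cscale (complex_of_real r) (?R x)) (?R y)"
    by (simp add: hinner_diff_left hinner_scale_left)
  also have "\<dots> = hinner x (?R y)" using T_res[OF r] by simp
  finally show "hinner (?R x) y = hinner x (?R y)" .
qed

text \<open>An approximate eigenvalue \<open>t\<close> of the resolvent at \<open>r\<close> gives the spectral point
  \<open>r + 1/t\<close>, because \<open>T - (r + 1/t)\<close> maps \<open>res r y\<close> to \<open>(res r y - t y) / t\<close>.\<close>

lemma spectrum_if_res_approx_eigenvalue:
  assumes r: "complex_of_real r \<in> resolvent_set D T" and t: "t \<noteq> 0"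
    and approx: "\<And>c. c > 0 \<Longrightarrow> \<exists>y. hnorm (cscale (complex_of_real t) y - res (complex_of_real r) y) < c * hnorm y"
  shows "complex_of_real (r + 1 / t) \<in> spectrum_op D T"
proof (rule ccontr)
  assume "complex_of_real (r + 1 / t) \<notin> spectrum_op D T"
  then have "complex_of_real (r + 1 / t) \<in> resolvent_set D T" unfolding spectrum_op_def by simp
  then obtain K where K: "K > 0"
    "\<And>z. z \<in> D \<Longrightarrow> hnorm z \<le> K * hnorm (T z - cscale (complex_of_real (r + 1 / t)) z)"
    using resolvent_set_bound by blast
  define c where "c = t^2 / (2 * (\<bar>t\<bar> + K))"
  have c: "c > 0" unfolding c_def using t K(1) by (simp add: add_pos_pos)
  obtain y where y: "hnorm (cscale (complex_of_real t) y - res (complex_of_real r) y) < c * hnorm y"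
    using approx[OF c] by blast
  define z where "z = res (complex_of_real r) y"
  define \<delta> where "\<delta> = hnorm (cscale (complex_of_real t) y - z)"
  have "0 < c * hnorm y" using y unfolding z_def by (metis hnorm_nonneg le_less_trans)
  then have ny: "0 < hnorm y" using c by (simp add: zero_less_mult_iff)
  have "T z - cscale (complex_of_real (r + 1 / t)) z
      = (T z - cscale (complex_of_real r) z) - cscale (complex_of_real (1 / t)) z"
    by (simp add: cscale_add_left algebra_simps)
  also have "\<dots> = cscale (complex_of_real (1 / t)) (cscale (complex_of_real t) y - z)"
    unfolding z_def T_res[OF r] using t by (simp add: cscale_diff_right cscale_cscale cscale_one)
  finally have eq: "T z - cscale (complex_of_real (r + 1 / t)) z
      = cscale (complex_of_real (1 / t)) (cscale (complex_of_real t) y - z)" .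
  have "hnorm (T z - cscale (complex_of_real (r + 1 / t)) z) = \<delta> / \<bar>t\<bar>"
    unfolding eq hnorm_scale norm_of_real \<delta>_def by simp
  moreover have "z \<in> D" unfolding z_def by (rule res_in_D[OF r])
  ultimately have z_le: "hnorm z \<le> K * (\<delta> / \<bar>t\<bar>)" using K(2) by metis
  have "\<bar>t\<bar> * hnorm y \<le> \<delta> + hnorm z"
    using hnorm_triangle[of "cscale (complex_of_real t) y - z" z] unfolding \<delta>_def by (simp add: hnorm_scale)
  then have ty: "\<bar>t\<bar> * hnorm y \<le> \<delta> + K * (\<delta> / \<bar>t\<bar>)" using z_le by linarith
  have "t^2 * hnorm y = \<bar>t\<bar> * (\<bar>t\<bar> * hnorm y)" by (metis abs_mult_self_eq mult.assoc power2_eq_square)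
  also have "\<dots> \<le> \<bar>t\<bar> * (\<delta> + K * (\<delta> / \<bar>t\<bar>))" using ty by (intro mult_left_mono) auto
  also have "\<dots> = \<delta> * (\<bar>t\<bar> + K)" using t by (simp add: field_simps)
  also have "\<dots> < c * hnorm y * (\<bar>t\<bar> + K)"
    using y K(1) unfolding \<delta>_def z_def by (intro mult_strict_right_mono) auto
  also have "\<dots> = t^2 * hnorm y / 2" unfolding c_def using K(1) by (simp add: field_simps)
  finally show False using t ny by simp
qed

lemma real_resolvent_spectrum:
  assumes r: "complex_of_real r \<in> resolvent_set D T" and nt: "(x0::'a) \<noteq> 0"
  obtains s where "complex_of_real s \<in> spectrum_op D T"
    "\<And>z. z \<in> D \<Longrightarrow> \<bar>s - r\<bar> * hnorm z \<le> hnorm (T z - cscale (complex_of_real r) z)"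
proof -
  have "res (complex_of_real r) x0 \<noteq> 0" using res_eq_0[OF r] nt by blast
  then obtain t where t: "t \<noteq> 0" "\<And>y. hnorm (res (complex_of_real r) y) \<le> \<bar>t\<bar> * hnorm y"
    "\<And>c. c > 0 \<Longrightarrow> \<exists>y. hnorm (cscale (complex_of_real t) y - res (complex_of_real r) y) < c * hnorm y"
    using hermitian_approx_eigenvalue[OF bounded_lin_res[OF r] hermitian_res[OF r]] by blast
  show ?thesis
  proof (rule that)
    show "complex_of_real (r + 1 / t) \<in> spectrum_op D T"
      by (rule spectrum_if_res_approx_eigenvalue[OF r t(1) t(3)])
    fix z assume z: "z \<in> D"
    have "hnorm z \<le> \<bar>t\<bar> * hnorm (T z - cscale (complex_of_real r) z)"
      using t(2)[of "T z - cscale (complex_of_real r) z"] res_T[OF r z] by simp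
    then show "\<bar>r + 1 / t - r\<bar> * hnorm z \<le> hnorm (T z - cscale (complex_of_real r) z)"
      using t(1) by (simp add: divide_le_eq mult.commute)
  qed
qed

lemma spectrum_nonempty: "(x0::'a) \<noteq> 0 \<Longrightarrow> spectrum_op D T \<noteq> {}"
proof -
  assume nt: "x0 \<noteq> 0"
  have "complex_of_real (-1) \<in> resolvent_set D T" by (rule resolvent_set_ball_m1) simp
  then obtain s where "complex_of_real s \<in> spectrum_op D T" using real_resolvent_spectrum[OF _ nt] by blast
  then show ?thesis by blast
qed

lemma infdist_norm_le:
  assumes lam: "lam \<in> resolvent_set D T" and nt: "(x0::'a) \<noteq> 0" and z: "z \<in> D"
  shows "infdist lam (spectrum_op D T) * hnorm z \<le> hnorm (T z - cscale lam z)"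
proof -
  define d where "d = infdist lam (spectrum_op D T)"
  have d0: "0 \<le> d" unfolding d_def by (rule infdist_nonneg)
  have sp: "(hnorm (T z - cscale lam z))^2 = (hnorm (T z - cscale (complex_of_real (Re lam)) z))^2 + (Im lam)^2 * (hnorm z)^2"
    by (rule norm_T_minus_sq[OF z])
  have "(d * hnorm z)^2 \<le> (hnorm (T z - cscale lam z))^2"
  proof (cases "complex_of_real (Re lam) \<in> resolvent_set D T")
    case True
    obtain s where s: "complex_of_real s \<in> spectrum_op D T"
      "\<bar>s - Re lam\<bar> * hnorm z \<le> hnorm (T z - cscale (complex_of_real (Re lam)) z)"
      using real_resolvent_spectrum[OF True nt] z by blast
    have "d \<le> dist lam (complex_of_real s)" unfolding d_def by (rule infdist_le[OF s(1)])
    then have "d^2 \<le> (cmod (lam - complex_of_real s))^2" using d0 by (simp add: dist_norm power_mono)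
    also have "\<dots> = (Re lam - s)^2 + (Im lam)^2" by (simp add: cmod_power2)
    finally have dd: "d^2 \<le> (s - Re lam)^2 + (Im lam)^2" by (simp add: power2_commute)
    have "(\<bar>s - Re lam\<bar> * hnorm z)^2 \<le> (hnorm (T z - cscale (complex_of_real (Re lam)) z))^2"
      using s(2) by (intro power_mono) auto
    then have "(s - Re lam)^2 * (hnorm z)^2 \<le> (hnorm (T z - cscale (complex_of_real (Re lam)) z))^2"
      by (simp add: power_mult_distrib)
    moreover have "d^2 * (hnorm z)^2 \<le> ((s - Re lam)^2 + (Im lam)^2) * (hnorm z)^2"
      using dd by (intro mult_right_mono) auto
    ultimately show ?thesis unfolding sp by (simp add: power_mult_distrib algebra_simps)
  next
    case False
    then have "complex_of_real (Re lam) \<in> spectrum_op D T" unfolding spectrum_op_def by simp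
    then have "d \<le> dist lam (complex_of_real (Re lam))" unfolding d_def by (rule infdist_le)
    also have "dist lam (complex_of_real (Re lam)) = \<bar>Im lam\<bar>"
      by (simp add: dist_norm cmod_def)
    finally have "d^2 \<le> (Im lam)^2" using d0 by (metis abs_le_square_iff abs_of_nonneg)
    then have "d^2 * (hnorm z)^2 \<le> (Im lam)^2 * (hnorm z)^2" by (intro mult_right_mono) auto
    then show ?thesis unfolding sp power_mult_distrib using zero_le_power2[of "hnorm (T z - cscale (complex_of_real (Re lam)) z)"] by linarith
  qed
  then show ?thesis unfolding d_def using d0 by (meson power2_le_imp_le hnorm_nonneg)
qed

lemma infdist_spectrum_pos:
  assumes lam: "lam \<in> resolvent_set D T" and ne: "spectrum_op D T \<noteq> {}"
  shows "0 < infdist lam (spectrum_op D T)"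
proof -
  obtain K where K: "K > 0" "\<forall>z\<in>D. hnorm z \<le> K * hnorm (T z - cscale lam z)" using resolvent_set_bound[OF lam] by blast
  have "1 / K \<le> dist lam s" if s: "s \<in> spectrum_op D T" for s
  proof (rule ccontr)
    assume "\<not> 1 / K \<le> dist lam s"
    then have "cmod (s - lam) < 1 / K" by (simp add: dist_norm norm_minus_commute)
    then have "s \<in> resolvent_set D T" using resolvent_set_ball[OF K(1)] K(2) by blast
    then show False using s unfolding spectrum_op_def by simp
  qed
  then have "1 / K \<le> infdist lam (spectrum_op D T)" by (rule infdist_geI[OF ne])
  moreover have "0 < 1 / K" using K(1) by simp
  ultimately show ?thesis by linarith
qed

lemma cmod_plus_1_le_infdist:
  assumes ne: "spectrum_op D T \<noteq> {}"
  shows "cmod lam + 1 \<le> 5 * max (infdist lam (spectrum_op D T)) (cmod (lam + 1))"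
proof -
  have tri: "cmod lam \<le> cmod (lam + 1) + 1" using norm_triangle_ineq4[of "lam + 1" 1] by simp
  show ?thesis
  proof (cases "1/2 \<le> cmod (lam + 1)")
    case True
    then show ?thesis using tri by (simp add: max_def)
  next
    case False
    have "1/2 \<le> dist lam s" if s: "s \<in> spectrum_op D T" for s
    proof -
      have "1 \<le> cmod (s + 1)" by (rule spectrum_far_from_m1[OF s])
      also have "cmod (s + 1) \<le> cmod (s - lam) + cmod (lam + 1)" using norm_triangle_ineq[of "s - lam" "lam + 1"] by simp
      finally show ?thesis using False by (simp add: dist_norm norm_minus_commute)
    qed
    then have "1/2 \<le> infdist lam (spectrum_op D T)" by (rule infdist_geI[OF ne])
    then show ?thesis using tri False by (simp add: max_def)
  qed
qed

end

section \<open>The square root of a nonnegative self-adjoint operator\<close>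

context nonneg_sa begin

definition B :: "'a \<Rightarrow> 'a" where "B = res (-1)"

lemma minus_one_resolvent: "-1 \<in> resolvent_set D T"
  by (rule resolvent_set_ball_m1) simp

lemma B_in_D: "B y \<in> D" and T_B_plus_B: "T (B y) + B y = y"
  using res_in_D[OF minus_one_resolvent] T_res[OF minus_one_resolvent, of y]
  by (simp_all add: B_def cscale_minus_one)

lemma B_T_plus: "z \<in> D \<Longrightarrow> B (T z + z) = z"
  using res_T[OF minus_one_resolvent] by (simp add: B_def cscale_minus_one)

lemma T_B: "T (B y) = y - B y" using T_B_plus_B[of y] by (simp add: algebra_simps)

lemma bounded_lin_B: "bounded_lin B"
  unfolding B_def by (rule bounded_lin_res[OF minus_one_resolvent])

lemma hermitian_B: "hermitian B"
  using hermitian_res[of "-1"] minus_one_resolvent by (simp add: B_def)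

lemma hinner_B: "hinner x (B x) = cnj (hinner (B x) (T (B x))) + hinner (B x) (B x)"
proof -
  have "hinner x (B x) = hinner (T (B x) + B x) (B x)" using T_B_plus_B by simp
  also have "\<dots> = hinner (T (B x)) (B x) + hinner (B x) (B x)" by (rule hinner_add_left)
  finally show ?thesis by (metis hinner_cnj)
qed

lemma pos_contraction_B: "pos_contraction B"
proof -
  have p: "Im (hinner x (B x)) = 0 \<and> 0 \<le> Re (hinner x (B x))" for x
    unfolding hinner_B using nonneg_Im[OF B_in_D] nonneg_Re[OF B_in_D] hinner_self_Im[of "B x"] hinner_nonneg[of "B x"] by simp
  have l: "Re (hinner x (B x)) \<le> (hnorm x)^2" for x
  proof -
    have "Re (hinner x (B x)) \<le> hnorm x * hnorm (B x)" by (rule Re_hinner_le_norms)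
    also have "\<dots> \<le> hnorm x * hnorm x" using norm_le_norm_T_plus[OF B_in_D] T_B_plus_B by (simp add: mult_left_mono)
    finally show ?thesis by (simp add: power2_eq_square)
  qed
  show ?thesis unfolding pos_contraction_def pos_semidef_def using bounded_lin_B hermitian_B p l by blast
qed

lemma B_eq_0: "B y = 0 \<Longrightarrow> y = 0"
  unfolding B_def by (rule res_eq_0[OF minus_one_resolvent])

definition IB :: "'a \<Rightarrow> 'a" where "IB x = x - B x"

lemma pos_contraction_IB: "pos_contraction IB"
proof -
  have b: "bounded_lin IB" unfolding IB_def by (rule bounded_lin_diff_op[OF bounded_lin_id bounded_lin_B])
  have s: "hermitian IB" unfolding IB_def hermitian_def using hermitian_B by (simp add: hinner_diff_left hinner_diff_right hermitian_def)
  have pB: "Im (hinner x (B x)) = 0" "0 \<le> Re (hinner x (B x))" "Re (hinner x (B x)) \<le> (hnorm x)^2" for x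
    using pos_contraction_B by (auto simp: pos_contraction_def pos_semidef_def)
  have "Im (hinner x (IB x)) = 0 \<and> 0 \<le> Re (hinner x (IB x))" for x
    unfolding IB_def using pB[of x] hinner_self_Im[of x] by (simp add: hinner_diff_right hnorm_sq)
  moreover have "Re (hinner x (IB x)) \<le> (hnorm x)^2" for x
    unfolding IB_def using pB[of x] by (simp add: hinner_diff_right hnorm_sq)
  ultimately show ?thesis unfolding pos_contraction_def pos_semidef_def using b s by blast
qed

definition C :: "'a \<Rightarrow> 'a" where "C = bsqrt B"
definition E :: "'a \<Rightarrow> 'a" where "E = bsqrt IB"

text \<open>The fourth root \<open>G\<close> of \<open>B\<close> is only needed to see that \<open>E C = G E G\<close> is positive.\<close>

definition G :: "'a \<Rightarrow> 'a" where "G = bsqrt C"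

lemma pos_contraction_C: "pos_contraction C" unfolding C_def by (rule pos_contraction_bsqrt[OF pos_contraction_B])
lemma pos_contraction_E: "pos_contraction E" unfolding E_def by (rule pos_contraction_bsqrt[OF pos_contraction_IB])
lemma pos_contraction_G: "pos_contraction G" unfolding G_def by (rule pos_contraction_bsqrt[OF pos_contraction_C])

lemma bounded_lin_C: "bounded_lin C" and bounded_lin_E: "bounded_lin E"
  and hermitian_C: "hermitian C" and hermitian_E: "hermitian E" and hermitian_G: "hermitian G"
  using pos_contraction_C pos_contraction_E pos_contraction_G by (auto simp: pos_contraction_def)

lemma C_square: "C (C x) = B x" unfolding C_def by (rule bsqrt_square[OF pos_contraction_B])
lemma E_square: "E (E x) = x - B x" unfolding E_def using bsqrt_square[OF pos_contraction_IB] by (simp add: IB_def)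
lemma G_square: "G (G x) = C x" unfolding G_def by (rule bsqrt_square[OF pos_contraction_C])

lemma E_B_comm: "E (B x) = B (E x)"
proof -
  have "B (IB x) = IB (B x)" for x unfolding IB_def by (simp add: bounded_lin_diff[OF bounded_lin_B])
  then show ?thesis unfolding E_def by (intro bsqrt_comm[OF pos_contraction_IB bounded_lin_B, symmetric]) auto
qed

lemma E_C_comm: "E (C x) = C (E x)"
  unfolding C_def by (rule bsqrt_comm[OF pos_contraction_B bounded_lin_E E_B_comm])

lemma E_G_comm: "E (G x) = G (E x)"
  unfolding G_def by (rule bsqrt_comm[OF pos_contraction_C bounded_lin_E E_C_comm])

lemma C_eq_0: "C x = 0 \<Longrightarrow> x = 0"
proof -
  assume "C x = 0"
  then have "B x = 0" using C_square[of x] bounded_lin_zero[OF bounded_lin_C] by metis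
  then show ?thesis by (rule B_eq_0)
qed

lemma pos_semidef_E_C: "Im (hinner x (E (C x))) = 0 \<and> 0 \<le> Re (hinner x (E (C x)))"
proof -
  have "hinner x (E (C x)) = hinner x (G (E (G x)))" using G_square[of x] E_G_comm[of "G x"] by metis
  also have "\<dots> = hinner (G x) (E (G x))" using hermitian_G by (simp add: hermitian_def)
  finally show ?thesis using pos_contraction_E by (simp add: pos_contraction_def pos_semidef_def)
qed

lemma C_square_plus_E_square: "x = C (C x) + E (E x)" using C_square E_square by simp

lemma norm_C_le: "hnorm (C x) \<le> hnorm x" using pos_contraction_norm_le[OF pos_contraction_C] .
lemma norm_E_le: "hnorm (E x) \<le> hnorm x" using pos_contraction_norm_le[OF pos_contraction_E] .

definition ran_C :: "'a set" where "ran_C = range C"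
definition C_inv :: "'a \<Rightarrow> 'a" where "C_inv y = (THE w. C w = y)"
text \<open>Formally \<open>C\<^sup>2 = (T + 1)\<inverse>\<close> and \<open>E\<^sup>2 = T (T + 1)\<inverse>\<close>, so \<open>E C\<inverse>\<close> is \<open>T\<^sup>1\<^sup>/\<^sup>2\<close> on the range of \<open>C\<close>;
  outside it the value \<open>0\<close> matches the normalisation in \<open>op_sqrt\<close>.\<close>

definition sqrtT :: "'a \<Rightarrow> 'a" where "sqrtT y = (if y \<in> ran_C then E (C_inv y) else 0)"

lemma C_inj: "C w1 = C w2 \<Longrightarrow> w1 = w2"
  using C_eq_0[of "w1 - w2"] bounded_lin_diff[OF bounded_lin_C, of w1 w2] by simp

lemma C_inv_C[simp]: "C_inv (C w) = w"
  unfolding C_inv_def using C_inj by blast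

lemma sqrtT_C[simp]: "sqrtT (C w) = E w"
  unfolding sqrtT_def ran_C_def by simp

lemma csubspace_ran_C: "csubspace ran_C"
  unfolding csubspace_def ran_C_def
proof (intro conjI ballI allI)
  show "0 \<in> range C" using bounded_lin_zero[OF bounded_lin_C] by (metis rangeI)
  fix x y assume "x \<in> range C" "y \<in> range C"
  then obtain w v where "x = C w" "y = C v" by auto
  then show "x + y \<in> range C" using bounded_lin_add[OF bounded_lin_C, of w v] by (metis rangeI)
next
  fix c x assume "x \<in> range C"
  then obtain w where "x = C w" by auto
  then show "cscale c x \<in> range C" using bounded_lin_scale[OF bounded_lin_C, of c w] by (metis rangeI)
qed

lemma D_eq_C_C: "x \<in> D \<Longrightarrow> x = C (C (T x + x))"
  using C_square B_T_plus by simp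

lemma D_subset_ran_C: "D \<subseteq> ran_C"
  unfolding ran_C_def using D_eq_C_C by (metis rangeI subsetI)

lemma dense_ran_C: "dense_set ran_C"
  using self_adjoint_dense[OF sa] D_subset_ran_C unfolding dense_set_def by blast

lemma ran_CE: "y \<in> ran_C \<Longrightarrow> (\<And>w. y = C w \<Longrightarrow> P) \<Longrightarrow> P"
  unfolding ran_C_def by blast

lemma sqrtT_add: "x \<in> ran_C \<Longrightarrow> y \<in> ran_C \<Longrightarrow> sqrtT (x + y) = sqrtT x + sqrtT y"
  by (elim ran_CE) (metis sqrtT_C bounded_lin_add[OF bounded_lin_C] bounded_lin_add[OF bounded_lin_E])

lemma sqrtT_scale: "x \<in> ran_C \<Longrightarrow> sqrtT (cscale c x) = cscale c (sqrtT x)"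
  by (elim ran_CE) (metis sqrtT_C bounded_lin_scale[OF bounded_lin_C] bounded_lin_scale[OF bounded_lin_E])

lemma sqrtT_sym: "x \<in> ran_C \<Longrightarrow> y \<in> ran_C \<Longrightarrow> hinner (sqrtT x) y = hinner x (sqrtT y)"
proof -
  assume "x \<in> ran_C" "y \<in> ran_C"
  then obtain w v where wv: "x = C w" "y = C v" unfolding ran_C_def by auto
  have "hinner (E w) (C v) = hinner w (E (C v))" using hermitian_E hermitian_C by (simp add: hermitian_def)
  also have "\<dots> = hinner w (C (E v))" by (simp add: E_C_comm)
  also have "\<dots> = hinner (C w) (E v)" using hermitian_C by (simp add: hermitian_def)
  finally show ?thesis using wv by simp
qed

lemma sqrtT_outside: "x \<notin> ran_C \<Longrightarrow> sqrtT x = 0" unfolding sqrtT_def by simp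

lemma lin_op_sqrtT: "lin_op ran_C sqrtT"
  unfolding lin_op_def using csubspace_ran_C sqrtT_add sqrtT_scale by blast

lemma adj_dom_sqrtT: "adj_dom ran_C sqrtT = ran_C" and adj_sqrtT: "\<forall>y\<in>ran_C. adj ran_C sqrtT y = sqrtT y"
proof -
  show "adj_dom ran_C sqrtT = ran_C"
  proof
    show "ran_C \<subseteq> adj_dom ran_C sqrtT" unfolding adj_dom_def using sqrtT_sym by blast
    show "adj_dom ran_C sqrtT \<subseteq> ran_C"
    proof
      fix y assume "y \<in> adj_dom ran_C sqrtT"
      then obtain z where z: "\<forall>x\<in>ran_C. hinner (sqrtT x) y = hinner x z" unfolding adj_dom_def by blast
      have "hinner w (E y) = hinner w (C z)" for w
      proof -
        have "hinner (sqrtT (C w)) y = hinner (C w) z" using z unfolding ran_C_def by blast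
        then show ?thesis using hermitian_E hermitian_C by (simp add: hermitian_def)
      qed
      then have Ey: "E y = C z" using dense_hinner_eq[OF dense_UNIV] by blast
      have "y = C (C y) + E (E y)" by (rule C_square_plus_E_square)
      also have "\<dots> = C (C y) + C (E z)" using Ey E_C_comm by simp
      also have "\<dots> = C (C y + E z)" using bounded_lin_add[OF bounded_lin_C] by simp
      finally show "y \<in> ran_C" unfolding ran_C_def by (metis rangeI)
    qed
  qed
  show "\<forall>y\<in>ran_C. adj ran_C sqrtT y = sqrtT y"
    using adj_unique[OF dense_ran_C] sqrtT_sym by metis
qed

lemma self_adjoint_sqrtT: "self_adjoint ran_C sqrtT"
  unfolding self_adjoint_def using dense_ran_C lin_op_sqrtT adj_dom_sqrtT adj_sqrtT by blast

lemma nonneg_op_sqrtT: "nonneg_op ran_C sqrtT"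
  unfolding nonneg_op_def
proof
  fix x assume "x \<in> ran_C"
  then obtain w where w: "x = C w" unfolding ran_C_def by auto
  have "hinner (C w) (E w) = hinner w (C (E w))" using hermitian_C by (simp add: hermitian_def)
  also have "\<dots> = hinner w (E (C w))" by (simp add: E_C_comm)
  finally show "Im (hinner x (sqrtT x)) = 0 \<and> 0 \<le> Re (hinner x (sqrtT x))" using w pos_semidef_E_C[of w] by simp
qed

lemma D_eq_sqrtT_dom: "D = {x \<in> ran_C. sqrtT x \<in> ran_C}"
proof
  show "D \<subseteq> {x \<in> ran_C. sqrtT x \<in> ran_C}"
  proof
    fix x assume x: "x \<in> D"
    define y where "y = T x + x"
    have "x = C (C y)" using D_eq_C_C[OF x] unfolding y_def .
    then have "sqrtT x = C (E y)" by (simp add: E_C_comm)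
    then show "x \<in> {x \<in> ran_C. sqrtT x \<in> ran_C}" using D_subset_ran_C x unfolding ran_C_def by auto
  qed
  show "{x \<in> ran_C. sqrtT x \<in> ran_C} \<subseteq> D"
  proof
    fix x assume "x \<in> {x \<in> ran_C. sqrtT x \<in> ran_C}"
    then obtain w v where w: "x = C w" "E w = C v" unfolding ran_C_def by auto
    have "w = C (C w) + E (E w)" by (rule C_square_plus_E_square)
    also have "\<dots> = C (C w) + C (E v)" using w(2) E_C_comm by simp
    also have "\<dots> = C (C w + E v)" using bounded_lin_add[OF bounded_lin_C] by simp
    finally have "x = B (C w + E v)" using w(1) C_square by metis
    then show "x \<in> D" using B_in_D by simp
  qed
qed

lemma sqrtT_sqrtT: "x \<in> D \<Longrightarrow> sqrtT (sqrtT x) = T x"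
proof -
  assume x: "x \<in> D"
  define y where "y = T x + x"
  have xy: "x = C (C y)" using D_eq_C_C[OF x] unfolding y_def .
  then have "sqrtT x = C (E y)" by (simp add: E_C_comm)
  then have "sqrtT (sqrtT x) = E (E y)" by simp
  also have "\<dots> = y - B y" by (rule E_square)
  also have "B y = x" using xy C_square by simp
  finally show ?thesis unfolding y_def by simp
qed

lemma E_C_square: "E (C (E (C x))) = B x - B (B x)"
proof -
  have "E (C (E (C x))) = E (E (C (C x)))" by (metis E_C_comm)
  then show ?thesis using E_square C_square by simp
qed

lemma hermitian_E_C: "hermitian (\<lambda>x. E (C x))"
  using hermitian_E hermitian_C E_C_comm by (simp add: hermitian_def)

lemma pos_contraction_B_minus_B_square: "pos_contraction (\<lambda>x. B x - B (B x))"
proof -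
  have EC_square: "hinner x (B x - B (B x)) = hinner (E (C x)) (E (C x))" for x
    using hermitian_E_C E_C_square by (simp add: hermitian_def)
  have "bounded_lin (\<lambda>x. B x - B (B x))"
    by (rule bounded_lin_diff_op[OF bounded_lin_B bounded_lin_comp[OF bounded_lin_B bounded_lin_B]])
  moreover have "hermitian (\<lambda>x. B x - B (B x))"
    using hermitian_B by (simp add: hermitian_def hinner_diff_left hinner_diff_right)
  moreover have "pos_semidef (\<lambda>x. B x - B (B x))"
    unfolding pos_semidef_def EC_square using hinner_self_Im hinner_nonneg by blast
  moreover have "Re (hinner x (B x - B (B x))) \<le> (hnorm x)^2" for x
  proof -
    have "Re (hinner x (B x - B (B x))) = (hnorm (E (C x)))^2" unfolding EC_square by (simp add: hnorm_sq)
    also have "\<dots> \<le> (hnorm x)^2" using norm_E_le[of "C x"] norm_C_le[of x] by (intro power_mono) auto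
    finally show ?thesis .
  qed
  ultimately show ?thesis unfolding pos_contraction_def by blast
qed

lemma E_C_eq_bsqrt: "E (C x) = bsqrt (\<lambda>x. B x - B (B x)) x"
proof (rule bsqrt_unique[OF pos_contraction_B_minus_B_square])
  show "bounded_lin (\<lambda>x. E (C x))" by (rule bounded_lin_comp[OF bounded_lin_E bounded_lin_C])
  show "hermitian (\<lambda>x. E (C x))" by (rule hermitian_E_C)
  show "pos_semidef (\<lambda>x. E (C x))" unfolding pos_semidef_def using pos_semidef_E_C by blast
  show "E (C (E (C x))) = B x - B (B x)" for x by (rule E_C_square)
qed

definition is_sqrt :: "'a set \<Rightarrow> ('a \<Rightarrow> 'a) \<Rightarrow> bool" where
  "is_sqrt D' S \<longleftrightarrow> self_adjoint D' S \<and> nonneg_op D' S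
      \<and> D = {x \<in> D'. S x \<in> D'} \<and> (\<forall>x\<in>D. S (S x) = T x) \<and> (\<forall>x. x \<notin> D' \<longrightarrow> S x = 0)"

lemma is_sqrt_sqrtT: "is_sqrt ran_C sqrtT"
  unfolding is_sqrt_def using self_adjoint_sqrtT nonneg_op_sqrtT D_eq_sqrtT_dom sqrtT_sqrtT sqrtT_outside by blast

end

text \<open>Any other square root \<open>S\<close> commutes with \<open>B = (T + 1)\<inverse>\<close>, so \<open>S B\<close> and \<open>E C\<close> are both
  positive square roots of the positive contraction \<open>B - B\<^sup>2\<close> and hence agree; this pins down \<open>S\<close>.\<close>

locale nonneg_sa_sqrt = nonneg_sa +
  fixes D' :: "'a set" and S :: "'a \<Rightarrow> 'a"
  assumes is_sqrt_S: "is_sqrt D' S"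
begin

lemma self_adjoint_S: "self_adjoint D' S" and nonneg_op_S: "nonneg_op D' S"
  and D_eq_S_dom: "D = {x \<in> D'. S x \<in> D'}" and S_S: "\<And>x. x \<in> D \<Longrightarrow> S (S x) = T x"
  and S_outside: "\<And>x. x \<notin> D' \<Longrightarrow> S x = 0"
  using is_sqrt_S unfolding is_sqrt_def by auto

lemma B_in_S_dom: "B y \<in> D'" and S_B_in_S_dom: "S (B y) \<in> D'"
  using D_eq_S_dom B_in_D by blast+

lemma B_S_comm:
  assumes y: "y \<in> D'"
  shows "B (S y) = S (B y)"
proof -
  have SSB: "S (S (B y)) = y - B y" using S_S[OF B_in_D] T_B by simp
  have "S (S (B y)) \<in> D'" unfolding SSB using csubspace_diff[OF self_adjoint_subspace[OF self_adjoint_S] y B_in_S_dom] .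
  then have SB_D: "S (B y) \<in> D" using D_eq_S_dom S_B_in_S_dom by blast
  have "T (S (B y)) = S (y - B y)" using S_S[OF SB_D] SSB by simp
  also have "\<dots> = S y - S (B y)" using self_adjoint_diff[OF self_adjoint_S y B_in_S_dom] .
  finally have "T (S (B y)) + S (B y) = S y" by simp
  then show ?thesis using B_T_plus[OF SB_D] by simp
qed

lemma S_sym: "u \<in> D' \<Longrightarrow> v \<in> D' \<Longrightarrow> hinner (S u) v = hinner u (S v)"
  by (rule self_adjoint_sym[OF self_adjoint_S])

lemma S_S_B: "S (S (B x)) = x - B x"
  using S_S[OF B_in_D] T_B by simp

lemma bounded_lin_S_B: "bounded_lin (\<lambda>x. S (B x))"
  unfolding bounded_lin_def
proof (intro conjI allI)
  show "S (B (x + y)) = S (B x) + S (B y)" for x y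
    using self_adjoint_add[OF self_adjoint_S B_in_S_dom B_in_S_dom] by (simp add: bounded_lin_add[OF bounded_lin_B])
  show "S (B (cscale c x)) = cscale c (S (B x))" for c x
    using self_adjoint_scale[OF self_adjoint_S B_in_S_dom] by (simp add: bounded_lin_scale[OF bounded_lin_B])
  have "(hnorm (S (B x)))^2 \<le> (2 * hnorm x)^2" for x
  proof -
    have "(hnorm (S (B x)))^2 = Re (hinner (B x) (x - B x))"
      using S_sym[OF B_in_S_dom S_B_in_S_dom] S_S_B by (simp add: hnorm_sq)
    also have "\<dots> \<le> hnorm (B x) * hnorm (x - B x)" by (rule Re_hinner_le_norms)
    also have "\<dots> \<le> hnorm x * (2 * hnorm x)"
      using pos_contraction_norm_le[OF pos_contraction_B, of x] hnorm_triangle[of x "- B x"] hnorm_minus[of "B x"]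
      by (intro mult_mono) auto
    also have "\<dots> \<le> (2 * hnorm x)^2" by (simp add: power2_eq_square)
    finally show ?thesis .
  qed
  then show "\<exists>K. \<forall>x. hnorm (S (B x)) \<le> K * hnorm x"
    by (metis power2_le_imp_le mult_nonneg_nonneg hnorm_nonneg zero_le_numeral)
qed

lemma hinner_S_B: "hinner x (S (B y)) = hinner (S (B x)) (S (S (B y))) + hinner (S (B x)) (B y)"
proof -
  have "hinner x (S (B y)) = hinner (T (B x) + B x) (S (B y))" using T_B_plus_B by simp
  also have "\<dots> = hinner (S (S (B x))) (S (B y)) + hinner (B x) (S (B y))"
    using S_S[OF B_in_D] by (simp add: hinner_add_left)
  finally show ?thesis using S_sym[OF S_B_in_S_dom S_B_in_S_dom] S_sym[OF B_in_S_dom B_in_S_dom] by simp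
qed

lemma hermitian_S_B: "hermitian (\<lambda>x. S (B x))"
  unfolding hermitian_def
proof (intro allI)
  fix x y
  have "hinner (S (B x)) y = hinner (S (B x)) (T (B y) + B y)" using T_B_plus_B by simp
  also have "\<dots> = hinner (S (B x)) (S (S (B y))) + hinner (S (B x)) (B y)"
    using S_S[OF B_in_D] by (simp add: hinner_add_right)
  finally show "hinner (S (B x)) y = hinner x (S (B y))" using hinner_S_B by simp
qed

lemma pos_semidef_S_B: "pos_semidef (\<lambda>x. S (B x))"
  unfolding pos_semidef_def
proof
  fix x
  have nonneg: "Im (hinner v (S v)) = 0 \<and> 0 \<le> Re (hinner v (S v))" if "v \<in> D'" for v
    using nonneg_op_S that by (simp add: nonneg_op_def)
  have "hinner (S (B x)) (B x) = cnj (hinner (B x) (S (B x)))" by (rule hinner_cnj)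
  then show "Im (hinner x (S (B x))) = 0 \<and> 0 \<le> Re (hinner x (S (B x)))"
    using hinner_S_B[of x x] nonneg[OF S_B_in_S_dom] nonneg[OF B_in_S_dom] by simp
qed

lemma S_B_eq_bsqrt: "S (B x) = bsqrt (\<lambda>x. B x - B (B x)) x"
proof (rule bsqrt_unique[OF pos_contraction_B_minus_B_square bounded_lin_S_B hermitian_S_B pos_semidef_S_B])
  show "S (B (S (B x))) = B x - B (B x)" for x
    using B_S_comm[OF B_in_S_dom] S_S[OF B_in_D] T_B by simp
qed

lemma S_eq_sqrtT:
  assumes y: "y \<in> D'"
  shows "y \<in> ran_C \<and> sqrtT y = S y"
proof -
  have "S (B y) = E (C y)" using S_B_eq_bsqrt E_C_eq_bsqrt by simp
  then have "C (C (S y)) = C (E y)" using C_square[of "S y"] B_S_comm[OF y] E_C_comm[of y] by simp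
  then have CS: "C (S y) = E y" by (rule C_inj)
  have "y = C (C y) + E (E y)" by (rule C_square_plus_E_square)
  also have "\<dots> = C (C y) + C (E (S y))" using CS[symmetric] E_C_comm by simp
  also have "\<dots> = C (C y + E (S y))" by (simp add: bounded_lin_add[OF bounded_lin_C])
  finally have yC: "y = C (C y + E (S y))" .
  have "B (S y) = E (C y)" using C_square[of "S y"] CS E_C_comm[of y] by simp
  then have "sqrtT y = S y" by (subst yC) (simp add: bounded_lin_add[OF bounded_lin_E] E_square)
  then show ?thesis using yC unfolding ran_C_def by (metis rangeI)
qed

lemma S_dom_eq_ran_C: "D' = ran_C"
proof
  show "D' \<subseteq> ran_C" using S_eq_sqrtT by blast
  show "ran_C \<subseteq> D'"
  proof
    fix y assume y: "y \<in> ran_C"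
    have "hinner (S x) y = hinner x (sqrtT y)" if x: "x \<in> D'" for x
      using S_eq_sqrtT[OF x] sqrtT_sym[OF _ y, of x] by simp
    then show "y \<in> D'" using self_adjoint_adjI[OF self_adjoint_S] by blast
  qed
qed

lemma S_eq_sqrtT_everywhere: "S = sqrtT"
proof
  fix x show "S x = sqrtT x"
  proof (cases "x \<in> D'")
    case True then show ?thesis using S_eq_sqrtT by simp
  next
    case False then show ?thesis using S_outside sqrtT_outside S_dom_eq_ran_C by simp
  qed
qed

end

context nonneg_sa begin

lemma is_sqrt_unique:
  assumes "is_sqrt D' S"
  shows "D' = ran_C \<and> S = sqrtT"
proof -
  interpret nonneg_sa_sqrt D T D' S
    by (rule nonneg_sa_sqrt.intro[OF nonneg_sa_axioms nonneg_sa_sqrt_axioms.intro[OF assms]])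
  show ?thesis using S_dom_eq_ran_C S_eq_sqrtT_everywhere by blast
qed

lemma op_sqrt_eq: "op_sqrt D T = (ran_C, sqrtT)"
  unfolding op_sqrt_def
  apply (rule the_equality)
  subgoal using is_sqrt_sqrtT unfolding is_sqrt_def by simp
  subgoal for p using is_sqrt_unique unfolding is_sqrt_def by (cases p) auto
  done

lemma Xnorm_eq: "Xnorm D T u = hnorm (sqrtT u + u)"
  unfolding Xnorm_def op_sqrt_eq by simp

lemma sqrtT_scale_all: "sqrtT (cscale c v) = cscale c (sqrtT v)"
proof (cases "v \<in> ran_C")
  case True then show ?thesis by (rule sqrtT_scale)
next
  case False
  show ?thesis
  proof (cases "c = 0")
    case True
    have "sqrtT 0 = 0" using sqrtT_C[of 0] bounded_lin_zero[OF bounded_lin_C] bounded_lin_zero[OF bounded_lin_E] by simp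
    then show ?thesis using True by simp
  next
    case c: False
    have "cscale c v \<notin> ran_C"
    proof
      assume "cscale c v \<in> ran_C"
      then have "cscale (1 / c) (cscale c v) \<in> ran_C" using csubspace_scale[OF csubspace_ran_C] by blast
      then show False using False c by (simp add: cscale_cscale cscale_one)
    qed
    then show ?thesis using False sqrtT_outside by simp
  qed
qed

lemma Xnorm_scale: "Xnorm D T (cscale c v) = cmod c * Xnorm D T v"
  unfolding Xnorm_eq sqrtT_scale_all cscale_add_right[symmetric] hnorm_scale ..

lemma Xnorm_nonneg: "0 \<le> Xnorm D T v" unfolding Xnorm_eq by simp

end

section \<open>Closed forms and the resolvent estimate\<close>

lemma closed_form_herm_form:
  assumes "closed_form X a"
  shows "herm_form X a"
  using assms unfolding closed_form_def by (intro herm_form.intro) (elim conjE, blast)+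

lemma form_hinner_cauchy:
  assumes x: "hcauchy x"
    and cauchy: "\<And>e. e > 0 \<Longrightarrow> \<exists>N. \<forall>m\<ge>N. \<forall>n\<ge>N. Re (a (x m - x n) (x m - x n)) < e"
  shows "\<forall>e::real>0. \<exists>N::nat. \<forall>m\<ge>N. \<forall>n\<ge>N.
    Re (a (x m - x n) (x m - x n)) + Re (hinner (x m - x n) (x m - x n)) < e"
proof (intro allI impI)
  fix e :: real assume e: "e > 0"
  obtain N1 where N1: "\<forall>m\<ge>N1. \<forall>n\<ge>N1. Re (a (x m - x n) (x m - x n)) < e / 2"
    using cauchy[of "e / 2"] e by auto
  have "sqrt (e / 2) > 0" using e by simp
  then obtain N2 where N2: "\<forall>m\<ge>N2. \<forall>n\<ge>N2. hnorm (x m - x n) < sqrt (e / 2)"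
    using x unfolding hcauchy_def by blast
  have "Re (hinner (x m - x n) (x m - x n)) < e / 2" if "m \<ge> N2" "n \<ge> N2" for m n
  proof -
    have "(hnorm (x m - x n))^2 < (sqrt (e / 2))^2" using N2 that by (intro power_strict_mono) auto
    then show ?thesis using e by (simp add: hnorm_sq)
  qed
  then show "\<exists>N. \<forall>m\<ge>N. \<forall>n\<ge>N. Re (a (x m - x n) (x m - x n)) + Re (hinner (x m - x n) (x m - x n)) < e"
    using N1 by (intro exI[of _ "max N1 N2"]) fastforce
qed

lemma closed_form_hlim:
  assumes cf: "closed_form X a" and x: "\<And>n. x n \<in> X" "hlim x l"
    and cauchy: "\<And>e. e > 0 \<Longrightarrow> \<exists>N. \<forall>m\<ge>N. \<forall>n\<ge>N. Re (a (x m - x n) (x m - x n)) < e"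
  shows "l \<in> X" and "(\<lambda>n. Re (a (x n) (x n))) \<longlonglongrightarrow> Re (a l l)"
proof -
  interpret A: herm_form X a by (rule closed_form_herm_form[OF cf])
  note form_cauchy = form_hinner_cauchy[where a = a, OF hlim_cauchy[OF x(2)] cauchy]
  have "\<forall>n. x n \<in> X" using x(1) by blast
  then obtain l' where l': "l' \<in> X"
    "\<forall>e::real>0. \<exists>N::nat. \<forall>n\<ge>N. Re (a (x n - l') (x n - l')) + Re (hinner (x n - l') (x n - l')) < e"
    using cf form_cauchy unfolding closed_form_def by blast
  have sn_sq: "(A.seminorm (x n - l'))^2 + (hnorm (x n - l'))^2
      = Re (a (x n - l') (x n - l')) + Re (hinner (x n - l') (x n - l'))" for n
    using A.seminorm_sq[OF A.dom_diff[OF x(1) l'(1)]] by (simp add: hnorm_sq)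
  have small: "\<exists>N. \<forall>n\<ge>N. A.seminorm (x n - l') < e \<and> hnorm (x n - l') < e" if e: "e > 0" for e
  proof -
    obtain N where N: "\<forall>n\<ge>N. (A.seminorm (x n - l'))^2 + (hnorm (x n - l'))^2 < e^2"
      using l'(2)[rule_format, of "e^2"] e unfolding sn_sq[symmetric] by auto
    have "A.seminorm (x n - l') < e \<and> hnorm (x n - l') < e" if "n \<ge> N" for n
    proof -
      have "(A.seminorm (x n - l'))^2 + (hnorm (x n - l'))^2 < e^2" using N that by blast
      then have "(A.seminorm (x n - l'))^2 < e^2" "(hnorm (x n - l'))^2 < e^2"
        using zero_le_power2[of "A.seminorm (x n - l')"] zero_le_power2[of "hnorm (x n - l')"] by linarith+
      then show ?thesis using e by (meson power2_less_imp_less less_imp_le)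
    qed
    then show ?thesis by blast
  qed
  have "hlim x l'" by (rule hlimI) (use small in blast)
  then have "l' = l" using x(2) by (rule hlim_unique)
  then show "l \<in> X" using l'(1) by simp
  have "(\<lambda>n. A.seminorm (x n - l')) \<longlonglongrightarrow> 0"
    by (rule LIMSEQ_I) (use small A.seminorm_nonneg[OF A.dom_diff[OF x(1) l'(1)]] in fastforce)
  then have "(\<lambda>n. A.seminorm (x n) - A.seminorm l') \<longlonglongrightarrow> 0"
  proof (rule tendsto_0_le[where K=1], intro always_eventually allI)
    fix n show "norm (A.seminorm (x n) - A.seminorm l') \<le> norm (A.seminorm (x n - l')) * 1"
      using A.seminorm_diff_triangle[OF x(1) l'(1)] A.seminorm_nonneg[OF A.dom_diff[OF x(1) l'(1)]] by simp
  qed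
  then have "(\<lambda>n. A.seminorm (x n)) \<longlonglongrightarrow> A.seminorm l'" using Lim_null by blast
  then have "(\<lambda>n. (A.seminorm (x n))^2) \<longlonglongrightarrow> (A.seminorm l')^2" by (rule tendsto_power)
  then show "(\<lambda>n. Re (a (x n) (x n))) \<longlonglongrightarrow> Re (a l l)"
    using A.seminorm_sq[OF x(1)] A.seminorm_sq[OF l'(1)] \<open>l' = l\<close> by simp
qed

lemma norm_add_sq_le: "(hnorm (p + q))^2 \<le> 2 * (hnorm p)^2 + 2 * (hnorm q)^2"
  using parallelogram[of p q] zero_le_power2[of "hnorm (p - q)"] by linarith

lemma dual_norm_bound:
  assumes X: "csubspace X" and N: "\<And>v. 0 \<le> N v" "\<And>c v. N (cscale c v) = cmod c * N v"
    and R: "bdd_lin_fun X N R"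
  shows dual_norm_nonneg: "0 \<le> dual_norm X N R"
    and dual_norm_le: "\<And>v. v \<in> X \<Longrightarrow> cmod (R v) \<le> dual_norm X N R * N v"
proof -
  define S where "S = {cmod (R v) | v. v \<in> X \<and> N v \<le> 1}"
  have dn: "dual_norm X N R = Sup S" unfolding S_def dual_norm_def ..
  have R_scale: "\<And>c v. v \<in> X \<Longrightarrow> R (cscale c v) = c * R v" using R unfolding bdd_lin_fun_def by blast
  obtain K where K: "\<And>v. v \<in> X \<Longrightarrow> cmod (R v) \<le> K * N v" using R unfolding bdd_lin_fun_def by blast
  have "0 \<in> X" using X by (rule csubspace_zero)
  then have "0 \<in> S" unfolding S_def using N(2)[of 0 0] R_scale[of 0 0] by force
  have S_bdd: "bdd_above S"
  proof (rule bdd_aboveI[of _ "\<bar>K\<bar>"])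
    fix s assume "s \<in> S"
    then obtain v where v: "s = cmod (R v)" "v \<in> X" "N v \<le> 1" unfolding S_def by auto
    have "K * N v \<le> \<bar>K\<bar> * 1" using v(3) N(1)[of v] by (metis abs_ge_self abs_ge_zero mult_mono)
    then show "s \<le> \<bar>K\<bar>" using K[OF v(2)] v(1) by simp
  qed
  have in_S: "cmod (R v) \<le> dual_norm X N R" if "v \<in> X" "N v \<le> 1" for v
    unfolding dn using that S_bdd by (intro cSup_upper) (auto simp: S_def)
  show nonneg: "0 \<le> dual_norm X N R" unfolding dn using \<open>0 \<in> S\<close> S_bdd by (rule cSup_upper)
  show "cmod (R v) \<le> dual_norm X N R * N v" if v: "v \<in> X" for v
  proof (cases "N v = 0")
    case True
    then have "cmod (R v) = 0" using K[OF v] by (simp add: antisym)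
    then show ?thesis using True by simp
  next
    case False
    then have p: "N v > 0" using N(1)[of v] by linarith
    define v' where "v' = cscale (complex_of_real (1 / N v)) v"
    have "v' \<in> X" unfolding v'_def by (rule csubspace_scale[OF X v])
    moreover have "N v' = 1" unfolding v'_def N(2) norm_of_real using p by simp
    ultimately have "cmod (R v') \<le> dual_norm X N R" by (simp add: in_S)
    moreover have "cmod (R v') = cmod (R v) / N v" unfolding v'_def using R_scale[OF v] p by (simp add: norm_divide)
    ultimately show ?thesis using p by (simp add: divide_le_eq mult.commute)
  qed
qed

lemma quadratic_le_imp_le:
  fixes t M :: real
  assumes quad: "t^2 \<le> 2 * M * t + 24 * M^2" and "0 \<le> M" "0 \<le> t"
  shows "t \<le> 8 * M"
proof (rule ccontr)
  assume "\<not> t \<le> 8 * M"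
  then have lt: "8 * M < t" by simp
  have "8 * M * t \<le> t * t" using lt \<open>0 \<le> t\<close> by (intro mult_right_mono) auto
  then have a: "8 * (M * t) \<le> t^2" by (simp add: power2_eq_square mult.assoc)
  have "(8 * M)^2 \<le> t^2" using lt \<open>0 \<le> M\<close> by (intro power_mono) auto
  then have b: "64 * M^2 \<le> t^2" by (simp add: power_mult_distrib)
  have "0 < t^2" using lt \<open>0 \<le> M\<close> by simp
  moreover have "t^2 \<le> 2 * (M * t) + 24 * M^2" using quad by (simp add: mult.assoc)
  ultimately show False using a b by linarith
qed

lemma resolvent_constant_le:
  fixes lam :: complex and d :: real
  assumes d: "0 < d" and far: "cmod lam + 1 \<le> 5 * max d (cmod (lam + 1))"
  shows "cmod (lam + 1) * (1 / d + (cmod lam + 1) / d^2) \<le> 6 * (max 1 (cmod (lam + 1) / d))^2"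
proof -
  define P where "P = max 1 (cmod (lam + 1) / d)"
  have P1: "1 \<le> P" and fP: "cmod (lam + 1) / d \<le> P" unfolding P_def by simp_all
  have "(cmod lam + 1) / d \<le> 5 * max d (cmod (lam + 1)) / d" using far d by (intro divide_right_mono) auto
  also have "\<dots> = 5 * P" unfolding P_def using d by (simp add: max_def field_simps)
  finally have f5: "(cmod lam + 1) / d \<le> 5 * P" .
  have "cmod (lam + 1) * (1 / d + (cmod lam + 1) / d^2)
      = cmod (lam + 1) / d + (cmod (lam + 1) / d) * ((cmod lam + 1) / d)"
    using d by (simp add: power2_eq_square field_simps)
  also have "\<dots> \<le> P + P * (5 * P)" using fP f5 P1 d by (intro add_mono mult_mono) auto
  also have "\<dots> \<le> 6 * P^2" using P1 by (simp add: power2_eq_square algebra_simps)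
  finally show ?thesis unfolding P_def .
qed

locale closed_form_op = nonneg_sa D T for D :: "'a::chilbert set" and T +
  fixes X :: "'a set" and a :: "'a \<Rightarrow> 'a \<Rightarrow> complex"
  assumes cf: "closed_form X a" and ao: "assoc_op X a D T"
begin

interpretation A: herm_form X a by (rule closed_form_herm_form[OF cf])

lemma D_subset_X: "D \<subseteq> X" using ao unfolding assoc_op_def by blast

lemma form_T: "u \<in> D \<Longrightarrow> v \<in> X \<Longrightarrow> a u v = hinner (T u) v"
  using ao unfolding assoc_op_def by blast

lemma form_D: "d \<in> D \<Longrightarrow> Re (a d d) = (hnorm (sqrtT d))^2"
proof -
  assume d: "d \<in> D"
  have dR: "d \<in> ran_C" "sqrtT d \<in> ran_C" using D_eq_sqrtT_dom d by auto
  have "a d d = hinner (T d) d" using form_T[OF d] D_subset_X d by blast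
  also have "\<dots> = hinner (sqrtT (sqrtT d)) d" using sqrtT_sqrtT[OF d] by simp
  also have "\<dots> = hinner (sqrtT d) (sqrtT d)" using sqrtT_sym[OF dR(2) dR(1)] .
  finally show ?thesis by (simp add: hnorm_sq)
qed

lemma ran_C_form:
  assumes l: "l \<in> ran_C"
  shows "l \<in> X \<and> Re (a l l) = (hnorm (sqrtT l))^2"
proof -
  obtain w where w: "l = C w" using l unfolding ran_C_def by auto
  obtain r where r: "\<forall>n. r n \<in> ran_C" "hlim r w" using dense_hlim_seq[OF dense_ran_C] by blast
  define x where "x n = C (r n)" for n
  have xD: "x n \<in> D" for n
  proof -
    obtain v where "r n = C v" using r(1) unfolding ran_C_def by auto
    then show ?thesis unfolding x_def using C_square B_in_D by simp
  qed
  have xX: "x n \<in> X" for n using xD D_subset_X by blast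
  have form_x: "Re (a (x n) (x n)) = (hnorm (E (r n)))^2" for n using form_D[OF xD] by (simp add: x_def)
  have form_diff: "Re (a (x m - x n) (x m - x n)) \<le> (hnorm (r m - r n))^2" for m n
  proof -
    have "x m - x n = C (r m - r n)" unfolding x_def by (simp add: bounded_lin_diff[OF bounded_lin_C])
    moreover have "Re (a (x m - x n) (x m - x n)) = (hnorm (sqrtT (x m - x n)))^2"
      using form_D[OF csubspace_diff[OF D_subspace xD xD]] .
    ultimately have "Re (a (x m - x n) (x m - x n)) = (hnorm (E (r m - r n)))^2" by simp
    also have "\<dots> \<le> (hnorm (r m - r n))^2" using norm_E_le by (intro power_mono) auto
    finally show ?thesis .
  qed
  have cauchy: "\<exists>N. \<forall>m\<ge>N. \<forall>n\<ge>N. Re (a (x m - x n) (x m - x n)) < e" if e: "e > 0" for e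
  proof -
    have "sqrt e > 0" using e by simp
    then obtain N where N: "\<forall>m\<ge>N. \<forall>n\<ge>N. hnorm (r m - r n) < sqrt e"
      using hlim_cauchy[OF r(2)] unfolding hcauchy_def by blast
    have "(hnorm (r m - r n))^2 < e" if "m \<ge> N" "n \<ge> N" for m n
      using power_strict_mono[of "hnorm (r m - r n)" "sqrt e" 2] N that e by simp
    then show ?thesis using form_diff by (meson le_less_trans)
  qed
  have "hlim x l" unfolding x_def w by (rule bounded_lin_hlim[OF bounded_lin_C r(2)])
  note lim = closed_form_hlim[OF cf xX this cauchy]
  have "(\<lambda>n. (hnorm (E (r n)))^2) \<longlonglongrightarrow> (hnorm (E w))^2"
    using hlim_norm[OF bounded_lin_hlim[OF bounded_lin_E r(2)]] by (rule tendsto_power)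
  moreover have "(\<lambda>n. (hnorm (E (r n)))^2) \<longlonglongrightarrow> Re (a l l)" using lim(2) unfolding form_x .
  ultimately have "Re (a l l) = (hnorm (E w))^2" using LIMSEQ_unique by blast
  then show ?thesis using lim(1) w by simp
qed

lemma norm_sqrtT_le_form: "v \<in> X \<Longrightarrow> (hnorm (sqrtT v))^2 \<le> Re (a v v)"
proof (cases "v \<in> ran_C")
  case True then show ?thesis using ran_C_form by simp
next
  case False
  assume "v \<in> X"
  then show ?thesis using False sqrtT_outside A.nonneg by simp
qed

lemma Xnorm_sq_le_form:
  assumes v: "v \<in> X"
  shows "(Xnorm D T v)^2 \<le> 2 * (Re (a v v) + (hnorm v)^2)"
proof -
  have h1: "(hnorm (sqrtT v + v))^2 \<le> 2 * (hnorm (sqrtT v))^2 + 2 * (hnorm v)^2" by (rule norm_add_sq_le)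
  have h2: "(hnorm (sqrtT v))^2 \<le> Re (a v v)" by (rule norm_sqrtT_le_form[OF v])
  have "(hnorm (sqrtT v + v))^2 \<le> 2 * Re (a v v) + 2 * (hnorm v)^2" using h1 h2 by linarith
  then show ?thesis unfolding Xnorm_eq by (simp add: distrib_left)
qed

lemma form_plus_norm_sq_le:
  assumes z: "z \<in> D" and d: "0 < d" "d * hnorm z \<le> hnorm (T z - cscale lam z)"
  shows "Re (a z z) + (hnorm z)^2 \<le> (hnorm (T z - cscale lam z))^2 * (1 / d + (cmod lam + 1) / d^2)"
proof -
  define u where "u = T z - cscale lam z"
  have z_le: "hnorm z \<le> hnorm u / d" using d unfolding u_def by (simp add: field_simps)
  have "a z z = hinner (u + cscale lam z) z" using form_T[OF z] D_subset_X z unfolding u_def by auto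
  then have "Re (a z z) = Re (hinner u z) + Re lam * (hnorm z)^2"
    by (simp add: hinner_add_left hinner_scale_left hinner_self_hnorm)
  also have "\<dots> \<le> hnorm u * hnorm z + cmod lam * (hnorm z)^2"
    using Re_hinner_le_norms[of u z] complex_Re_le_cmod[of lam] by (intro add_mono mult_right_mono) auto
  finally have "Re (a z z) + (hnorm z)^2 \<le> hnorm u * hnorm z + (cmod lam + 1) * (hnorm z)^2"
    by (simp add: algebra_simps)
  also have "\<dots> \<le> hnorm u * (hnorm u / d) + (cmod lam + 1) * (hnorm u / d)^2"
    using z_le by (intro add_mono mult_left_mono power_mono) auto
  also have "\<dots> = (hnorm u)^2 * (1 / d + (cmod lam + 1) / d^2)" using d by (simp add: power2_eq_square field_simps)
  finally show ?thesis unfolding u_def .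
qed

lemma solution_norm_sq_le:
  assumes lam: "lam \<in> resolvent_set D T" and nt: "(x0::'a) \<noteq> 0"
    and R: "bdd_lin_fun X (Xnorm D T) R" and u: "u \<in> X" and eq: "\<forall>v\<in>X. a u v - lam * hinner u v = R v"
  defines "d \<equiv> infdist lam (spectrum_op D T)"
  shows "(hnorm u)^2 \<le> 2 * (dual_norm X (Xnorm D T) R)^2 * (1 / d + (cmod lam + 1) / d^2)"
proof -
  define N where "N = dual_norm X (Xnorm D T) R"
  define \<Phi> where "\<Phi> = 1 / d + (cmod lam + 1) / d^2"
  define z where "z = res lam u"
  have z: "z \<in> D" "T z - cscale lam z = u" unfolding z_def using res_in_D[OF lam] T_res[OF lam] by auto
  have zX: "z \<in> X" using z(1) D_subset_X by blast
  have "hinner u u = hinner (T z) u - cnj lam * hinner z u"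
    using z(2)[symmetric] by (simp add: hinner_diff_left hinner_scale_left)
  also have "\<dots> = cnj (a u z - lam * hinner u z)"
    using form_T[OF z(1) u] A.conj_sym[OF u zX] hinner_cnj[of z u] by simp
  also have "\<dots> = cnj (R z)" using eq zX by simp
  finally have uu: "hinner u u = cnj (R z)" .
  have "(hnorm u)^2 = cmod (hinner u u)" unfolding hinner_self_hnorm norm_of_real by simp
  also have "\<dots> = cmod (R z)" unfolding uu by simp
  also have "\<dots> \<le> N * Xnorm D T z"
    unfolding N_def by (rule dual_norm_le[OF A.dom_subspace Xnorm_nonneg Xnorm_scale R zX])
  finally have u_sq: "(hnorm u)^2 \<le> N * Xnorm D T z" .
  have d: "0 < d" unfolding d_def by (rule infdist_spectrum_pos[OF lam spectrum_nonempty[OF nt]])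
  have "d * hnorm z \<le> hnorm (T z - cscale lam z)" unfolding d_def by (rule infdist_norm_le[OF lam nt z(1)])
  from form_plus_norm_sq_le[OF z(1) d this] have "Re (a z z) + (hnorm z)^2 \<le> (hnorm u)^2 * \<Phi>"
    unfolding z(2) \<Phi>_def .
  then have "2 * (Re (a z z) + (hnorm z)^2) \<le> 2 * ((hnorm u)^2 * \<Phi>)" by simp
  with Xnorm_sq_le_form[OF zX] have z_X: "(Xnorm D T z)^2 \<le> 2 * ((hnorm u)^2 * \<Phi>)" by (rule order_trans)
  have "(hnorm u)^2 * (hnorm u)^2 \<le> (N * Xnorm D T z)^2"
    using u_sq by (metis power2_eq_square power_mono zero_le_power2)
  also have "\<dots> \<le> N^2 * (2 * ((hnorm u)^2 * \<Phi>))" unfolding power_mult_distrib using z_X by (intro mult_left_mono) auto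
  finally have h: "(hnorm u)^2 * (hnorm u)^2 \<le> (2 * N^2 * \<Phi>) * (hnorm u)^2" by (simp add: algebra_simps)
  show ?thesis
  proof (cases "u = 0")
    case True
    then show ?thesis using d by simp
  next
    case False
    then have "0 < (hnorm u)^2" by simp
    with h show ?thesis unfolding N_def \<Phi>_def by (rule mult_right_le_imp_le)
  qed
qed

lemma form_plus_norm_sq_solution_le:
  assumes R: "bdd_lin_fun X (Xnorm D T) R" and u: "u \<in> X" and eq: "\<forall>v\<in>X. a u v - lam * hinner u v = R v"
  shows "Re (a u u) + (hnorm u)^2 \<le> dual_norm X (Xnorm D T) R * Xnorm D T u + cmod (lam + 1) * (hnorm u)^2"
proof -
  have "a u u - lam * hinner u u = R u" using eq u by blast
  then have "a u u = R u + lam * hinner u u" by (simp add: diff_eq_eq)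
  then have "Re (a u u) + (hnorm u)^2 = Re (R u) + Re (lam + 1) * (hnorm u)^2"
    by (simp add: hinner_self_hnorm algebra_simps)
  also have "\<dots> \<le> dual_norm X (Xnorm D T) R * Xnorm D T u + cmod (lam + 1) * (hnorm u)^2"
    using complex_Re_le_cmod[of "R u"] complex_Re_le_cmod[of "lam + 1"]
      dual_norm_le[OF A.dom_subspace Xnorm_nonneg Xnorm_scale R u]
    by (intro add_mono mult_right_mono) auto
  finally show ?thesis .
qed

lemma Xnorm_solution_le:
  assumes lam: "lam \<in> resolvent_set D T" and R: "bdd_lin_fun X (Xnorm D T) R" and u: "u \<in> X"
    and eq: "\<forall>v\<in>X. a u v - lam * hinner u v = R v"
  shows "Xnorm D T u \<le> 8 * max 1 (cmod (lam + 1) / infdist lam (spectrum_op D T)) * dual_norm X (Xnorm D T) R"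
proof -
  define N where "N = dual_norm X (Xnorm D T) R"
  define d where "d = infdist lam (spectrum_op D T)"
  define P where "P = max 1 (cmod (lam + 1) / d)"
  define t where "t = Xnorm D T u"
  have N0: "0 \<le> N" unfolding N_def by (rule dual_norm_nonneg[OF A.dom_subspace Xnorm_nonneg Xnorm_scale R])
  have P1: "1 \<le> P" unfolding P_def by simp
  have "t \<le> 8 * (N * P)"
  proof (cases "\<exists>x0::'a. x0 \<noteq> 0")
    case False
    then have "sqrtT u + u = 0" by blast
    then show ?thesis using N0 P1 unfolding t_def Xnorm_eq by simp
  next
    case True
    then obtain x0 :: 'a where nt: "x0 \<noteq> 0" by blast
    have d: "0 < d" unfolding d_def by (rule infdist_spectrum_pos[OF lam spectrum_nonempty[OF nt]])
    have form_u: "Re (a u u) + (hnorm u)^2 \<le> N * t + cmod (lam + 1) * (hnorm u)^2"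
      unfolding N_def t_def by (rule form_plus_norm_sq_solution_le[OF R u eq])
    have "cmod (lam + 1) * (hnorm u)^2 \<le> cmod (lam + 1) * (2 * N^2 * (1 / d + (cmod lam + 1) / d^2))"
      using solution_norm_sq_le[OF lam nt R u eq] unfolding N_def d_def by (intro mult_left_mono) auto
    also have "\<dots> = 2 * N^2 * (cmod (lam + 1) * (1 / d + (cmod lam + 1) / d^2))" by (simp add: mult_ac)
    also have "\<dots> \<le> 2 * N^2 * (6 * P^2)"
      using resolvent_constant_le[OF d[unfolded d_def] cmod_plus_1_le_infdist[OF spectrum_nonempty[OF nt]]]
      unfolding P_def d_def by (intro mult_left_mono) auto
    also have "\<dots> = 12 * (N * P)^2" by (simp add: power_mult_distrib)
    finally have u_sq: "cmod (lam + 1) * (hnorm u)^2 \<le> 12 * (N * P)^2" .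
    have "t^2 \<le> 2 * (Re (a u u) + (hnorm u)^2)" unfolding t_def by (rule Xnorm_sq_le_form[OF u])
    also have "\<dots> \<le> 2 * (N * t + cmod (lam + 1) * (hnorm u)^2)" using form_u by simp
    also have "\<dots> \<le> 2 * ((N * P) * t + 12 * (N * P)^2)"
      using N0 P1 Xnorm_nonneg[of u] u_sq unfolding t_def
      by (intro mult_left_mono add_mono) (auto simp: mult_le_cancel_left1 mult_right_mono)
    also have "\<dots> = 2 * (N * P) * t + 24 * (N * P)^2" by (simp add: algebra_simps)
    finally have "t^2 \<le> 2 * (N * P) * t + 24 * (N * P)^2" .
    moreover have "0 \<le> N * P" using N0 P1 by simp
    moreover have "0 \<le> t" unfolding t_def by (rule Xnorm_nonneg)
    ultimately show ?thesis by (rule quadratic_le_imp_le)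
  qed
  then show ?thesis unfolding t_def N_def P_def d_def by (simp add: mult_ac)
qed

end

theorem propositionD2:
  shows "\<exists>C>0. \<forall>X a D T lam R (u::'a::chilbert).
    closed_form X a \<and> assoc_op X a D T \<and> self_adjoint D T \<and> nonneg_op D T
    \<and> lam \<in> resolvent_set D T \<and> bdd_lin_fun X (Xnorm D T) R \<and> u \<in> X
    \<and> (\<forall>v\<in>X. a u v - lam * hinner u v = R v)
    \<longrightarrow> Xnorm D T u \<le> C * max 1 (cmod (lam + 1) / infdist lam (spectrum_op D T)) * dual_norm X (Xnorm D T) R"
proof (intro exI[of _ 8] conjI allI impI)
  show "(0::real) < 8" by simp
  fix X a D T lam R and u :: 'a
  assume h: "closed_form X a \<and> assoc_op X a D T \<and> self_adjoint D T \<and> nonneg_op D T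
    \<and> lam \<in> resolvent_set D T \<and> bdd_lin_fun X (Xnorm D T) R \<and> u \<in> X
    \<and> (\<forall>v\<in>X. a u v - lam * hinner u v = R v)"
  then have "closed_form_op D T X a" by unfold_locales auto
  then show "Xnorm D T u \<le> 8 * max 1 (cmod (lam + 1) / infdist lam (spectrum_op D T)) * dual_norm X (Xnorm D T) R"
    using closed_form_op.Xnorm_solution_le h by blast
qed

end
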